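(* For any $\mu^+_1,\mu^-_1,\mu^+_2,\mu^-_2\in\Lambda^+$ there is a unique $\mathbb{C}(v)$-algebra homomorphism $$\Delta^{\mathrm{rtt}}\colon U^{\mathrm{rtt}}_{-\mu^+_1-\mu^+_2,-\mu^-_1-\mu^-_2}(L\mathfrak{gl}_n)\to U^{\mathrm{rtt}}_{-\mu^+_1,-\mu^-_1}(L\mathfrak{gl}_n)\otimes U^{\mathrm{rtt}}_{-\mu^+_2,-\mu^-_2}(L\mathfrak{gl}_n)$$ with $\Delta^{\mathrm{rtt}}(T^\pm(z))=T^\pm(z)\otimes T^\pm(z)$, i.e. $t^\pm_{ij}(z)\mapsto\sum_{k=1}^nt^\pm_{ik}(z)\otimes t^\pm_{kj}(z)$.
   Context: Let $n\ge2$, $\Lambda=\bigoplus_{j=1}^n\mathbb{Z}\epsilon_j$, $\epsilon^\vee_j$ dual basis, $\alpha^\vee_i=\epsilon^\vee_i-\epsilon^\vee_{i+1}$, $\Lambda^+=\{\nu:\alpha^\vee_i(\nu)\ge0\ \forall 1\le i<n\}$. $R_{\mathrm{trig}}(z,w)=(vz-v^{-1}w)\sum_iE_{ii}\otimes E_{ii}+(z-w)\sum_{i\ne j}E_{ii}\otimes E_{jj}+(v-v^{-1})z\sum_{i<j}E_{ij}\otimes E_{ji}+(v-v^{-1})w\sum_{i>j}E_{ij}\otimes E_{ji}$. For $\mu^\pm\in\Lambda^+$ put $c^\pm_i:=\epsilon^\vee_i(\mu^\pm)$. $U^{\mathrm{rtt}}_{-\mu^+,-\mu^-}(L\mathfrak{gl}_n)$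 is the associative $\mathbb{C}(v)$-algebra generated by $t^\pm_{ij}[\pm r]$ ($1\le i,j\le n$, $r\in\mathbb{Z}$) and elements $(g^\pm_{i,\mp c^\pm_i})^{-1}$ ($1\le i\le n$), with $T^\pm(z)=\sum_{i,j}t^\pm_{ij}(z)\otimes E_{ij}$, $t^\pm_{ij}(z)=\sum_{r\in\mathbb{Z}}t^\pm_{ij}[\pm r]z^{\mp r}$, subject to: (1) $R_{\mathrm{trig}}(z,w)T^\epsilon_1(z)T^{\epsilon'}_2(w)=T^{\epsilon'}_2(w)T^\epsilon_1(z)R_{\mathrm{trig}}(z,w)$ for all $\epsilon,\epsilon'\in\{\pm\}$; (2) the relations expressing that $T^\pm(z)=F^\pm(z)G^\pm(z)E^\pm(z)$ with $F^\pm$ lower unitriangular with entries $f^\pm_{ji}(z)$, $G^\pm=\mathrm{diag}(g^\pm_i(z))$, $E^\pm$ upper unitriangular with entries $e^\pm_{ij}(z)$, where $e^+_{ij}(z)=\sum_{r\ge0}e^{(r)}_{ij}z^{-r}$, $e^-_{ij}(z)=\sum_{r<0}e^{(r)}_{ij}z^{-r}$, $f^+_{ji}(z)=\sum_{r>0}f^{(r)}_{ji}z^{-r}$, $f^-_{ji}(z)=\sum_{r\le0}f^{(r)}_{ji}z^{-r}$, $g^+_i(z)=\sum_{r\ge-c^+_i}g^+_{i,r}z^{-r}$, $g^-_i(z)=\sum_{r\ge-c^-_i}g^-_{i,-r}z^r$, for some elements $e^{(r)}_{ij},f^{(r)}_{ji},g^\pm_{i,\pm r}$ of the algebra; (3)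 $g^\pm_{i,\mp c^\pm_i}(g^\pm_{i,\mp c^\pm_i})^{-1}=(g^\pm_{i,\mp c^\pm_i})^{-1}g^\pm_{i,\mp c^\pm_i}=1$. *)

theory Defs
  imports "HOL-Computational_Algebra.Polynomial" "HOL-Computational_Algebra.Fraction_Field"
begin

type_synonym K = "complex poly fract"

definition vv :: K where "vv = Fract [:0, 1:] 1"

datatype 'x fexpr = Gen 'x | Sc K | Add "'x fexpr" "'x fexpr"
  | Mul "'x fexpr" "'x fexpr" | Neg "'x fexpr"

inductive eqv :: "('x fexpr \<times> 'x fexpr) set \<Rightarrow> 'x fexpr \<Rightarrow> 'x fexpr \<Rightarrow> bool"
  for R where
  rel: "(a, b) \<in> R \<Longrightarrow> eqv R a b"
| refl: "eqv R a a"
| sym: "eqv R a b \<Longrightarrow> eqv R b a"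
| trans: "eqv R a b \<Longrightarrow> eqv R b c \<Longrightarrow> eqv R a c"
| add_cong: "eqv R a a' \<Longrightarrow> eqv R b b' \<Longrightarrow> eqv R (Add a b) (Add a' b')"
| mul_cong: "eqv R a a' \<Longrightarrow> eqv R b b' \<Longrightarrow> eqv R (Mul a b) (Mul a' b')"
| neg_cong: "eqv R a a' \<Longrightarrow> eqv R (Neg a) (Neg a')"
| add_assoc: "eqv R (Add (Add a b) c) (Add a (Add b c))"
| add_comm: "eqv R (Add a b) (Add b a)"
| add_zero: "eqv R (Add a (Sc 0)) a"
| add_neg: "eqv R (Add a (Neg a)) (Sc 0)"
| mul_assoc: "eqv R (Mul (Mul a b) c) (Mul a (Mul b c))"
| mul_one_l: "eqv R (Mul (Sc 1) a) a"
| mul_one_r: "eqv R (Mul a (Sc 1)) a"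
| distr_l: "eqv R (Mul a (Add b c)) (Add (Mul a b) (Mul a c))"
| distr_r: "eqv R (Mul (Add a b) c) (Add (Mul a c) (Mul b c))"
| sc_add: "eqv R (Add (Sc x) (Sc y)) (Sc (x + y))"
| sc_mul: "eqv R (Mul (Sc x) (Sc y)) (Sc (x * y))"
| sc_central: "eqv R (Mul (Sc x) a) (Mul a (Sc x))"

primrec subst :: "('x \<Rightarrow> 'y fexpr) \<Rightarrow> 'x fexpr \<Rightarrow> 'y fexpr" where
  "subst f (Gen x) = f x"
| "subst f (Sc k) = Sc k"
| "subst f (Add a b) = Add (subst f a) (subst f b)"
| "subst f (Mul a b) = Mul (subst f a) (subst f b)"
| "subst f (Neg a) = Neg (subst f a)"

primrec gens :: "'x fexpr \<Rightarrow> 'x set" where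
  "gens (Gen x) = {x}"
| "gens (Sc k) = {}"
| "gens (Add a b) = gens a \<union> gens b"
| "gens (Mul a b) = gens a \<union> gens b"
| "gens (Neg a) = gens a"

definition esum :: "'x fexpr list \<Rightarrow> 'x fexpr" where
  "esum xs = foldr Add xs (Sc 0)"

text \<open>A K-algebra homomorphism from the algebra presented by (X, R) to the one
  presented by (Y, S), given by the images of the generators.\<close>

definition is_hom ::
  "'x set \<Rightarrow> ('x fexpr \<times> 'x fexpr) set \<Rightarrow> 'y set \<Rightarrow> ('y fexpr \<times> 'y fexpr) set
   \<Rightarrow> ('x \<Rightarrow> 'y fexpr) \<Rightarrow> bool" where
  "is_hom X R Y S \<phi> \<longleftrightarrow>
     (\<forall>x\<in>X. gens (\<phi> x) \<subseteq> Y) \<and> (\<forall>(a, b)\<in>R. eqv S (subst \<phi> a) (subst \<phi> b))"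

definition tens_gens :: "'x set \<Rightarrow> 'y set \<Rightarrow> ('x + 'y) set" where
  "tens_gens X Y = Inl ` X \<union> Inr ` Y"

definition tens_rels ::
  "'x set \<Rightarrow> ('x fexpr \<times> 'x fexpr) set \<Rightarrow> 'y set \<Rightarrow> ('y fexpr \<times> 'y fexpr) set
   \<Rightarrow> (('x + 'y) fexpr \<times> ('x + 'y) fexpr) set" where
  "tens_rels X R Y S =
     (\<lambda>(a, b). (map_fexpr Inl a, map_fexpr Inl b)) ` R
   \<union> (\<lambda>(a, b). (map_fexpr Inr a, map_fexpr Inr b)) ` S
   \<union> {(Mul (Gen (Inl x)) (Gen (Inr y)), Mul (Gen (Inr y)) (Gen (Inl x))) | x y. x \<in> X \<and> y \<in> Y}"

text \<open>The boolean is the sign (True = +).  All integer indices m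
  mean "coefficient of z^(-m)":
  TG s i j m = t^s_ij coefficient of z^(-m);
  EG i j r = e^(r)_ij (i<j);  FG j i r = f^(r)_ji (j>i);
  GG s i m = coefficient of z^(-m) in g^s_i(z);
  GI s i = (g^s_{i,-+c^s_i})^(-1).\<close>

datatype gen = TG bool nat nat int | EG nat nat int | FG nat nat int
  | GG bool nat int | GI bool nat

definition dominant :: "nat \<Rightarrow> (nat \<Rightarrow> int) \<Rightarrow> bool" where
  "dominant n c \<longleftrightarrow> (\<forall>i. 1 \<le> i \<and> i < n \<longrightarrow> c (Suc i) \<le> c i)"

definition rtt_gens :: "nat \<Rightarrow> (nat \<Rightarrow> int) \<Rightarrow> (nat \<Rightarrow> int) \<Rightarrow> gen set" where
  "rtt_gens n cp cm =
     {TG s i j m | s i j m. i \<in> {1..n} \<and> j \<in> {1..n}}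
   \<union> {EG i j r | i j r. 1 \<le> i \<and> i < j \<and> j \<le> n}
   \<union> {FG j i r | j i r. 1 \<le> i \<and> i < j \<and> j \<le> n}
   \<union> {GG True i m | i m. i \<in> {1..n} \<and> - cp i \<le> m}
   \<union> {GG False i m | i m. i \<in> {1..n} \<and> m \<le> cm i}
   \<union> {GI s i | s i. i \<in> {1..n}}"

text \<open>Coefficients of z^(-m) of the entries of F^s, G^s, E^s (zero outside the
  prescribed supports; diagonal entries of F, E equal 1).\<close>

definition fco :: "bool \<Rightarrow> nat \<Rightarrow> nat \<Rightarrow> int \<Rightarrow> gen fexpr" where
  "fco s i l m = (if l = i then (if m = 0 then Sc 1 else Sc 0)
     else if l < i \<and> (if s then 0 < m else m \<le> 0) then Gen (FG i l m) else Sc 0)"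

definition eco :: "bool \<Rightarrow> nat \<Rightarrow> nat \<Rightarrow> int \<Rightarrow> gen fexpr" where
  "eco s l j m = (if l = j then (if m = 0 then Sc 1 else Sc 0)
     else if l < j \<and> (if s then 0 \<le> m else m < 0) then Gen (EG l j m) else Sc 0)"

definition gco :: "(nat \<Rightarrow> int) \<Rightarrow> (nat \<Rightarrow> int) \<Rightarrow> bool \<Rightarrow> nat \<Rightarrow> int \<Rightarrow> gen fexpr" where
  "gco cp cm s i m = (if s then (if - cp i \<le> m then Gen (GG True i m) else Sc 0)
     else (if m \<le> cm i then Gen (GG False i m) else Sc 0))"

text \<open>Coefficient of z^(-m) in (F^s G^s E^s)_ij; the box [-N..N]^2 contains all
  (a,b) with nonzero summands.\<close>

definition gauss_coeff ::
  "(nat \<Rightarrow> int) \<Rightarrow> (nat \<Rightarrow> int) \<Rightarrow> bool \<Rightarrow> nat \<Rightarrow> nat \<Rightarrow> int \<Rightarrow> gen fexpr" where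
  "gauss_coeff cp cm s i j m = esum
     [Mul (Mul (fco s i l a) (gco cp cm s l b)) (eco s l j (m - a - b)).
        l \<leftarrow> [1..<Suc (min i j)],
        a \<leftarrow> [- (\<bar>m\<bar> + \<bar>cp l\<bar> + \<bar>cm l\<bar>) .. \<bar>m\<bar> + \<bar>cp l\<bar> + \<bar>cm l\<bar>],
        b \<leftarrow> [- (\<bar>m\<bar> + \<bar>cp l\<bar> + \<bar>cm l\<bar>) .. \<bar>m\<bar> + \<bar>cp l\<bar> + \<bar>cm l\<bar>]]"

text \<open>R_trig(z,w) = sum over (i,j,k,l) of (alpha z + beta w) E_ij (x) E_kl;
  rcoef i j k l = (alpha, beta).\<close>

definition rcoef :: "nat \<Rightarrow> nat \<Rightarrow> nat \<Rightarrow> nat \<Rightarrow> K \<times> K" where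
  "rcoef i j k l =
     (if i = j \<and> k = l then (if i = k then (vv, - inverse vv) else (1, -1))
      else if j = k \<and> l = i \<and> i \<noteq> j then
        (if i < j then (vv - inverse vv, 0) else (0, vv - inverse vv))
      else (0, 0))"

definition tco :: "bool \<Rightarrow> nat \<Rightarrow> nat \<Rightarrow> int \<Rightarrow> gen fexpr" where
  "tco s i j m = Gen (TG s i j m)"

text \<open>Coefficient of z^(-a) w^(-b) in the ((i,k),(j,l)) entry of
  R(z,w) T^s_1(z) T^s'_2(w), resp. T^s'_2(w) T^s_1(z) R(z,w).\<close>

definition rtt_lhs :: "nat \<Rightarrow> bool \<Rightarrow> bool \<Rightarrow> nat \<Rightarrow> nat \<Rightarrow> nat \<Rightarrow> nat \<Rightarrow> int \<Rightarrow> int \<Rightarrow> gen fexpr" where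
  "rtt_lhs n s s' i k j l a b = esum
     [Add (Mul (Sc (fst (rcoef i p k q))) (Mul (tco s p j (a + 1)) (tco s' q l b)))
          (Mul (Sc (snd (rcoef i p k q))) (Mul (tco s p j a) (tco s' q l (b + 1)))).
        p \<leftarrow> [1..<Suc n], q \<leftarrow> [1..<Suc n]]"

definition rtt_rhs :: "nat \<Rightarrow> bool \<Rightarrow> bool \<Rightarrow> nat \<Rightarrow> nat \<Rightarrow> nat \<Rightarrow> nat \<Rightarrow> int \<Rightarrow> int \<Rightarrow> gen fexpr" where
  "rtt_rhs n s s' i k j l a b = esum
     [Add (Mul (Sc (fst (rcoef p j q l))) (Mul (tco s' k q b) (tco s i p (a + 1))))
          (Mul (Sc (snd (rcoef p j q l))) (Mul (tco s' k q (b + 1)) (tco s i p a))).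
        p \<leftarrow> [1..<Suc n], q \<leftarrow> [1..<Suc n]]"

definition rtt_rels :: "nat \<Rightarrow> (nat \<Rightarrow> int) \<Rightarrow> (nat \<Rightarrow> int) \<Rightarrow> (gen fexpr \<times> gen fexpr) set" where
  "rtt_rels n cp cm =
     {(rtt_lhs n s s' i k j l a b, rtt_rhs n s s' i k j l a b) | s s' i k j l a b.
        i \<in> {1..n} \<and> k \<in> {1..n} \<and> j \<in> {1..n} \<and> l \<in> {1..n}}
   \<union> {(Gen (TG s i j m), gauss_coeff cp cm s i j m) | s i j m. i \<in> {1..n} \<and> j \<in> {1..n}}
   \<union> {(Mul (Gen (GG True i (- cp i))) (Gen (GI True i)), Sc 1) | i. i \<in> {1..n}}
   \<union> {(Mul (Gen (GI True i)) (Gen (GG True i (- cp i))), Sc 1) | i. i \<in> {1..n}}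
   \<union> {(Mul (Gen (GG False i (cm i))) (Gen (GI False i)), Sc 1) | i. i \<in> {1..n}}
   \<union> {(Mul (Gen (GI False i)) (Gen (GG False i (cm i))), Sc 1) | i. i \<in> {1..n}}"

text \<open>The coproduct condition Delta(t^s_ij[m]) = sum_k sum_r t^s_ik[r] (x) t^s_kj[m-r]
  (infinite sum in r, interpreted as: partial sums over [-N..N] eventually equal).\<close>

definition delta_cond ::
  "nat \<Rightarrow> ((gen + gen) fexpr \<times> (gen + gen) fexpr) set \<Rightarrow> (gen \<Rightarrow> (gen + gen) fexpr) \<Rightarrow> bool" where
  "delta_cond n S \<phi> \<longleftrightarrow>
     (\<forall>s i j m. i \<in> {1..n} \<and> j \<in> {1..n} \<longrightarrow>
        (\<exists>N0::int. \<forall>N\<ge>N0. eqv S (\<phi> (TG s i j m))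
           (esum [Mul (Gen (Inl (TG s i k r))) (Gen (Inr (TG s k j (m - r)))).
                    k \<leftarrow> [1..<Suc n], r \<leftarrow> [-N..N]])))"

end

(*
  Work in the quotient of the free algebra on the generators of both tensor factors by the
  relations of the tensor product, and regard the generating series of each factor as Laurent
  series over this ring. The Gauss relations say T_a = F_a G_a E_a for a = 1, 2. The matrix
  product T = T_1 T_2 has the truncated convolutions of delta_cond as coefficients, and it
  satisfies the RTT relation because the entries of T_1 commute with those of T_2. For the Gauss
  relation write T = F_1 G_1 (E_1 F_2) G_2 E_2: the middle matrix is unitriangular to leading
  order, so iterated Schur complements give it a Gauss decomposition F' G' E' with invertible
  pivots, and T = (F_1 G_1 F' G_1^-1) (G_1 G' G_2) (G_2^-1 E' G_2 E_2). Dominance of the coweights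
  keeps these factors within the supports prescribed for f, g and e, which defines the images of
  all generators. Uniqueness: the images of the t's are prescribed, and a Gauss decomposition
  with invertible diagonal is unique.
*)

theory Submission
  imports Defs "HOL-Computational_Algebra.Formal_Laurent_Series"
begin

unbundle fps_syntax

definition ideal_cong :: "'r::ring_1 set \<Rightarrow> 'r \<Rightarrow> 'r \<Rightarrow> bool" where
  "ideal_cong I x y \<longleftrightarrow> x - y \<in> I"

locale two_sided_ideal =
  fixes I :: "'r::ring_1 set"
  assumes zero_in: "0 \<in> I"
    and add_in: "x \<in> I \<Longrightarrow> y \<in> I \<Longrightarrow> x + y \<in> I"
    and neg_in: "x \<in> I \<Longrightarrow> - x \<in> I"
    and lmul_in: "x \<in> I \<Longrightarrow> a * x \<in> I"
    and rmul_in: "x \<in> I \<Longrightarrow> x * a \<in> I"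
begin

lemma sum_in: "(\<And>i. i \<in> A \<Longrightarrow> f i \<in> I) \<Longrightarrow> sum f A \<in> I"
  by (induction A rule: infinite_finite_induct) (auto intro: zero_in add_in)

lemma ideal_cong_refl[simp]: "ideal_cong I x x" by (simp add: ideal_cong_def zero_in)
lemma ideal_cong_sym: "ideal_cong I x y \<Longrightarrow> ideal_cong I y x"
  unfolding ideal_cong_def using neg_in[of "x-y"] by simp
lemma ideal_cong_trans[trans]: "ideal_cong I x y \<Longrightarrow> ideal_cong I y z \<Longrightarrow> ideal_cong I x z"
  unfolding ideal_cong_def using add_in[of "x-y" "y-z"] by simp
lemma ideal_cong_trans_eq1[trans]: "x = y \<Longrightarrow> ideal_cong I y z \<Longrightarrow> ideal_cong I x z" by simp
lemma ideal_cong_trans_eq2[trans]: "ideal_cong I x y \<Longrightarrow> y = z \<Longrightarrow> ideal_cong I x z" by simp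
lemma ideal_cong_add: "ideal_cong I x x' \<Longrightarrow> ideal_cong I y y' \<Longrightarrow> ideal_cong I (x + y) (x' + y')"
  unfolding ideal_cong_def using add_in[of "x-x'" "y-y'"] by (simp add: algebra_simps)
lemma ideal_cong_uminus: "ideal_cong I x x' \<Longrightarrow> ideal_cong I (- x) (- x')"
  unfolding ideal_cong_def using neg_in[of "x-x'"] by (simp add: algebra_simps)
lemma ideal_cong_diff: "ideal_cong I x x' \<Longrightarrow> ideal_cong I y y' \<Longrightarrow> ideal_cong I (x - y) (x' - y')"
  using ideal_cong_add[of x x' "-y" "-y'"] ideal_cong_uminus[of y y'] by simp
lemma ideal_cong_mult: "ideal_cong I x x' \<Longrightarrow> ideal_cong I y y' \<Longrightarrow> ideal_cong I (x * y) (x' * y')"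
proof -
  assume a: "ideal_cong I x x'" "ideal_cong I y y'"
  have "x * y - x' * y' = (x - x') * y + x' * (y - y')" by (simp add: algebra_simps)
  moreover have "(x - x') * y \<in> I" "x' * (y - y') \<in> I"
    using a rmul_in lmul_in unfolding ideal_cong_def by auto
  ultimately show ?thesis using add_in unfolding ideal_cong_def by metis
qed
lemma ideal_cong_mult_left: "ideal_cong I y y' \<Longrightarrow> ideal_cong I (x * y) (x * y')" by (rule ideal_cong_mult) simp_all
lemma ideal_cong_mult_right: "ideal_cong I x x' \<Longrightarrow> ideal_cong I (x * y) (x' * y)" by (rule ideal_cong_mult) simp_all
lemma ideal_cong_sum: "(\<And>i. i \<in> A \<Longrightarrow> ideal_cong I (f i) (g i)) \<Longrightarrow> ideal_cong I (sum f A) (sum g A)"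
  unfolding ideal_cong_def by (simp add: sum_subtractf[symmetric] sum_in)

lemma ideal_cong_cancel_right:
  assumes "ideal_cong I (a * g) (b * g)" "ideal_cong I (g * h) 1"
  shows "ideal_cong I a b"
proof -
  have "ideal_cong I a (a * (g * h))" using ideal_cong_mult_left[OF ideal_cong_sym[OF assms(2)], of a] by simp
  also have "a * (g * h) = (a * g) * h" by (simp add: mult.assoc)
  also have "ideal_cong I \<dots> ((b * g) * h)" by (rule ideal_cong_mult_right[OF assms(1)])
  also have "(b * g) * h = b * (g * h)" by (simp add: mult.assoc)
  also have "ideal_cong I \<dots> (b * 1)" by (rule ideal_cong_mult_left[OF assms(2)])
  finally show ?thesis by simp
qed

lemma ideal_cong_cancel_left:
  assumes "ideal_cong I (g * a) (g * b)" "ideal_cong I (h * g) 1"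
  shows "ideal_cong I a b"
proof -
  have "ideal_cong I a ((h * g) * a)" using ideal_cong_mult_right[OF ideal_cong_sym[OF assms(2)], of a] by simp
  also have "(h * g) * a = h * (g * a)" by (simp add: mult.assoc)
  also have "ideal_cong I \<dots> (h * (g * b))" by (rule ideal_cong_mult_left[OF assms(1)])
  also have "h * (g * b) = (h * g) * b" by (simp add: mult.assoc)
  also have "ideal_cong I \<dots> (1 * b)" by (rule ideal_cong_mult_right[OF assms(2)])
  finally show ?thesis by simp
qed

lemma ideal_cong_inverse_mult:
  assumes "ideal_cong I (a * x) 1" "ideal_cong I (x * a) 1" "ideal_cong I (b * y) 1" "ideal_cong I (y * b) 1"
  shows "ideal_cong I ((a * b) * (y * x)) 1" "ideal_cong I ((y * x) * (a * b)) 1"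
proof -
  have "(a * b) * (y * x) = a * (b * y) * x" by (simp add: mult.assoc)
  also have "ideal_cong I \<dots> (a * 1 * x)" by (intro ideal_cong_mult_left ideal_cong_mult_right assms(3))
  also have "a * 1 * x = a * x" by simp
  also have "ideal_cong I \<dots> 1" by (rule assms(1))
  finally show "ideal_cong I ((a * b) * (y * x)) 1" .
  have "(y * x) * (a * b) = y * (x * a) * b" by (simp add: mult.assoc)
  also have "ideal_cong I \<dots> (y * 1 * b)" by (intro ideal_cong_mult_left ideal_cong_mult_right assms(2))
  also have "y * 1 * b = y * b" by simp
  also have "ideal_cong I \<dots> 1" by (rule assms(4))
  finally show "ideal_cong I ((y * x) * (a * b)) 1" .
qed

lemma ideal_cong_inverse_unique:
  assumes "ideal_cong I (y * g) 1" "ideal_cong I g' g" "ideal_cong I (g' * u) 1"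
  shows "ideal_cong I u y"
proof -
  have "ideal_cong I u ((y * g) * u)" using ideal_cong_mult_right[OF ideal_cong_sym[OF assms(1)], of u] by simp
  also have "(y * g) * u = y * (g * u)" by (simp add: mult.assoc)
  also have "ideal_cong I \<dots> (y * (g' * u))" by (intro ideal_cong_mult_left ideal_cong_mult_right ideal_cong_sym[OF assms(2)])
  also have "ideal_cong I \<dots> (y * 1)" by (rule ideal_cong_mult_left[OF assms(3)])
  finally show ?thesis by simp
qed

end

lemma eqv_mono: "eqv R a b \<Longrightarrow> R \<subseteq> R' \<Longrightarrow> eqv R' a b"
  by (induction rule: eqv.induct) (auto intro: eqv.intros)

lemma eqv_subst:
  assumes "eqv R a b" "\<And>x y. (x, y) \<in> R \<Longrightarrow> eqv R' (subst f x) (subst f y)"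
  shows "eqv R' (subst f a) (subst f b)"
  using assms by (induction rule: eqv.induct) (auto intro: eqv.intros)

lemma equivp_eqv: "equivp (eqv R)"
  by (rule equivpI) (auto simp: reflp_def symp_def transp_def intro: eqv.intros)

lemma gens_esum: "gens (esum xs) = \<Union> (gens ` set xs)"
  by (induction xs) (auto simp: esum_def)

lemma gens_map: "gens (map_fexpr f a) = f ` gens a"
  by (induction a) auto

primrec fexpr_eval :: "(K \<Rightarrow> 'a::ring_1) \<Rightarrow> ('x \<Rightarrow> 'a) \<Rightarrow> 'x fexpr \<Rightarrow> 'a" where
  "fexpr_eval s w (Gen x) = w x"
| "fexpr_eval s w (Sc k) = s k"
| "fexpr_eval s w (Add a b) = fexpr_eval s w a + fexpr_eval s w b"
| "fexpr_eval s w (Mul a b) = fexpr_eval s w a * fexpr_eval s w b"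
| "fexpr_eval s w (Neg a) = - fexpr_eval s w a"

definition central_hom :: "(K \<Rightarrow> 'a::ring_1) \<Rightarrow> bool" where
  "central_hom s \<longleftrightarrow> (\<forall>x y. s (x + y) = s x + s y) \<and> (\<forall>x y. s (x * y) = s x * s y)
     \<and> s 0 = 0 \<and> s 1 = 1 \<and> (\<forall>k a. s k * a = a * s k)"

lemma central_homD:
  assumes "central_hom s"
  shows "s (x + y) = s x + s y" "s (x * y) = s x * s y" "s 0 = 0" "s 1 = 1" "s k * a = a * s k"
  using assms unfolding central_hom_def by blast+

lemma fexpr_eval_eqv:
  assumes "eqv R a b" "\<And>x y. (x, y) \<in> R \<Longrightarrow> fexpr_eval s w x = fexpr_eval s w y" "central_hom s"
  shows "fexpr_eval s w a = fexpr_eval s w b"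
  using assms(1)
proof (induction rule: eqv.induct)
  case (rel a b) then show ?case by (rule assms(2))
next
  case (add_assoc a b c) then show ?case by (simp add: add.assoc)
next
  case (add_comm a b) then show ?case by (simp add: add.commute)
next
  case (mul_assoc a b c) then show ?case by (simp add: mult.assoc)
next
  case (distr_l a b c) then show ?case by (simp add: distrib_left)
next
  case (distr_r a b c) then show ?case by (simp add: distrib_right)
next
  case (add_zero a) then show ?case using central_homD(3)[OF assms(3)] by simp
next
  case (add_neg a) then show ?case using central_homD(3)[OF assms(3)] by simp
next
  case (mul_one_l a) then show ?case using central_homD(4)[OF assms(3)] by simp
next
  case (mul_one_r a) then show ?case using central_homD(4)[OF assms(3)] by simp
next
  case (sc_add x y) then show ?case using central_homD(1)[OF assms(3)] by simp
next
  case (sc_mul x y) then show ?case using central_homD(2)[OF assms(3)] by simp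
next
  case (sc_central x a) then show ?case using central_homD(5)[OF assms(3)] by simp
next
  case (sym a b) then show ?case by simp
next
  case (trans a b c) then show ?case by simp
qed simp_all

lemma central_hom_id: "central_hom (\<lambda>k::K. k)"
  unfolding central_hom_def by (simp add: mult.commute)

lemma not_eqv_zero_one: "\<not> eqv {} (Sc 0) (Sc 1 :: 'x fexpr)"
proof
  assume "eqv {} (Sc 0) (Sc 1 :: 'x fexpr)"
  from fexpr_eval_eqv[OF this _ central_hom_id, of "\<lambda>_. 0"]
  have "(0::K) = 1" by simp
  then show False by (rule zero_neq_one[THEN notE])
qed

lemma fexpr_eval_subst: "fexpr_eval s w (subst f a) = fexpr_eval s (\<lambda>x. fexpr_eval s w (f x)) a"
  by (induction a) auto

lemma fexpr_eval_map: "fexpr_eval s w (map_fexpr g a) = fexpr_eval s (\<lambda>x. w (g x)) a"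
  by (induction a) auto

lemma fexpr_eval_hom:
  assumes "\<And>x y. h (x + y) = h x + h y" "\<And>x y. h (x * y) = h x * h y" "\<And>x. h (- x) = - h x"
    "\<And>k. h (s k) = s' k"
  shows "fexpr_eval s' (\<lambda>x. h (w x)) a = h (fexpr_eval s w a)"
  by (induction a) (auto simp: assms)

lemma fexpr_eval_esum: "s 0 = 0 \<Longrightarrow> fexpr_eval s w (esum xs) = sum_list (map (fexpr_eval s w) xs)"
  by (induction xs) (auto simp: esum_def)

lemma sum_list_map_upto: "sum_list (map f [a..b]) = (\<Sum>x\<in>{a..b}. f x)"
  by (simp add: interv_sum_list_conv_sum_set_int)

lemma sum_list_map_upt: "sum_list (map f [a..<b]) = (\<Sum>x\<in>{a..<b}. f x)"
  by (simp add: interv_sum_list_conv_sum_set_nat)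

lemma sum_list_concat': "sum_list (concat xss) = sum_list (map sum_list (xss :: 'a::monoid_add list list))"
  by (induction xss) auto

text \<open>The algebra presented by \<open>R\<close> is the quotient of \<open>free_alg\<close> by the two-sided ideal
  \<open>rel_ideal R\<close>; all computations below take place in rings of class \<open>ring_1\<close> modulo such ideals.\<close>

quotient_type 'x free_alg = "'x fexpr" / "eqv {}"
  by (rule equivp_eqv)

instantiation free_alg :: (type) ring_1
begin
lift_definition zero_free_alg :: "'a free_alg" is "Sc 0" .
lift_definition one_free_alg :: "'a free_alg" is "Sc 1" .
lift_definition plus_free_alg :: "'a free_alg \<Rightarrow> 'a free_alg \<Rightarrow> 'a free_alg" is Add by (rule eqv.add_cong)
lift_definition times_free_alg :: "'a free_alg \<Rightarrow> 'a free_alg \<Rightarrow> 'a free_alg" is Mul by (rule eqv.mul_cong)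
lift_definition uminus_free_alg :: "'a free_alg \<Rightarrow> 'a free_alg" is Neg by (rule eqv.neg_cong)
lift_definition minus_free_alg :: "'a free_alg \<Rightarrow> 'a free_alg \<Rightarrow> 'a free_alg" is "\<lambda>a b. Add a (Neg b)"
  by (intro eqv.add_cong eqv.neg_cong)
instance
proof
  fix a b c :: "'a free_alg"
  show "a + b + c = a + (b + c)" by transfer (rule eqv.add_assoc)
  show "a + b = b + a" by transfer (rule eqv.add_comm)
  show "0 + a = a" by transfer (meson eqv.add_comm eqv.add_zero eqv.trans)
  show "- a + a = 0" by transfer (meson eqv.add_comm eqv.add_neg eqv.trans)
  show "a - b = a + - b" by transfer (rule eqv.refl)
  show "a * b * c = a * (b * c)" by transfer (rule eqv.mul_assoc)
  show "(a + b) * c = a * c + b * c" by transfer (rule eqv.distr_r)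
  show "a * (b + c) = a * b + a * c" by transfer (rule eqv.distr_l)
  show "1 * a = a" by transfer (rule eqv.mul_one_l)
  show "a * 1 = a" by transfer (rule eqv.mul_one_r)
  show "(0::'a free_alg) \<noteq> 1" by transfer (rule not_eqv_zero_one)
qed
end

definition free_scalar :: "K \<Rightarrow> 'x free_alg" where "free_scalar k = abs_free_alg (Sc k)"
definition free_gen :: "'x \<Rightarrow> 'x free_alg" where "free_gen x = abs_free_alg (Gen x)"

lemma abs_free_alg_eq_eval: "abs_free_alg a = fexpr_eval free_scalar free_gen a"
proof (induction a)
  case (Add a b) then show ?case by (simp add: plus_free_alg.abs_eq[symmetric])
next
  case (Mul a b) then show ?case by (simp add: times_free_alg.abs_eq[symmetric])
next
  case (Neg a) then show ?case by (simp add: uminus_free_alg.abs_eq[symmetric])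
qed (simp_all add: free_scalar_def free_gen_def)

lemma central_hom_free_scalar: "central_hom free_scalar"
proof -
  have add: "free_scalar (x + y) = free_scalar x + free_scalar y" for x y
    unfolding free_scalar_def plus_free_alg.abs_eq free_alg.abs_eq_iff by (rule eqv.sym[OF eqv.sc_add])
  have mult: "free_scalar (x * y) = free_scalar x * free_scalar y" for x y
    unfolding free_scalar_def times_free_alg.abs_eq free_alg.abs_eq_iff by (rule eqv.sym[OF eqv.sc_mul])
  have central: "free_scalar k * a = a * free_scalar k" for k a
    unfolding free_scalar_def by transfer (rule eqv.sc_central)
  show ?thesis unfolding central_hom_def
    by (intro conjI allI add mult central) (simp_all add: free_scalar_def zero_free_alg_def one_free_alg_def)
qed

lemma eqv_empty_imp: "eqv {} a b \<Longrightarrow> eqv R a b"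
  by (erule eqv_mono) simp

lift_definition in_rel_ideal :: "('x fexpr \<times> 'x fexpr) set \<Rightarrow> 'x free_alg \<Rightarrow> bool" is "\<lambda>R a. eqv R a (Sc 0)"
  by (meson eqv.sym eqv.trans eqv_empty_imp)

definition rel_ideal :: "('x fexpr \<times> 'x fexpr) set \<Rightarrow> 'x free_alg set" where "rel_ideal R = Collect (in_rel_ideal R)"

lemma eqv_of_abs_eq: "abs_free_alg a = abs_free_alg b \<Longrightarrow> eqv R a b"
  by (simp add: free_alg.abs_eq_iff eqv_empty_imp)

lemma in_rel_ideal_abs: "in_rel_ideal R (abs_free_alg a) \<longleftrightarrow> eqv R a (Sc 0)"
  by (simp add: in_rel_ideal.abs_eq)

lemma in_rel_ideal_add: "in_rel_ideal R x \<Longrightarrow> in_rel_ideal R y \<Longrightarrow> in_rel_ideal R (x + y)"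
  by transfer (rule eqv.trans[OF eqv.add_cong eqv.add_zero])

lemma in_rel_ideal_uminus: "in_rel_ideal R x \<Longrightarrow> in_rel_ideal R (- x)"
proof (induction x rule: free_alg.abs_induct)
  case (1 a)
  have "abs_free_alg (Neg (Sc 0)) = (abs_free_alg (Sc 0) :: 'a free_alg)"
    by (simp add: uminus_free_alg.abs_eq[symmetric] zero_free_alg_def[symmetric])
  then have e: "eqv R (Neg (Sc 0)) (Sc 0)" by (rule eqv_of_abs_eq)
  from 1 have "eqv R a (Sc 0)" by (simp add: in_rel_ideal_abs)
  then have "eqv R (Neg a) (Sc 0)" by (rule eqv.trans[OF eqv.neg_cong e])
  then show ?case by (simp add: uminus_free_alg.abs_eq in_rel_ideal_abs)
qed

lemma in_rel_ideal_mult_left: "in_rel_ideal R x \<Longrightarrow> in_rel_ideal R (y * x)"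
proof (induction x rule: free_alg.abs_induct)
  case (1 a)
  show ?case
  proof (induction y rule: free_alg.abs_induct)
    case (1 b)
    have "abs_free_alg (Mul b (Sc 0)) = (abs_free_alg (Sc 0) :: 'a free_alg)"
      by (simp add: times_free_alg.abs_eq[symmetric] zero_free_alg_def[symmetric])
    then have e: "eqv R (Mul b (Sc 0)) (Sc 0)" by (rule eqv_of_abs_eq)
    from \<open>in_rel_ideal R (abs_free_alg a)\<close> have "eqv R a (Sc 0)" by (simp add: in_rel_ideal_abs)
    then have "eqv R (Mul b a) (Sc 0)" by (rule eqv.trans[OF eqv.mul_cong[OF eqv.refl] e])
    then show ?case by (simp add: times_free_alg.abs_eq in_rel_ideal_abs)
  qed
qed

lemma in_rel_ideal_mult_right: "in_rel_ideal R x \<Longrightarrow> in_rel_ideal R (x * y)"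
proof (induction x rule: free_alg.abs_induct)
  case (1 a)
  show ?case
  proof (induction y rule: free_alg.abs_induct)
    case (1 b)
    have "abs_free_alg (Mul (Sc 0) b) = (abs_free_alg (Sc 0) :: 'a free_alg)"
      by (simp add: times_free_alg.abs_eq[symmetric] zero_free_alg_def[symmetric])
    then have e: "eqv R (Mul (Sc 0) b) (Sc 0)" by (rule eqv_of_abs_eq)
    from \<open>in_rel_ideal R (abs_free_alg a)\<close> have "eqv R a (Sc 0)" by (simp add: in_rel_ideal_abs)
    then have "eqv R (Mul a b) (Sc 0)" by (rule eqv.trans[OF eqv.mul_cong[OF _ eqv.refl] e])
    then show ?case by (simp add: times_free_alg.abs_eq in_rel_ideal_abs)
  qed
qed

lemma two_sided_ideal_rel_ideal: "two_sided_ideal (rel_ideal R)"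
  by unfold_locales (auto simp: rel_ideal_def zero_free_alg_def in_rel_ideal_abs eqv.refl in_rel_ideal_add in_rel_ideal_uminus in_rel_ideal_mult_left in_rel_ideal_mult_right)

lemma ideal_cong_abs_iff: "ideal_cong (rel_ideal R) (abs_free_alg a) (abs_free_alg b) \<longleftrightarrow> eqv R a b"
proof -
  have e1: "abs_free_alg a - abs_free_alg b = abs_free_alg (Add a (Neg b))"
    by (simp add: minus_free_alg.abs_eq)
  have "eqv R (Add a (Neg b)) (Sc 0) \<longleftrightarrow> eqv R a b"
  proof
    assume h: "eqv R (Add a (Neg b)) (Sc 0)"
    have "(abs_free_alg (Add (Add a (Neg b)) b) :: 'a free_alg) = abs_free_alg a + - abs_free_alg b + abs_free_alg b"
      by (simp only: plus_free_alg.abs_eq uminus_free_alg.abs_eq)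
    then have "abs_free_alg a = (abs_free_alg (Add (Add a (Neg b)) b) :: 'a free_alg)" by simp
    then have "eqv R a (Add (Add a (Neg b)) b)" by (rule eqv_of_abs_eq)
    moreover have "eqv R (Add (Add a (Neg b)) b) (Add (Sc 0) b)"
      using h by (intro eqv.add_cong eqv.refl)
    moreover have "abs_free_alg (Add (Sc 0) b) = (abs_free_alg b :: 'a free_alg)"
      by (simp add: plus_free_alg.abs_eq[symmetric] zero_free_alg_def[symmetric])
    ultimately show "eqv R a b" using eqv_of_abs_eq eqv.trans by blast
  next
    assume h: "eqv R a b"
    have "eqv R (Add a (Neg b)) (Add b (Neg b))" using h by (intro eqv.add_cong eqv.refl)
    then show "eqv R (Add a (Neg b)) (Sc 0)" by (rule eqv.trans[OF _ eqv.add_neg])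
  qed
  then show ?thesis unfolding ideal_cong_def rel_ideal_def using e1 by (simp add: in_rel_ideal_abs)
qed

text \<open>Representatives of quotient elements may involve arbitrary generators; \<open>restrict_alg Y\<close> removes
  those outside \<open>Y\<close>, as \<open>is_hom\<close> requires.\<close>

definition restrict_gen :: "'x set \<Rightarrow> 'x \<Rightarrow> 'x fexpr" where
  "restrict_gen Y g = (if g \<in> Y then Gen g else Sc 0)"

lemma subst_restrict_gen_id: "gens a \<subseteq> Y \<Longrightarrow> subst (restrict_gen Y) a = a"
  by (induction a) (auto simp: restrict_gen_def)

lemma gens_subst_restrict_gen: "gens (subst (restrict_gen Y) a) \<subseteq> Y"
  by (induction a) (auto simp: restrict_gen_def)

lift_definition restrict_alg :: "'x set \<Rightarrow> 'x free_alg \<Rightarrow> 'x free_alg" is "\<lambda>Y a. subst (restrict_gen Y) a"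
  by (erule eqv_subst) simp

lemma restrict_alg_add: "restrict_alg Y (x + y) = restrict_alg Y x + restrict_alg Y y" by transfer (simp add: eqv.refl)
lemma restrict_alg_mult: "restrict_alg Y (x * y) = restrict_alg Y x * restrict_alg Y y" by transfer (simp add: eqv.refl)
lemma restrict_alg_uminus: "restrict_alg Y (- x) = - restrict_alg Y x" by transfer (simp add: eqv.refl)
lemma restrict_alg_free_scalar: "restrict_alg Y (free_scalar k) = free_scalar k" unfolding free_scalar_def by transfer (simp add: eqv.refl)
lemma restrict_alg_free_gen: "x \<in> Y \<Longrightarrow> restrict_alg Y (free_gen x) = free_gen x" unfolding free_gen_def by transfer (simp add: restrict_gen_def eqv.refl)
lemma restrict_alg_abs: "restrict_alg Y (abs_free_alg a) = abs_free_alg (subst (restrict_gen Y) a)" by (simp add: restrict_alg.abs_eq)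
lemma restrict_alg_abs_id: "gens a \<subseteq> Y \<Longrightarrow> restrict_alg Y (abs_free_alg a) = abs_free_alg a" by (simp add: restrict_alg_abs subst_restrict_gen_id)
lemma restrict_alg_diff: "restrict_alg Y (x - y) = restrict_alg Y x - restrict_alg Y y"
  by (metis diff_conv_add_uminus restrict_alg_add restrict_alg_uminus)

lemma restrict_alg_rel_ideal:
  assumes a: "\<And>a b. (a, b) \<in> R \<Longrightarrow> gens a \<subseteq> Y \<and> gens b \<subseteq> Y"
  shows "x \<in> rel_ideal R \<Longrightarrow> restrict_alg Y x \<in> rel_ideal R"
proof (induction x rule: free_alg.abs_induct)
  case (1 x)
  then have h': "eqv R x (Sc 0)" by (simp add: rel_ideal_def in_rel_ideal_abs)
  have "eqv R (subst (restrict_gen Y) x) (subst (restrict_gen Y) (Sc 0))"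
  proof (rule eqv_subst[OF h'])
    fix u v assume "(u, v) \<in> R"
    then show "eqv R (subst (restrict_gen Y) u) (subst (restrict_gen Y) v)"
      using a[of u v] by (simp add: subst_restrict_gen_id eqv.rel)
  qed
  then show ?case by (simp add: rel_ideal_def in_rel_ideal_abs restrict_alg_abs)
qed

lemma restrict_alg_cong:
  assumes "\<And>a b. (a, b) \<in> R \<Longrightarrow> gens a \<subseteq> Y \<and> gens b \<subseteq> Y"
  shows "ideal_cong (rel_ideal R) x y \<Longrightarrow> ideal_cong (rel_ideal R) (restrict_alg Y x) (restrict_alg Y y)"
  unfolding ideal_cong_def by (metis restrict_alg_diff restrict_alg_rel_ideal[OF assms])

lemma abs_rep_free_alg: "abs_free_alg (rep_free_alg x) = x"
  by (rule Quotient3_abs_rep[OF Quotient3_free_alg])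

lemma restrict_alg_sum: "restrict_alg Y (sum f A) = (\<Sum>x\<in>A. restrict_alg Y (f x))"
  by (induction A rule: infinite_finite_induct) (auto simp: restrict_alg_add zero_free_alg_def restrict_alg_abs)

lemma abs_free_alg_map: "abs_free_alg (map_fexpr f a) = fexpr_eval free_scalar (\<lambda>x. free_gen (f x)) a"
  by (simp add: abs_free_alg_eq_eval fexpr_eval_map)

lemma abs_free_alg_subst: "abs_free_alg (subst f a) = fexpr_eval free_scalar (\<lambda>x. abs_free_alg (f x)) a"
  by (simp add: abs_free_alg_eq_eval fexpr_eval_subst)

lemma restrict_alg_eval:
  "fexpr_eval free_scalar (\<lambda>x. restrict_alg Y (v x)) a = restrict_alg Y (fexpr_eval free_scalar v a)"
  by (rule fexpr_eval_hom) (simp_all add: restrict_alg_add restrict_alg_mult restrict_alg_uminus restrict_alg_free_scalar)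

section \<open>Laurent series over a noncommutative ring\<close>

definition vanishes_below :: "'a::zero fls \<Rightarrow> int \<Rightarrow> bool" where
  "vanishes_below f d \<longleftrightarrow> (\<forall>m<d. f $$ m = 0)"

lemma vanishes_belowI: "(\<And>m. m < d \<Longrightarrow> f $$ m = 0) \<Longrightarrow> vanishes_below f d" by (simp add: vanishes_below_def)
lemma vanishes_below_mono: "vanishes_below f d \<Longrightarrow> d' \<le> d \<Longrightarrow> vanishes_below f d'" by (simp add: vanishes_below_def)
lemma vanishes_below_zero[simp]: "vanishes_below 0 d" by (simp add: vanishes_below_def)
lemma vanishes_below_one: "d \<le> 0 \<Longrightarrow> vanishes_below (1::'a::{zero,one} fls) d" by (simp add: vanishes_below_def)
lemma vanishes_below_add: "vanishes_below f d \<Longrightarrow> vanishes_below g d \<Longrightarrow> vanishes_below (f + g) (d::int)"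
  by (simp add: vanishes_below_def)
lemma vanishes_below_diff: "vanishes_below f d \<Longrightarrow> vanishes_below g d \<Longrightarrow> vanishes_below (f - g :: 'a::group_add fls) d"
  by (simp add: vanishes_below_def)
lemma vanishes_below_sum: "(\<And>i. i \<in> A \<Longrightarrow> vanishes_below (f i) d) \<Longrightarrow> vanishes_below (sum f A :: 'a::comm_monoid_add fls) d"
  by (induction A rule: infinite_finite_induct) (auto intro: vanishes_below_add)

lemma fls_mult_nth_superset:
  fixes f g :: "'a::ring_1 fls"
  assumes "finite W" "\<And>i. f $$ i \<noteq> 0 \<Longrightarrow> g $$ (n - i) \<noteq> 0 \<Longrightarrow> i \<in> W"
  shows "(f * g) $$ n = (\<Sum>i\<in>W. f $$ i * g $$ (n - i))"
proof -
  let ?h = "\<lambda>i. f $$ i * g $$ (n - i)"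
  let ?V = "{fls_subdegree f..n - fls_subdegree g}"
  have nth: "(f * g) $$ n = sum ?h ?V" by (rule fls_times_nth(2))
  have "sum ?h ?V = sum ?h (?V \<inter> W)"
  proof (rule sum.mono_neutral_right)
    show "\<forall>i\<in>?V - ?V \<inter> W. ?h i = 0"
    proof
      fix i assume "i \<in> ?V - ?V \<inter> W"
      then have "i \<notin> W" by blast
      then have "f $$ i = 0 \<or> g $$ (n - i) = 0" using assms(2) by blast
      then show "?h i = 0" by auto
    qed
  qed auto
  also have "\<dots> = sum ?h W"
  proof (rule sum.mono_neutral_left[OF assms(1)])
    show "\<forall>i\<in>W - ?V \<inter> W. ?h i = 0"
    proof
      fix i assume "i \<in> W - ?V \<inter> W"
      then have "i < fls_subdegree f \<or> n - i < fls_subdegree g" by auto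
      then show "?h i = 0" by auto
    qed
  qed auto
  finally show ?thesis using nth by simp
qed

lemma fls_mult_nth_window:
  fixes f g :: "'a::ring_1 fls"
  assumes "vanishes_below f A" "vanishes_below g B" "{A..n - B} \<subseteq> W" "finite W"
  shows "(f * g) $$ n = (\<Sum>i\<in>W. f $$ i * g $$ (n - i))"
proof (rule fls_mult_nth_superset[OF assms(4)])
  fix i assume "f $$ i \<noteq> 0" "g $$ (n - i) \<noteq> 0"
  then have "A \<le> i" "B \<le> n - i" using assms(1,2) by (auto simp: vanishes_below_def not_less[symmetric])
  then show "i \<in> W" using assms(3) by auto
qed

lemma vanishes_below_mult:
  fixes f g :: "'a::ring_1 fls"
  assumes "vanishes_below f a" "vanishes_below g b"
  shows "vanishes_below (f * g) (a + b)"
proof (rule vanishes_belowI)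
  fix m assume "m < a + b"
  then have "{a..m - b} = {}" by auto
  then show "(f * g) $$ m = 0" using fls_mult_nth_window[OF assms, of m "{}"] by simp
qed

lemma fls_mult_nth_lowest:
  fixes f g :: "'a::ring_1 fls"
  assumes "vanishes_below f a" "vanishes_below g b"
  shows "(f * g) $$ (a + b) = f $$ a * g $$ b"
  using fls_mult_nth_window[OF assms, of "a + b" "{a}"] by simp

definition coeff_ideal :: "'a::ring_1 set \<Rightarrow> 'a fls set" where
  "coeff_ideal I = {f. \<forall>m. f $$ m \<in> I}"

lemma (in two_sided_ideal) two_sided_ideal_coeff_ideal: "two_sided_ideal (coeff_ideal I)"
proof
  show "0 \<in> coeff_ideal I" by (simp add: coeff_ideal_def zero_in)
next
  fix x y assume "x \<in> coeff_ideal I" "y \<in> coeff_ideal I" then show "x + y \<in> coeff_ideal I"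
    by (simp add: coeff_ideal_def add_in)
next
  fix x assume "x \<in> coeff_ideal I" then show "- x \<in> coeff_ideal I" by (simp add: coeff_ideal_def neg_in)
next
  fix x a assume h: "x \<in> coeff_ideal I"
  show "a * x \<in> coeff_ideal I" unfolding coeff_ideal_def
  proof (intro CollectI allI)
    fix m show "(a * x) $$ m \<in> I" unfolding fls_times_nth(2)
      using h by (auto simp: coeff_ideal_def intro!: sum_in lmul_in)
  qed
next
  fix x a assume h: "x \<in> coeff_ideal I"
  show "x * a \<in> coeff_ideal I" unfolding coeff_ideal_def
  proof (intro CollectI allI)
    fix m show "(x * a) $$ m \<in> I" unfolding fls_times_nth(2)
      using h by (auto simp: coeff_ideal_def intro!: sum_in rmul_in)
  qed
qed

lemma ideal_cong_coeff_ideal_iff: "ideal_cong (coeff_ideal I) f g \<longleftrightarrow> (\<forall>m. ideal_cong I (f $$ m) (g $$ m))"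
  by (simp add: ideal_cong_def coeff_ideal_def)

text \<open>The coefficients of one-sided inverses of \<open>f\<close> are solved for recursively, starting from an
  inverse \<open>x\<close> (modulo \<open>I\<close>) of its lowest coefficient \<open>f $$ d\<close>.\<close>

fun right_inv_coeff :: "(nat \<Rightarrow> 'a::ring_1) \<Rightarrow> 'a \<Rightarrow> nat \<Rightarrow> 'a" where
  "right_inv_coeff a x 0 = x"
| "right_inv_coeff a x (Suc n) = - x * (\<Sum>i\<in>{1..Suc n}. a i * right_inv_coeff a x (Suc n - i))"

fun left_inv_coeff :: "(nat \<Rightarrow> 'a::ring_1) \<Rightarrow> 'a \<Rightarrow> nat \<Rightarrow> 'a" where
  "left_inv_coeff a x 0 = x"
| "left_inv_coeff a x (Suc n) = - (\<Sum>i\<in>{0..n}. left_inv_coeff a x i * a (Suc n - i)) * x"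

definition fls_rinv :: "'a::ring_1 fls \<Rightarrow> int \<Rightarrow> 'a \<Rightarrow> 'a fls" where
  "fls_rinv f d x = Abs_fls (\<lambda>m. if m < -d then 0 else right_inv_coeff (\<lambda>i. f $$ (d + int i)) x (nat (m + d)))"

definition fls_linv :: "'a::ring_1 fls \<Rightarrow> int \<Rightarrow> 'a \<Rightarrow> 'a fls" where
  "fls_linv f d x = Abs_fls (\<lambda>m. if m < -d then 0 else left_inv_coeff (\<lambda>i. f $$ (d + int i)) x (nat (m + d)))"

lemma fls_rinv_nth: "fls_rinv f d x $$ m = (if m < -d then 0 else right_inv_coeff (\<lambda>i. f $$ (d + int i)) x (nat (m + d)))"
  unfolding fls_rinv_def by (rule nth_Abs_fls_lower_bound[of "-d"]) auto

lemma fls_linv_nth: "fls_linv f d x $$ m = (if m < -d then 0 else left_inv_coeff (\<lambda>i. f $$ (d + int i)) x (nat (m + d)))"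
  unfolding fls_linv_def by (rule nth_Abs_fls_lower_bound[of "-d"]) auto

lemma vanishes_below_fls_rinv: "vanishes_below (fls_rinv f d x) (-d)" by (simp add: vanishes_below_def fls_rinv_nth)
lemma vanishes_below_fls_linv: "vanishes_below (fls_linv f d x) (-d)" by (simp add: vanishes_below_def fls_linv_nth)

lemma sum_int_shift:
  fixes d :: int and N :: nat
  shows "(\<Sum>i\<in>{d..d + int N}. h i) = (\<Sum>j\<in>{0..N}. h (d + int j))"
proof -
  have "{d..d + int N} = (\<lambda>j. d + int j) ` {0..N}"
  proof
    show "{d..d + int N} \<subseteq> (\<lambda>j. d + int j) ` {0..N}"
    proof
      fix i assume "i \<in> {d..d + int N}"
      then have "i = d + int (nat (i - d))" "nat (i - d) \<in> {0..N}" by auto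
      then show "i \<in> (\<lambda>j. d + int j) ` {0..N}" by blast
    qed
  qed auto
  moreover have "inj_on (\<lambda>j. d + int j) {0..N}" by (auto simp: inj_on_def)
  ultimately show ?thesis by (simp add: sum.reindex)
qed

context two_sided_ideal
begin

lemma fls_rinv_right_inverse:
  assumes f: "vanishes_below f d" and x: "ideal_cong I (f $$ d * x) 1"
  shows "ideal_cong (coeff_ideal I) (f * fls_rinv f d x) 1"
  unfolding ideal_cong_coeff_ideal_iff
proof
  fix n
  let ?a = "\<lambda>i. f $$ (d + int i)" and ?c = "right_inv_coeff (\<lambda>i. f $$ (d + int i)) x"
  show "ideal_cong I ((f * fls_rinv f d x) $$ n) (1 $$ n)"
  proof (cases "n < 0")
    case True
    have "(f * fls_rinv f d x) $$ n = 0"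
      using vanishes_below_mult[OF f vanishes_below_fls_rinv[of f d x]] True by (simp add: vanishes_below_def)
    then show ?thesis using True by simp
  next
    case False
    define N where "N = nat n"
    have nN: "n = int N" using False N_def by simp
    have "(f * fls_rinv f d x) $$ n = (\<Sum>i\<in>{d..d + int N}. f $$ i * fls_rinv f d x $$ (n - i))"
      by (rule fls_mult_nth_window[OF f vanishes_below_fls_rinv]) (auto simp: nN)
    also have "\<dots> = (\<Sum>j\<in>{0..N}. ?a j * ?c (N - j))"
      by (simp add: sum_int_shift fls_rinv_nth nN) (intro sum.cong refl, auto simp: nat_diff_distrib)
    finally have e: "(f * fls_rinv f d x) $$ n = (\<Sum>j\<in>{0..N}. ?a j * ?c (N - j))" .
    show ?thesis
    proof (cases N)
      case 0
      then show ?thesis using e x nN by simp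
    next
      case (Suc M)
      let ?S = "\<Sum>i\<in>{1..Suc M}. ?a i * ?c (Suc M - i)"
      have "{0..Suc M} = insert 0 {1..Suc M}" by auto
      then have "(\<Sum>j\<in>{0..N}. ?a j * ?c (N - j)) = ?a 0 * ?c (Suc M) + ?S"
        using Suc by simp
      also have "\<dots> = - ((f $$ d * x - 1) * ?S)" by (simp add: algebra_simps)
      finally have "(f * fls_rinv f d x) $$ n = - ((f $$ d * x - 1) * ?S)" using e by simp
      moreover have "- ((f $$ d * x - 1) * ?S) \<in> I"
        using x unfolding ideal_cong_def by (intro neg_in rmul_in)
      ultimately show ?thesis using nN Suc by (simp add: ideal_cong_def)
    qed
  qed
qed

lemma fls_linv_left_inverse:
  assumes f: "vanishes_below f d" and x: "ideal_cong I (x * f $$ d) 1"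
  shows "ideal_cong (coeff_ideal I) (fls_linv f d x * f) 1"
  unfolding ideal_cong_coeff_ideal_iff
proof
  fix n
  let ?a = "\<lambda>i. f $$ (d + int i)" and ?c = "left_inv_coeff (\<lambda>i. f $$ (d + int i)) x"
  show "ideal_cong I ((fls_linv f d x * f) $$ n) (1 $$ n)"
  proof (cases "n < 0")
    case True
    have "(fls_linv f d x * f) $$ n = 0"
      using vanishes_below_mult[OF vanishes_below_fls_linv[of f d x] f] True by (simp add: vanishes_below_def)
    then show ?thesis using True by simp
  next
    case False
    define N where "N = nat n"
    have nN: "n = int N" using False N_def by simp
    have "(fls_linv f d x * f) $$ n = (\<Sum>i\<in>{-d..-d + int N}. fls_linv f d x $$ i * f $$ (n - i))"
      by (rule fls_mult_nth_window[OF vanishes_below_fls_linv f]) (auto simp: nN)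
    also have "\<dots> = (\<Sum>j\<in>{0..N}. ?c j * ?a (N - j))"
      unfolding sum_int_shift by (simp add: fls_linv_nth nN) (intro sum.cong refl, auto simp: of_nat_diff algebra_simps)
    finally have e: "(fls_linv f d x * f) $$ n = (\<Sum>j\<in>{0..N}. ?c j * ?a (N - j))" .
    show ?thesis
    proof (cases N)
      case 0
      then show ?thesis using e x nN by simp
    next
      case (Suc M)
      let ?S = "\<Sum>i\<in>{0..M}. ?c i * ?a (Suc M - i)"
      have "{0..Suc M} = insert (Suc M) {0..M}" by auto
      then have "(\<Sum>j\<in>{0..N}. ?c j * ?a (N - j)) = ?c (Suc M) * ?a 0 + ?S"
        using Suc by simp
      also have "\<dots> = - (?S * (x * f $$ d - 1))" by (simp add: algebra_simps)
      finally have "(fls_linv f d x * f) $$ n = - (?S * (x * f $$ d - 1))" using e by simp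
      moreover have "- (?S * (x * f $$ d - 1)) \<in> I"
        using x unfolding ideal_cong_def by (intro neg_in lmul_in)
      ultimately show ?thesis using nN Suc by (simp add: ideal_cong_def)
    qed
  qed
qed

lemma fls_rinv_inverse:
  assumes f: "vanishes_below f d" and x1: "ideal_cong I (x * f $$ d) 1" and x2: "ideal_cong I (f $$ d * x) 1"
  shows "ideal_cong (coeff_ideal I) (f * fls_rinv f d x) 1" "ideal_cong (coeff_ideal I) (fls_rinv f d x * f) 1"
proof -
  interpret J: two_sided_ideal "coeff_ideal I" by (rule two_sided_ideal_coeff_ideal)
  let ?R = "fls_rinv f d x" and ?L = "fls_linv f d x"
  have r: "ideal_cong (coeff_ideal I) (f * ?R) 1" by (rule fls_rinv_right_inverse[OF f x2])
  have l: "ideal_cong (coeff_ideal I) (?L * f) 1" by (rule fls_linv_left_inverse[OF f x1])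
  have "ideal_cong (coeff_ideal I) ?L (?L * (f * ?R))" using J.ideal_cong_mult_left[OF r, of ?L] by (simp add: J.ideal_cong_sym)
  also have "?L * (f * ?R) = (?L * f) * ?R" by (simp add: mult.assoc)
  also have "ideal_cong (coeff_ideal I) \<dots> ?R" using J.ideal_cong_mult_right[OF l, of ?R] by simp
  finally have lr: "ideal_cong (coeff_ideal I) ?L ?R" .
  show "ideal_cong (coeff_ideal I) (f * ?R) 1" by (rule r)
  have "ideal_cong (coeff_ideal I) (?R * f) (?L * f)" using J.ideal_cong_mult_right[OF J.ideal_cong_sym[OF lr]] .
  then show "ideal_cong (coeff_ideal I) (?R * f) 1" using l by (rule J.ideal_cong_trans)
qed

end

section \<open>Gauss decomposition of matrices of Laurent series\<close>

type_synonym 'r mat = "nat \<Rightarrow> nat \<Rightarrow> 'r"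

definition mat_mult :: "nat \<Rightarrow> 'r::ring_1 mat \<Rightarrow> 'r mat \<Rightarrow> 'r mat" where
  "mat_mult n A B = (\<lambda>i j. \<Sum>k\<in>{1..n}. A i k * B k j)"

definition diag_mat :: "(nat \<Rightarrow> 'r::ring_1) \<Rightarrow> 'r mat" where
  "diag_mat g = (\<lambda>i j. if i = j then g i else 0)"

lemma mat_mult_assoc: "mat_mult n (mat_mult n A B) C = mat_mult n A (mat_mult n B C)"
proof (intro ext)
  fix i j
  have "mat_mult n (mat_mult n A B) C i j = (\<Sum>k\<in>{1..n}. \<Sum>l\<in>{1..n}. A i l * B l k * C k j)"
    by (simp add: mat_mult_def sum_distrib_right)
  also have "\<dots> = (\<Sum>l\<in>{1..n}. \<Sum>k\<in>{1..n}. A i l * B l k * C k j)" by (rule sum.swap)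
  also have "\<dots> = mat_mult n A (mat_mult n B C) i j"
    by (simp add: mat_mult_def sum_distrib_left mult.assoc)
  finally show "mat_mult n (mat_mult n A B) C i j = mat_mult n A (mat_mult n B C) i j" .
qed

lemma mat_mult_diag_right: "j \<in> {1..n} \<Longrightarrow> mat_mult n A (diag_mat g) i j = A i j * g j"
proof -
  assume j: "j \<in> {1..n}"
  have "mat_mult n A (diag_mat g) i j = (\<Sum>k\<in>{1..n}. if k = j then A i j * g j else 0)"
    unfolding mat_mult_def diag_mat_def by (intro sum.cong) auto
  then show ?thesis using j by simp
qed

lemma mat_mult_diag_left: "i \<in> {1..n} \<Longrightarrow> mat_mult n (diag_mat g) A i j = g i * A i j"
proof -
  assume i: "i \<in> {1..n}"
  have "mat_mult n (diag_mat g) A i j = (\<Sum>k\<in>{1..n}. if k = i then g i * A i j else 0)"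
    unfolding mat_mult_def diag_mat_def by (intro sum.cong) auto
  then show ?thesis using i by simp
qed

lemma diag_mat_mult_diag: "i \<in> {1..n} \<Longrightarrow> mat_mult n (diag_mat a) (diag_mat b) i j = diag_mat (\<lambda>l. a l * b l) i j"
  by (subst mat_mult_diag_left) (auto simp: diag_mat_def)

definition lower_unitri :: "'r::ring_1 mat \<Rightarrow> bool" where
  "lower_unitri F \<longleftrightarrow> (\<forall>i. F i i = 1) \<and> (\<forall>i j. i < j \<longrightarrow> F i j = 0)"

definition upper_unitri :: "'r::ring_1 mat \<Rightarrow> bool" where
  "upper_unitri E \<longleftrightarrow> (\<forall>i. E i i = 1) \<and> (\<forall>i j. j < i \<longrightarrow> E i j = 0)"

definition ldu_entry :: "'r::ring_1 mat \<Rightarrow> (nat \<Rightarrow> 'r) \<Rightarrow> 'r mat \<Rightarrow> nat \<Rightarrow> nat \<Rightarrow> 'r" where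
  "ldu_entry F G E i j = (\<Sum>l\<in>{1..min i j}. F i l * G l * E l j)"

lemma mat_mult_ldu_entry:
  assumes "lower_unitri F" "upper_unitri E" "i \<in> {1..n}" "j \<in> {1..n}"
  shows "mat_mult n (mat_mult n F (diag_mat G)) E i j = ldu_entry F G E i j"
proof -
  have "mat_mult n (mat_mult n F (diag_mat G)) E i j = (\<Sum>k\<in>{1..n}. F i k * G k * E k j)"
    unfolding mat_mult_def[of n "mat_mult n F (diag_mat G)"]
    by (rule sum.cong[OF HOL.refl]) (subst mat_mult_diag_right, assumption, simp)
  also have "\<dots> = (\<Sum>k\<in>{1..min i j}. F i k * G k * E k j)"
  proof (rule sum.mono_neutral_right)
    show "\<forall>k\<in>{1..n} - {1..min i j}. F i k * G k * E k j = 0"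
      using assms(1,2) by (auto simp: lower_unitri_def upper_unitri_def)
  qed (use assms in auto)
  finally show ?thesis by (simp add: ldu_entry_def)
qed

definition mat_cong :: "nat \<Rightarrow> 'r::ring_1 set \<Rightarrow> 'r mat \<Rightarrow> 'r mat \<Rightarrow> bool" where
  "mat_cong n I A B \<longleftrightarrow> (\<forall>i\<in>{1..n}. \<forall>j\<in>{1..n}. ideal_cong I (A i j) (B i j))"

context two_sided_ideal
begin

lemma mat_cong_refl: "mat_cong n I A A" by (simp add: mat_cong_def)
lemma mat_cong_trans[trans]: "mat_cong n I A B \<Longrightarrow> mat_cong n I B C \<Longrightarrow> mat_cong n I A C"
  unfolding mat_cong_def using ideal_cong_trans by blast
lemma mat_cong_trans_eq1[trans]: "A = B \<Longrightarrow> mat_cong n I B C \<Longrightarrow> mat_cong n I A C" by simp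
lemma mat_cong_trans_eq2[trans]: "mat_cong n I A B \<Longrightarrow> B = C \<Longrightarrow> mat_cong n I A C" by simp
lemma mat_cong_mult: "mat_cong n I A A' \<Longrightarrow> mat_cong n I B B' \<Longrightarrow> mat_cong n I (mat_mult n A B) (mat_mult n A' B')"
  unfolding mat_cong_def mat_mult_def by (auto intro!: ideal_cong_sum ideal_cong_mult)

end

text \<open>\<open>pivot_inv p\<close> is an inverse of \<open>p\<close> (modulo the ideal) only if \<open>p\<close> vanishes below \<open>0\<close> and
  \<open>p $$ 0 = 1\<close>, which \<open>valuation_bounds\<close> guarantees for all pivots.\<close>

definition pivot_inv :: "'a::ring_1 fls \<Rightarrow> 'a fls" where "pivot_inv p = fls_rinv p 0 1"

primrec schur_compl :: "'a::ring_1 fls mat \<Rightarrow> nat \<Rightarrow> 'a fls mat" where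
  "schur_compl A 0 = A"
| "schur_compl A (Suc k) = (\<lambda>i j. schur_compl A k i j
      - schur_compl A k i (Suc k) * pivot_inv (schur_compl A k (Suc k) (Suc k)) * schur_compl A k (Suc k) j)"

definition ldu_G :: "'a::ring_1 fls mat \<Rightarrow> nat \<Rightarrow> 'a fls" where
  "ldu_G A k = schur_compl A (k - 1) k k"

definition ldu_F :: "'a::ring_1 fls mat \<Rightarrow> 'a fls mat" where
  "ldu_F A i k = (if i = k then 1 else if k < i then schur_compl A (k - 1) i k * pivot_inv (ldu_G A k) else 0)"

definition ldu_E :: "'a::ring_1 fls mat \<Rightarrow> 'a fls mat" where
  "ldu_E A k j = (if k = j then 1 else if k < j then pivot_inv (ldu_G A k) * schur_compl A (k - 1) k j else 0)"

lemma lower_unitri_ldu_F: "lower_unitri (ldu_F A)" by (simp add: lower_unitri_def ldu_F_def)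
lemma upper_unitri_ldu_E: "upper_unitri (ldu_E A)" by (simp add: upper_unitri_def ldu_E_def)

lemma schur_compl_telescope:
  "A i j = (\<Sum>l\<in>{1..m}. schur_compl A (l - 1) i l * pivot_inv (schur_compl A (l - 1) l l) * schur_compl A (l - 1) l j)
           + schur_compl A m i j"
proof (induction m)
  case 0 then show ?case by simp
next
  case (Suc m)
  have "{1..Suc m} = insert (Suc m) {1..m}" by auto
  then show ?case using Suc by (simp add: algebra_simps)
qed

text \<open>The trailing block (indices \<open>> k\<close>) is unitriangular to leading order: entries below the
  diagonal vanish below order \<open>dF\<close>, entries above it below order \<open>dE\<close>, and diagonal entries
  are \<open>1\<close> up to order \<open>\<ge> 1\<close>. Since \<open>dF + dE \<ge> 1\<close> this survives taking Schur complements, so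
  every pivot has leading coefficient \<open>1\<close> and is invertible.\<close>

definition valuation_bounds :: "int \<Rightarrow> int \<Rightarrow> nat \<Rightarrow> 'a::ring_1 fls mat \<Rightarrow> nat \<Rightarrow> bool" where
  "valuation_bounds dF dE n S k \<longleftrightarrow> (\<forall>i\<in>{k<..n}. \<forall>j\<in>{k<..n}.
      (j < i \<longrightarrow> vanishes_below (S i j) dF) \<and> (i < j \<longrightarrow> vanishes_below (S i j) dE) \<and> (i = j \<longrightarrow> vanishes_below (S i i - 1) 1))"

lemma pivot_props:
  assumes "vanishes_below (p - 1) 1"
  shows "vanishes_below p 0" "p $$ 0 = 1"
proof -
  have "vanishes_below (p - 1 + 1) 0" by (rule vanishes_below_add[OF vanishes_below_mono[OF assms] vanishes_below_one]) auto
  then show "vanishes_below p 0" by simp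
  have "(p - 1) $$ 0 = 0" using assms by (simp add: vanishes_below_def)
  then show "p $$ 0 = 1" by simp
qed

lemma vanishes_below_pivot_inv: "vanishes_below (pivot_inv p) 0"
  unfolding pivot_inv_def using vanishes_below_fls_rinv[of p 0 1] by simp

lemma pivot_inv_inverse:
  assumes "two_sided_ideal I" "vanishes_below (p - 1) 1"
  shows "ideal_cong (coeff_ideal I) (p * pivot_inv p) 1" "ideal_cong (coeff_ideal I) (pivot_inv p * p) 1"
proof -
  interpret two_sided_ideal I by fact
  have l: "vanishes_below p 0" "p $$ 0 = 1" using pivot_props[OF assms(2)] by auto
  have "ideal_cong I (1 * p $$ 0) 1" "ideal_cong I (p $$ 0 * 1) 1" using l by simp_all
  from fls_rinv_inverse[OF l(1) this] show "ideal_cong (coeff_ideal I) (p * pivot_inv p) 1" "ideal_cong (coeff_ideal I) (pivot_inv p * p) 1"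
    by (simp_all add: pivot_inv_def)
qed

lemma valuation_bounds_step:
  assumes "0 \<le> dF" "0 \<le> dE" "1 \<le> dF + dE" "valuation_bounds dF dE n (schur_compl A k) k"
  shows "valuation_bounds dF dE n (schur_compl A (Suc k)) (Suc k)"
  unfolding valuation_bounds_def
proof (intro ballI conjI impI)
  let ?S = "schur_compl A k" and ?p = "Suc k"
  fix i j assume i: "i \<in> {Suc k<..n}" and j: "j \<in> {Suc k<..n}"
  have p: "?p \<in> {k<..n}" using i by auto
  have i': "i \<in> {k<..n}" and j': "j \<in> {k<..n}" using i j by auto
  have a1: "vanishes_below (?S i ?p) dF" using assms(4) i' p i unfolding valuation_bounds_def by auto
  have a2: "vanishes_below (?S ?p j) dE" using assms(4) j' p j unfolding valuation_bounds_def by auto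
  have prod: "vanishes_below (?S i ?p * pivot_inv (?S ?p ?p) * ?S ?p j) (dF + 0 + dE)"
    by (intro vanishes_below_mult a1 a2 vanishes_below_pivot_inv)
  have schur_eq: "schur_compl A (Suc k) i j = ?S i j - ?S i ?p * pivot_inv (?S ?p ?p) * ?S ?p j" by simp
  show "vanishes_below (schur_compl A (Suc k) i j) dF" if "j < i"
  proof -
    have "vanishes_below (?S i j) dF" using assms(4) i' j' that unfolding valuation_bounds_def by auto
    then show ?thesis unfolding schur_eq
      by (intro vanishes_below_diff vanishes_below_mono[OF prod]) (use assms in auto)
  qed
  show "vanishes_below (schur_compl A (Suc k) i j) dE" if "i < j"
  proof -
    have "vanishes_below (?S i j) dE" using assms(4) i' j' that unfolding valuation_bounds_def by auto
    then show ?thesis unfolding schur_eq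
      by (intro vanishes_below_diff vanishes_below_mono[OF prod]) (use assms in auto)
  qed
  show "vanishes_below (schur_compl A (Suc k) i i - 1) 1" if "i = j"
  proof -
    have "vanishes_below (?S i i - 1) 1" using assms(4) i' that unfolding valuation_bounds_def by auto
    moreover have "vanishes_below (?S i ?p * pivot_inv (?S ?p ?p) * ?S ?p i) 1"
      using prod that vanishes_below_mono assms(3) by force
    ultimately have "vanishes_below ((?S i i - 1) - ?S i ?p * pivot_inv (?S ?p ?p) * ?S ?p i) 1"
      by (rule vanishes_below_diff)
    then show ?thesis by (simp add: algebra_simps)
  qed
qed

lemma valuation_bounds_schur_compl:
  assumes "0 \<le> dF" "0 \<le> dE" "1 \<le> dF + dE" "valuation_bounds dF dE n A 0"
  shows "valuation_bounds dF dE n (schur_compl A k) k"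
  by (induction k) (use assms valuation_bounds_step in auto)

lemma ldu_factor_bounds:
  assumes "0 \<le> dF" "0 \<le> dE" "1 \<le> dF + dE" "valuation_bounds dF dE n A 0"
  shows "\<And>l. l \<in> {1..n} \<Longrightarrow> vanishes_below (ldu_G A l - 1) 1"
    and "\<And>i k. 1 \<le> k \<Longrightarrow> k < i \<Longrightarrow> i \<le> n \<Longrightarrow> vanishes_below (ldu_F A i k) dF"
    and "\<And>k j. 1 \<le> k \<Longrightarrow> k < j \<Longrightarrow> j \<le> n \<Longrightarrow> vanishes_below (ldu_E A k j) dE"
proof -
  fix l assume l: "l \<in> {1..n}"
  have s: "valuation_bounds dF dE n (schur_compl A (l - 1)) (l - 1)" by (rule valuation_bounds_schur_compl[OF assms])
  have lm: "l \<in> {l - 1<..n}" using l by auto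
  show "vanishes_below (ldu_G A l - 1) 1" using bspec[OF bspec[OF s[unfolded valuation_bounds_def] lm] lm]
    unfolding ldu_G_def by simp
next
  fix i k assume ik: "k < i" "i \<le> n" and k1: "1 \<le> k"
  show "vanishes_below (ldu_F A i k) dF"
  proof -
    have "valuation_bounds dF dE n (schur_compl A (k - 1)) (k - 1)" by (rule valuation_bounds_schur_compl[OF assms])
    then have "vanishes_below (schur_compl A (k - 1) i k) dF" using ik k1 unfolding valuation_bounds_def by auto
    from vanishes_below_mult[OF this vanishes_below_pivot_inv] show ?thesis using ik unfolding ldu_F_def by auto
  qed
next
  fix k j assume kj: "k < j" "j \<le> n" and k1: "1 \<le> k"
  show "vanishes_below (ldu_E A k j) dE"
  proof -
    have "valuation_bounds dF dE n (schur_compl A (k - 1)) (k - 1)" by (rule valuation_bounds_schur_compl[OF assms])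
    then have "vanishes_below (schur_compl A (k - 1) k j) dE" using kj k1 unfolding valuation_bounds_def by auto
    from vanishes_below_mult[OF vanishes_below_pivot_inv this] show ?thesis using kj unfolding ldu_E_def by auto
  qed
qed

context
  fixes I :: "'a::ring_1 set" and dF dE :: int and n :: nat and A :: "'a fls mat"
  assumes I: "two_sided_ideal I" and dd: "0 \<le> dF" "0 \<le> dE" "1 \<le> dF + dE"
    and bounds: "valuation_bounds dF dE n A 0"
begin

interpretation J: two_sided_ideal "coeff_ideal I" using I by (rule two_sided_ideal.two_sided_ideal_coeff_ideal)

lemma ldu_term_cong:
  assumes "l < i" "l < j" "l \<in> {1..n}"
  shows "ideal_cong (coeff_ideal I) (ldu_F A i l * ldu_G A l * ldu_E A l j)
    (schur_compl A (l - 1) i l * pivot_inv (schur_compl A (l - 1) l l) * schur_compl A (l - 1) l j)"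
proof -
  let ?g = "ldu_G A l" and ?a = "schur_compl A (l - 1) i l" and ?b = "schur_compl A (l - 1) l j"
  have "ldu_F A i l * ?g * ldu_E A l j = ?a * pivot_inv ?g * (?g * pivot_inv ?g) * ?b"
    using assms by (simp add: ldu_F_def ldu_E_def mult.assoc)
  also have "ideal_cong (coeff_ideal I) \<dots> (?a * pivot_inv ?g * 1 * ?b)"
    by (intro J.ideal_cong_mult_right J.ideal_cong_mult_left pivot_inv_inverse(1)[OF I]
        ldu_factor_bounds(1)[OF dd bounds assms(3)])
  finally show ?thesis by (simp add: ldu_G_def)
qed

lemma ldu_last_term_cong:
  assumes k: "min i j = k" "i \<le> n" "j \<le> n" "1 \<le> k"
  shows "ideal_cong (coeff_ideal I) (ldu_F A i k * ldu_G A k * ldu_E A k j) (schur_compl A (k - 1) i j)"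
proof -
  let ?g = "ldu_G A k" and ?S = "schur_compl A (k - 1)"
  have g: "vanishes_below (?g - 1) 1" by (rule ldu_factor_bounds(1)[OF dd bounds]) (use k in auto)
  consider "i = k" "j = k" | "i = k" "k < j" | "j = k" "k < i" using k by linarith
  then show ?thesis
  proof cases
    case 1
    then show ?thesis by (simp add: ldu_F_def ldu_E_def ldu_G_def)
  next
    case 2
    then have "ldu_F A i k * ?g * ldu_E A k j = (?g * pivot_inv ?g) * ?S k j"
      by (simp add: ldu_F_def ldu_E_def mult.assoc)
    also have "ideal_cong (coeff_ideal I) \<dots> (1 * ?S k j)"
      by (intro J.ideal_cong_mult_right pivot_inv_inverse(1)[OF I g])
    finally show ?thesis using 2 by simp
  next
    case 3
    then have "ldu_F A i k * ?g * ldu_E A k j = ?S i k * (pivot_inv ?g * ?g)"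
      by (simp add: ldu_F_def ldu_E_def mult.assoc ldu_G_def)
    also have "ideal_cong (coeff_ideal I) \<dots> (?S i k * 1)"
      by (intro J.ideal_cong_mult_left pivot_inv_inverse(2)[OF I g])
    finally show ?thesis using 3 by simp
  qed
qed

lemma ldu_entry_cong:
  assumes ij: "i \<in> {1..n}" "j \<in> {1..n}"
  shows "ideal_cong (coeff_ideal I) (ldu_entry (ldu_F A) (ldu_G A) (ldu_E A) i j) (A i j)"
proof -
  define m where "m = min i j - 1"
  have m: "min i j = Suc m" using ij m_def by auto
  have "ldu_entry (ldu_F A) (ldu_G A) (ldu_E A) i j = (\<Sum>l\<in>{1..m}. ldu_F A i l * ldu_G A l * ldu_E A l j)
         + ldu_F A i (Suc m) * ldu_G A (Suc m) * ldu_E A (Suc m) j"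
    unfolding ldu_entry_def m by (simp add: atLeastAtMostSuc_conv)
  also have "ideal_cong (coeff_ideal I) \<dots> ((\<Sum>l\<in>{1..m}.
      schur_compl A (l - 1) i l * pivot_inv (schur_compl A (l - 1) l l) * schur_compl A (l - 1) l j)
      + schur_compl A m i j)"
    using ldu_last_term_cong[OF m] ldu_term_cong m ij by (intro J.ideal_cong_add J.ideal_cong_sum) auto
  also have "\<dots> = A i j" by (rule schur_compl_telescope[symmetric])
  finally show ?thesis .
qed

end

text \<open>Uniqueness of the Gauss decomposition, by induction on the column: the entries with
  \<open>min i j = k\<close> determine \<open>G k\<close>, \<open>F i k\<close> and \<open>E k j\<close> once the earlier factors are known.\<close>

lemma ldu_unique:
  assumes J: "two_sided_ideal J" and F: "lower_unitri F" "lower_unitri F'" and E: "upper_unitri E" "upper_unitri E'"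
    and inv: "\<And>l. l \<in> {1..n} \<Longrightarrow> \<exists>h. ideal_cong J (G' l * h) 1 \<and> ideal_cong J (h * G' l) 1"
    and eq: "\<And>i j. i \<in> {1..n} \<Longrightarrow> j \<in> {1..n} \<Longrightarrow> ideal_cong J (ldu_entry F G E i j) (ldu_entry F' G' E' i j)"
  shows "k \<in> {1..n} \<Longrightarrow> ideal_cong J (G k) (G' k) \<and> (\<forall>i\<in>{k<..n}. ideal_cong J (F i k) (F' i k) \<and> ideal_cong J (E k i) (E' k i))"
proof (induction k rule: less_induct)
  case (less k)
  interpret two_sided_ideal J by (rule J)
  have k: "1 \<le> k" "k \<le> n" using less.prems by auto
  let ?T = "\<lambda>i j. \<Sum>l\<in>{1..k - 1}. F i l * G l * E l j"
  let ?T' = "\<lambda>i j. \<Sum>l\<in>{1..k - 1}. F' i l * G' l * E' l j"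
  have earlier: "ideal_cong J (?T i j) (?T' i j)" if "k \<le> i" "i \<le> n" "k \<le> j" "j \<le> n" for i j
  proof (rule ideal_cong_sum)
    fix l assume l: "l \<in> {1..k - 1}"
    then have "l < k" "l \<in> {1..n}" using k by auto
    then have "ideal_cong J (G l) (G' l)" "ideal_cong J (F i l) (F' i l)" "ideal_cong J (E l j) (E' l j)"
      using less.IH that by auto
    then show "ideal_cong J (F i l * G l * E l j) (F' i l * G' l * E' l j)" by (intro ideal_cong_mult)
  qed
  have split: "{1..k} = insert k {1..k - 1}" using k by auto
  have last: "ideal_cong J (F i k * G k * E k j) (F' i k * G' k * E' k j)"
    if "min i j = k" "i \<le> n" "j \<le> n" for i j
  proof -
    have "ldu_entry F G E i j = ?T i j + F i k * G k * E k j"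
      "ldu_entry F' G' E' i j = ?T' i j + F' i k * G' k * E' k j"
      unfolding ldu_entry_def that(1) split using k by (simp_all add: sum.insert_if add.commute)
    then have "ideal_cong J (?T i j + F i k * G k * E k j) (?T' i j + F' i k * G' k * E' k j)"
      using eq[of i j] that k by auto
    from ideal_cong_diff[OF this earlier[of i j]] show ?thesis using that by simp
  qed
  have Gk: "ideal_cong J (G k) (G' k)"
    using last[of k k] k F E by (simp add: lower_unitri_def upper_unitri_def)
  obtain h where h: "ideal_cong J (G' k * h) 1" "ideal_cong J (h * G' k) 1" using inv k by auto
  have Fk: "ideal_cong J (F i k) (F' i k)" if "i \<in> {k<..n}" for i
  proof (rule ideal_cong_cancel_right[OF _ h(1)])
    have "ideal_cong J (F i k * G k) (F' i k * G' k)"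
      using last[of i k] that k E by (simp add: upper_unitri_def)
    with ideal_cong_mult_left[OF ideal_cong_sym[OF Gk]]
    show "ideal_cong J (F i k * G' k) (F' i k * G' k)" by (rule ideal_cong_trans)
  qed
  have Ek: "ideal_cong J (E k i) (E' k i)" if "i \<in> {k<..n}" for i
  proof (rule ideal_cong_cancel_left[OF _ h(2)])
    have "ideal_cong J (G k * E k i) (G' k * E' k i)"
      using last[of k i] that k F by (simp add: lower_unitri_def)
    with ideal_cong_mult_right[OF ideal_cong_sym[OF Gk]]
    show "ideal_cong J (G' k * E k i) (G' k * E' k i)" by (rule ideal_cong_trans)
  qed
  show ?case using Gk Fk Ek by blast
qed

text \<open>The series \<open>T\<^sup>+(z)\<close> is stored as a Laurent series in \<open>z\<^sup>-\<^sup>1\<close> and \<open>T\<^sup>-(z)\<close> as one in \<open>z\<close>: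
  coefficient \<open>m\<close> of the stored series of sign \<open>s\<close> is the coefficient of \<open>z ^ (- orient s m)\<close>.
  Both then have only finitely many nonzero coefficients of negative index.\<close>

definition orient :: "bool \<Rightarrow> int \<Rightarrow> int" where "orient s m = (if s then m else - m)"
lemma orient_orient[simp]: "orient s (orient s m) = m" by (simp add: orient_def)
lemma orient_diff: "orient s (a - b) = orient s a - orient s b" by (simp add: orient_def)
lemma orient_add: "orient s (a + b) = orient s a + orient s b" by (simp add: orient_def)
lemma orient_zero[simp]: "orient s 0 = 0" by (simp add: orient_def)
lemma orient_True[simp]: "orient True m = m" and orient_False[simp]: "orient False m = - m" by (simp_all add: orient_def)

lemma sum_orient_symmetric: "(\<Sum>a\<in>{-K..K}. f (orient s a)) = (\<Sum>x\<in>{-K..K::int}. f x)"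
proof (cases s)
  case False
  show ?thesis
    by (rule sum.reindex_bij_witness[of _ uminus uminus]) (use False in auto)
qed simp

definition c_of :: "(nat \<Rightarrow> int) \<Rightarrow> (nat \<Rightarrow> int) \<Rightarrow> bool \<Rightarrow> nat \<Rightarrow> int" where
  "c_of cp cm s l = (if s then cp l else cm l)"

lemma dominant_mono:
  assumes "dominant n c" "1 \<le> j" "j \<le> i" "i \<le> n"
  shows "c i \<le> c j"
  using assms(3,4)
proof (induction i)
  case 0 then show ?case using assms(2) by simp
next
  case (Suc i)
  show ?case
  proof (cases "j = Suc i")
    case False
    then have "j \<le> i" using Suc.prems by simp
    moreover have "c (Suc i) \<le> c i" using assms(1) \<open>j \<le> i\<close> assms(2) Suc.prems
      unfolding dominant_def by auto
    ultimately show ?thesis using Suc by simp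
  qed simp
qed

definition c_bound :: "nat \<Rightarrow> (nat \<Rightarrow> int) \<Rightarrow> (nat \<Rightarrow> int) \<Rightarrow> int" where
  "c_bound n cp cm = (\<Sum>l\<in>{1..n}. \<bar>cp l\<bar> + \<bar>cm l\<bar>)"

lemma c_of_le_c_bound: "l \<in> {1..n} \<Longrightarrow> \<bar>c_of cp cm s l\<bar> \<le> c_bound n cp cm"
proof -
  assume l: "l \<in> {1..n}"
  have "\<bar>c_of cp cm s l\<bar> \<le> \<bar>cp l\<bar> + \<bar>cm l\<bar>" by (simp add: c_of_def)
  also have "\<dots> \<le> c_bound n cp cm" unfolding c_bound_def
    by (rule member_le_sum[OF l]) auto
  finally show ?thesis .
qed

lemma c_bound_nonneg: "0 \<le> c_bound n cp cm" unfolding c_bound_def by (intro sum_nonneg) auto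

lemma FG_in: "1 \<le> l \<Longrightarrow> l < i \<Longrightarrow> i \<le> n \<Longrightarrow> FG i l r \<in> rtt_gens n cp cm"
  unfolding rtt_gens_def by (rule UnI1[OF UnI1[OF UnI1[OF UnI2]]]) auto
lemma EG_in: "1 \<le> l \<Longrightarrow> l < j \<Longrightarrow> j \<le> n \<Longrightarrow> EG l j r \<in> rtt_gens n cp cm"
  unfolding rtt_gens_def by (rule UnI1[OF UnI1[OF UnI1[OF UnI1[OF UnI2]]]]) auto
lemma GGT_in: "1 \<le> l \<Longrightarrow> l \<le> n \<Longrightarrow> - cp l \<le> m \<Longrightarrow> GG True l m \<in> rtt_gens n cp cm"
  unfolding rtt_gens_def by (rule UnI1[OF UnI1[OF UnI2]]) auto
lemma GGF_in: "1 \<le> l \<Longrightarrow> l \<le> n \<Longrightarrow> m \<le> cm l \<Longrightarrow> GG False l m \<in> rtt_gens n cp cm"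
  unfolding rtt_gens_def by (rule UnI1[OF UnI2]) auto
lemma GI_in: "1 \<le> l \<Longrightarrow> l \<le> n \<Longrightarrow> GI s l \<in> rtt_gens n cp cm"
  unfolding rtt_gens_def by (rule UnI2) auto
lemma TG_in: "i \<in> {1..n} \<Longrightarrow> j \<in> {1..n} \<Longrightarrow> TG s i j m \<in> rtt_gens n cp cm"
  unfolding rtt_gens_def by (rule UnI1[OF UnI1[OF UnI1[OF UnI1[OF UnI1]]]]) auto
lemma GG_in: "1 \<le> l \<Longrightarrow> l \<le> n \<Longrightarrow> - c_of cp cm s l \<le> m \<Longrightarrow> GG s l (orient s m) \<in> rtt_gens n cp cm"
  by (cases s) (auto simp: c_of_def intro: GGT_in GGF_in)

lemma rel_rtt: "i \<in> {1..n} \<Longrightarrow> k \<in> {1..n} \<Longrightarrow> j \<in> {1..n} \<Longrightarrow> l \<in> {1..n} \<Longrightarrow>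
  (rtt_lhs n s s' i k j l a b, rtt_rhs n s s' i k j l a b) \<in> rtt_rels n cp cm"
  unfolding rtt_rels_def by (rule UnI1[OF UnI1[OF UnI1[OF UnI1[OF UnI1]]]]) blast
lemma rel_gauss: "i \<in> {1..n} \<Longrightarrow> j \<in> {1..n} \<Longrightarrow>
  (Gen (TG s i j m), gauss_coeff cp cm s i j m) \<in> rtt_rels n cp cm"
  unfolding rtt_rels_def by (rule UnI1[OF UnI1[OF UnI1[OF UnI1[OF UnI2]]]]) blast
lemma rel_inv1: "l \<in> {1..n} \<Longrightarrow> (Mul (Gen (GG True l (- cp l))) (Gen (GI True l)), Sc 1) \<in> rtt_rels n cp cm"
  unfolding rtt_rels_def by (rule UnI1[OF UnI1[OF UnI1[OF UnI2]]]) blast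
lemma rel_inv2: "l \<in> {1..n} \<Longrightarrow> (Mul (Gen (GI True l)) (Gen (GG True l (- cp l))), Sc 1) \<in> rtt_rels n cp cm"
  unfolding rtt_rels_def by (rule UnI1[OF UnI1[OF UnI2]]) blast
lemma rel_inv3: "l \<in> {1..n} \<Longrightarrow> (Mul (Gen (GG False l (cm l))) (Gen (GI False l)), Sc 1) \<in> rtt_rels n cp cm"
  unfolding rtt_rels_def by (rule UnI1[OF UnI2])  blast
lemma rel_inv4: "l \<in> {1..n} \<Longrightarrow> (Mul (Gen (GI False l)) (Gen (GG False l (cm l))), Sc 1) \<in> rtt_rels n cp cm"
  unfolding rtt_rels_def by (rule UnI2) blast

lemma gens_fco: "1 \<le> l \<Longrightarrow> i \<le> n \<Longrightarrow> gens (fco s i l a) \<subseteq> rtt_gens n cp cm"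
  by (auto simp: fco_def intro: FG_in)

lemma gens_gco: "1 \<le> l \<Longrightarrow> l \<le> n \<Longrightarrow> gens (gco cp cm s l b) \<subseteq> rtt_gens n cp cm"
  by (auto simp: gco_def intro: GGT_in GGF_in)

lemma gens_eco: "1 \<le> j \<Longrightarrow> j \<le> n \<Longrightarrow> 1 \<le> l \<Longrightarrow> gens (eco s l j c) \<subseteq> rtt_gens n cp cm"
  by (auto simp: eco_def intro: EG_in)

lemma gens_rtt_lhs: "j \<in> {1..n} \<Longrightarrow> l \<in> {1..n} \<Longrightarrow> gens (rtt_lhs n s s' i k j l a b) \<subseteq> rtt_gens n cp cm"
  unfolding rtt_lhs_def gens_esum by (auto simp: tco_def intro: TG_in)

lemma gens_rtt_rhs: "i \<in> {1..n} \<Longrightarrow> k \<in> {1..n} \<Longrightarrow> gens (rtt_rhs n s s' i k j l a b) \<subseteq> rtt_gens n cp cm"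
  unfolding rtt_rhs_def gens_esum by (auto simp: tco_def intro: TG_in)

lemma gens_gauss: "i \<in> {1..n} \<Longrightarrow> j \<in> {1..n} \<Longrightarrow> gens (gauss_coeff cp cm s i j m) \<subseteq> rtt_gens n cp cm"
proof -
  assume ij: "i \<in> {1..n}" "j \<in> {1..n}"
  have h: "gens (Mul (Mul (fco s i l a) (gco cp cm s l b)) (eco s l j c)) \<subseteq> rtt_gens n cp cm"
    if "l \<in> {1..<Suc (min i j)}" for l a b c
  proof -
    have "gens (fco s i l a) \<subseteq> rtt_gens n cp cm" by (rule gens_fco) (use ij that in auto)
    moreover have "gens (gco cp cm s l b) \<subseteq> rtt_gens n cp cm" by (rule gens_gco) (use ij that in auto)
    moreover have "gens (eco s l j c) \<subseteq> rtt_gens n cp cm" by (rule gens_eco) (use ij that in auto)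
    ultimately show ?thesis by simp
  qed
  show ?thesis unfolding gauss_coeff_def gens_esum
  proof (rule UN_least)
    fix e assume "e \<in> set [Mul (Mul (fco s i l a) (gco cp cm s l b)) (eco s l j (m - a - b)).
        l \<leftarrow> [1..<Suc (min i j)],
        a \<leftarrow> [- (\<bar>m\<bar> + \<bar>cp l\<bar> + \<bar>cm l\<bar>) .. \<bar>m\<bar> + \<bar>cp l\<bar> + \<bar>cm l\<bar>],
        b \<leftarrow> [- (\<bar>m\<bar> + \<bar>cp l\<bar> + \<bar>cm l\<bar>) .. \<bar>m\<bar> + \<bar>cp l\<bar> + \<bar>cm l\<bar>]]"
    then obtain l a b where "l \<in> {1..<Suc (min i j)}" "e = Mul (Mul (fco s i l a) (gco cp cm s l b)) (eco s l j (m - a - b))"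
      by (auto simp del: upt_Suc)
    then show "gens e \<subseteq> rtt_gens n cp cm" using h by blast
  qed
qed

lemma rtt_rels_gens:
  assumes "(a, b) \<in> rtt_rels n cp cm"
  shows "gens a \<subseteq> rtt_gens n cp cm \<and> gens b \<subseteq> rtt_gens n cp cm"
  using assms unfolding rtt_rels_def
proof (elim UnE CollectE exE conjE)
  fix s s' i k j l a' b'
  assume "(a, b) = (rtt_lhs n s s' i k j l a' b', rtt_rhs n s s' i k j l a' b')"
    "i \<in> {1..n}" "k \<in> {1..n}" "j \<in> {1..n}" "l \<in> {1..n}"
  then show ?thesis using gens_rtt_lhs gens_rtt_rhs by simp
next
  fix s i j m assume "(a, b) = (Gen (TG s i j m), gauss_coeff cp cm s i j m)" "i \<in> {1..n}" "j \<in> {1..n}"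
  then show ?thesis using gens_gauss TG_in by simp
qed (auto intro: GGT_in GGF_in GI_in)

lemma fexpr_eval_gauss_coeff_sums:
  assumes "central_hom sc"
  shows "fexpr_eval sc w (gauss_coeff cp cm s i j m) =
    (\<Sum>l\<in>{1..<Suc (min i j)}. \<Sum>a\<in>{-(\<bar>m\<bar> + \<bar>cp l\<bar> + \<bar>cm l\<bar>)..\<bar>m\<bar> + \<bar>cp l\<bar> + \<bar>cm l\<bar>}.
       \<Sum>b\<in>{-(\<bar>m\<bar> + \<bar>cp l\<bar> + \<bar>cm l\<bar>)..\<bar>m\<bar> + \<bar>cp l\<bar> + \<bar>cm l\<bar>}.
        fexpr_eval sc w (fco s i l a) * fexpr_eval sc w (gco cp cm s l b) * fexpr_eval sc w (eco s l j (m - a - b)))"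
proof -
  have z: "sc 0 = 0" using assms by (simp add: central_hom_def)
  show ?thesis
    unfolding gauss_coeff_def fexpr_eval_esum[of sc, OF z]
    by (simp add: sum_list_concat' map_concat comp_def sum_list_map_upto sum_list_map_upt del: upt_Suc)
qed

definition F_series :: "(gen \<Rightarrow> 'a::ring_1) \<Rightarrow> bool \<Rightarrow> nat \<Rightarrow> nat \<Rightarrow> 'a fls" where
  "F_series w s i l = Abs_fls (\<lambda>m. if l = i then (if m = 0 then 1 else 0)
     else if l < i \<and> 0 \<le> m \<and> (s \<longrightarrow> 0 < m) then w (FG i l (orient s m)) else 0)"

definition G_series :: "(nat \<Rightarrow> int) \<Rightarrow> (nat \<Rightarrow> int) \<Rightarrow> (gen \<Rightarrow> 'a::ring_1) \<Rightarrow> bool \<Rightarrow> nat \<Rightarrow> 'a fls" where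
  "G_series cp cm w s l = Abs_fls (\<lambda>m. if - c_of cp cm s l \<le> m then w (GG s l (orient s m)) else 0)"

definition E_series :: "(gen \<Rightarrow> 'a::ring_1) \<Rightarrow> bool \<Rightarrow> nat \<Rightarrow> nat \<Rightarrow> 'a fls" where
  "E_series w s l j = Abs_fls (\<lambda>m. if l = j then (if m = 0 then 1 else 0)
     else if l < j \<and> 0 \<le> m \<and> (\<not> s \<longrightarrow> 0 < m) then w (EG l j (orient s m)) else 0)"

lemma F_series_nth: "F_series w s i l $$ m = (if l = i then (if m = 0 then 1 else 0)
     else if l < i \<and> 0 \<le> m \<and> (s \<longrightarrow> 0 < m) then w (FG i l (orient s m)) else 0)"
  unfolding F_series_def by (rule nth_Abs_fls_lower_bound[of 0]) auto

lemma G_series_nth: "G_series cp cm w s l $$ m = (if - c_of cp cm s l \<le> m then w (GG s l (orient s m)) else 0)"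
  unfolding G_series_def by (rule nth_Abs_fls_lower_bound[of "- c_of cp cm s l"]) auto

lemma E_series_nth: "E_series w s l j $$ m = (if l = j then (if m = 0 then 1 else 0)
     else if l < j \<and> 0 \<le> m \<and> (\<not> s \<longrightarrow> 0 < m) then w (EG l j (orient s m)) else 0)"
  unfolding E_series_def by (rule nth_Abs_fls_lower_bound[of 0]) auto

lemma vanishes_below_F_series: "vanishes_below (F_series w s i l) 0" by (simp add: vanishes_below_def F_series_nth)
text \<open>Orders below which the off-diagonal entries of \<open>F\<^sup>\<plusminus>\<close> and \<open>E\<^sup>\<plusminus>\<close> vanish; in each sign one
  of them is \<open>1\<close>, which makes \<open>E\<^sub>1 F\<^sub>2\<close> unitriangular to leading order.\<close>

definition ord_F :: "bool \<Rightarrow> int" where "ord_F s = (if s then 1 else 0)"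
definition ord_E :: "bool \<Rightarrow> int" where "ord_E s = (if s then 0 else 1)"

lemma ord_F_E: "0 \<le> ord_F s" "0 \<le> ord_E s" "ord_F s + ord_E s = 1" by (auto simp: ord_F_def ord_E_def)

lemma vanishes_below_F_series_entry: "vanishes_below (F_series w s i l) (if l = i then 0 else ord_F s)"
  by (auto simp: vanishes_below_def F_series_nth ord_F_def)
lemma vanishes_below_G_series: "vanishes_below (G_series cp cm w s l) (- c_of cp cm s l)" by (simp add: vanishes_below_def G_series_nth)
lemma vanishes_below_E_series: "vanishes_below (E_series w s l j) 0" by (simp add: vanishes_below_def E_series_nth)
lemma vanishes_below_E_series_entry: "vanishes_below (E_series w s l j) (if l = j then 0 else ord_E s)"
  by (auto simp: vanishes_below_def E_series_nth ord_E_def)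
lemma lower_unitri_F_series: "lower_unitri (F_series w s)" by (auto simp: lower_unitri_def fls_eq_iff F_series_nth)
lemma upper_unitri_E_series: "upper_unitri (E_series w s)" by (auto simp: upper_unitri_def fls_eq_iff E_series_nth)

lemma fexpr_eval_fco: "central_hom sc \<Longrightarrow> fexpr_eval sc w (fco s i l m) = F_series w s i l $$ orient s m"
  by (auto simp: fco_def F_series_nth central_hom_def orient_def)
lemma fexpr_eval_gco: "central_hom sc \<Longrightarrow> fexpr_eval sc w (gco cp cm s l m) = G_series cp cm w s l $$ orient s m"
  by (auto simp: gco_def G_series_nth central_hom_def orient_def c_of_def)
lemma fexpr_eval_eco: "central_hom sc \<Longrightarrow> fexpr_eval sc w (eco s l j m) = E_series w s l j $$ orient s m"
  by (auto simp: eco_def E_series_nth central_hom_def orient_def)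

lemma fls_triple_mult_nth:
  fixes F G E :: "'a::ring_1 fls"
  assumes F: "vanishes_below F 0" and G: "vanishes_below G (- c)" and E: "vanishes_below E 0" and K: "\<bar>M\<bar> + \<bar>c\<bar> \<le> K"
  shows "(F * G * E) $$ M = (\<Sum>x\<in>{-K..K}. \<Sum>y\<in>{-K..K}. F $$ x * G $$ y * E $$ (M - x - y))"
proof -
  have GE: "vanishes_below (G * E) (- c + 0)" by (rule vanishes_below_mult[OF G E])
  have "(F * G * E) $$ M = (F * (G * E)) $$ M" by (simp add: mult.assoc)
  also have "\<dots> = (\<Sum>x\<in>{-K..K}. F $$ x * (G * E) $$ (M - x))"
    by (rule fls_mult_nth_window[OF F GE]) (use K in auto)
  also have "\<dots> = (\<Sum>x\<in>{-K..K}. \<Sum>y\<in>{-K..K}. F $$ x * G $$ y * E $$ (M - x - y))"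
  proof (rule sum.cong[OF HOL.refl])
    fix x assume x: "x \<in> {-K..K}"
    show "F $$ x * (G * E) $$ (M - x) = (\<Sum>y\<in>{-K..K}. F $$ x * G $$ y * E $$ (M - x - y))"
    proof (cases "x < 0")
      case True
      then show ?thesis using F by (simp add: vanishes_below_def)
    next
      case False
      have "(G * E) $$ (M - x) = (\<Sum>y\<in>{-K..K}. G $$ y * E $$ (M - x - y))"
        by (rule fls_mult_nth_window[OF G E]) (use K False in auto)
      then show ?thesis by (simp add: sum_distrib_left mult.assoc)
    qed
  qed
  finally show ?thesis .
qed

lemma fexpr_eval_gauss_coeff:
  assumes sc: "central_hom sc"
  shows "fexpr_eval sc w (gauss_coeff cp cm s i j m) =
    ldu_entry (F_series w s) (G_series cp cm w s) (E_series w s) i j $$ orient s m"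
proof -
  have "fexpr_eval sc w (gauss_coeff cp cm s i j m) = (\<Sum>l\<in>{1..min i j}.
    (F_series w s i l * G_series cp cm w s l * E_series w s l j) $$ orient s m)"
    unfolding fexpr_eval_gauss_coeff_sums[OF sc] atLeastLessThanSuc_atLeastAtMost
  proof (rule sum.cong[OF HOL.refl])
    fix l
    define K where "K = \<bar>m\<bar> + \<bar>cp l\<bar> + \<bar>cm l\<bar>"
    have "(\<Sum>a\<in>{- K..K}. \<Sum>b\<in>{- K..K}.
        fexpr_eval sc w (fco s i l a) * fexpr_eval sc w (gco cp cm s l b) * fexpr_eval sc w (eco s l j (m - a - b)))
      = (\<Sum>a\<in>{- K..K}. \<Sum>b\<in>{- K..K}. F_series w s i l $$ orient s a * G_series cp cm w s l $$ orient s b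
          * E_series w s l j $$ (orient s m - orient s a - orient s b))"
      by (simp add: fexpr_eval_fco[OF sc] fexpr_eval_gco[OF sc] fexpr_eval_eco[OF sc] orient_diff)
    also have "\<dots> = (\<Sum>x\<in>{- K..K}. \<Sum>y\<in>{- K..K}. F_series w s i l $$ x * G_series cp cm w s l $$ y
          * E_series w s l j $$ (orient s m - x - y))"
      by (subst sum_orient_symmetric[where f = "\<lambda>x. \<Sum>b\<in>{- K..K}. F_series w s i l $$ x * G_series cp cm w s l $$ orient s b
          * E_series w s l j $$ (orient s m - x - orient s b)"])
         (subst sum_orient_symmetric[where f = "\<lambda>y. F_series w s i l $$ _ * G_series cp cm w s l $$ y
          * E_series w s l j $$ (orient s m - _ - y)"], rule HOL.refl)
    also have "\<dots> = (F_series w s i l * G_series cp cm w s l * E_series w s l j) $$ orient s m"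
      by (rule fls_triple_mult_nth[OF vanishes_below_F_series vanishes_below_G_series vanishes_below_E_series, symmetric]) (auto simp: K_def c_of_def)
    finally show "(\<Sum>a\<in>{- (\<bar>m\<bar> + \<bar>cp l\<bar> + \<bar>cm l\<bar>)..\<bar>m\<bar> + \<bar>cp l\<bar> + \<bar>cm l\<bar>}.
        \<Sum>b\<in>{- (\<bar>m\<bar> + \<bar>cp l\<bar> + \<bar>cm l\<bar>)..\<bar>m\<bar> + \<bar>cp l\<bar> + \<bar>cm l\<bar>}.
        fexpr_eval sc w (fco s i l a) * fexpr_eval sc w (gco cp cm s l b) * fexpr_eval sc w (eco s l j (m - a - b)))
      = (F_series w s i l * G_series cp cm w s l * E_series w s l j) $$ orient s m" unfolding K_def .
  qed
  also have "\<dots> = ldu_entry (F_series w s) (G_series cp cm w s) (E_series w s) i j $$ orient s m"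
    by (simp add: ldu_entry_def fls_nth_sum)
  finally show ?thesis .
qed

section \<open>The RTT relation for a product\<close>

lemma sum4_swap:
  "(\<Sum>p\<in>N. \<Sum>q\<in>N. \<Sum>u\<in>N. \<Sum>v\<in>N. f p q u v) = (\<Sum>u\<in>N. \<Sum>v\<in>N. \<Sum>p\<in>N. \<Sum>q\<in>N. f p q u v)"
proof -
  have "(\<Sum>p\<in>N. \<Sum>q\<in>N. \<Sum>u\<in>N. \<Sum>v\<in>N. f p q u v) = (\<Sum>p\<in>N. \<Sum>u\<in>N. \<Sum>q\<in>N. \<Sum>v\<in>N. f p q u v)"
    by (intro sum.cong HOL.refl sum.swap)
  also have "\<dots> = (\<Sum>u\<in>N. \<Sum>p\<in>N. \<Sum>q\<in>N. \<Sum>v\<in>N. f p q u v)" by (rule sum.swap)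
  also have "\<dots> = (\<Sum>u\<in>N. \<Sum>p\<in>N. \<Sum>v\<in>N. \<Sum>q\<in>N. f p q u v)"
    by (intro sum.cong HOL.refl sum.swap)
  also have "\<dots> = (\<Sum>u\<in>N. \<Sum>v\<in>N. \<Sum>p\<in>N. \<Sum>q\<in>N. f p q u v)"
    by (intro sum.cong HOL.refl sum.swap)
  finally show ?thesis .
qed

context two_sided_ideal
begin

text \<open>If \<open>A, B\<close> and \<open>C, D\<close> satisfy the RTT relation and \<open>B\<close> commutes with \<open>C\<close>, \<open>A\<close> with \<open>D\<close>,
  then so do \<open>AB\<close> and \<open>CD\<close>: move \<open>\<rho>\<close> past one factor at a time.\<close>

lemma rtt_product_abstract:
  fixes A B C D :: "nat \<Rightarrow> nat \<Rightarrow> 'r" and \<rho> :: "nat \<Rightarrow> nat \<Rightarrow> nat \<Rightarrow> nat \<Rightarrow> 'r"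
  assumes H1: "\<And>i k u v. i \<in> N \<Longrightarrow> k \<in> N \<Longrightarrow> u \<in> N \<Longrightarrow> v \<in> N \<Longrightarrow>
      ideal_cong I (\<Sum>p\<in>N. \<Sum>q\<in>N. \<rho> i p k q * (A p u * C q v)) (\<Sum>p\<in>N. \<Sum>q\<in>N. (C k q * A i p) * \<rho> p u q v)"
    and H2: "\<And>p q j l. p \<in> N \<Longrightarrow> q \<in> N \<Longrightarrow> j \<in> N \<Longrightarrow> l \<in> N \<Longrightarrow>
      ideal_cong I (\<Sum>u\<in>N. \<Sum>v\<in>N. \<rho> p u q v * (B u j * D v l)) (\<Sum>u\<in>N. \<Sum>v\<in>N. (D q v * B p u) * \<rho> u j v l)"
    and H3: "\<And>u j q v. u \<in> N \<Longrightarrow> j \<in> N \<Longrightarrow> q \<in> N \<Longrightarrow> v \<in> N \<Longrightarrow> ideal_cong I (B u j * C q v) (C q v * B u j)"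
    and H4: "\<And>i p q v. i \<in> N \<Longrightarrow> p \<in> N \<Longrightarrow> q \<in> N \<Longrightarrow> v \<in> N \<Longrightarrow> ideal_cong I (A i p * D q v) (D q v * A i p)"
    and idx: "i \<in> N" "k \<in> N" "j \<in> N" "l \<in> N"
  shows "ideal_cong I (\<Sum>p\<in>N. \<Sum>q\<in>N. \<rho> i p k q * ((\<Sum>u\<in>N. A p u * B u j) * (\<Sum>v\<in>N. C q v * D v l)))
              (\<Sum>p\<in>N. \<Sum>q\<in>N. ((\<Sum>v\<in>N. C k v * D v q) * (\<Sum>u\<in>N. A i u * B u p)) * \<rho> p j q l)"
proof -
  have "(\<Sum>p\<in>N. \<Sum>q\<in>N. \<rho> i p k q * ((\<Sum>u\<in>N. A p u * B u j) * (\<Sum>v\<in>N. C q v * D v l)))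
      = (\<Sum>p\<in>N. \<Sum>q\<in>N. \<Sum>u\<in>N. \<Sum>v\<in>N. \<rho> i p k q * (A p u * (B u j * C q v) * D v l))"
    by (simp add: sum_distrib_left sum_distrib_right mult.assoc) (intro sum.cong HOL.refl sum.swap)
  also have "ideal_cong I \<dots> (\<Sum>p\<in>N. \<Sum>q\<in>N. \<Sum>u\<in>N. \<Sum>v\<in>N. \<rho> i p k q * (A p u * (C q v * B u j) * D v l))"
    by (intro ideal_cong_sum ideal_cong_mult_left ideal_cong_mult_right H3) (auto simp: idx)
  also have "\<dots> = (\<Sum>u\<in>N. \<Sum>v\<in>N. \<Sum>p\<in>N. \<Sum>q\<in>N. \<rho> i p k q * (A p u * (C q v * B u j) * D v l))"
    by (rule sum4_swap)
  also have "\<dots> = (\<Sum>u\<in>N. \<Sum>v\<in>N. (\<Sum>p\<in>N. \<Sum>q\<in>N. \<rho> i p k q * (A p u * C q v)) * (B u j * D v l))"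
    by (simp add: sum_distrib_left sum_distrib_right mult.assoc)
  also have "ideal_cong I \<dots> (\<Sum>u\<in>N. \<Sum>v\<in>N. (\<Sum>p\<in>N. \<Sum>q\<in>N. (C k q * A i p) * \<rho> p u q v) * (B u j * D v l))"
    by (intro ideal_cong_sum ideal_cong_mult_right H1 idx) auto
  also have "\<dots> = (\<Sum>u\<in>N. \<Sum>v\<in>N. \<Sum>p\<in>N. \<Sum>q\<in>N. (C k q * A i p) * (\<rho> p u q v * (B u j * D v l)))"
    by (simp add: sum_distrib_left sum_distrib_right mult.assoc)
  also have "\<dots> = (\<Sum>p\<in>N. \<Sum>q\<in>N. \<Sum>u\<in>N. \<Sum>v\<in>N. (C k q * A i p) * (\<rho> p u q v * (B u j * D v l)))"
    by (rule sum4_swap[symmetric])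
  also have "\<dots> = (\<Sum>p\<in>N. \<Sum>q\<in>N. (C k q * A i p) * (\<Sum>u\<in>N. \<Sum>v\<in>N. \<rho> p u q v * (B u j * D v l)))"
    by (simp add: sum_distrib_left)
  also have "ideal_cong I \<dots> (\<Sum>p\<in>N. \<Sum>q\<in>N. (C k q * A i p) * (\<Sum>u\<in>N. \<Sum>v\<in>N. (D q v * B p u) * \<rho> u j v l))"
    by (intro ideal_cong_sum ideal_cong_mult_left H2 idx) auto
  also have "\<dots> = (\<Sum>p\<in>N. \<Sum>q\<in>N. \<Sum>u\<in>N. \<Sum>v\<in>N. C k q * ((A i p * D q v) * B p u) * \<rho> u j v l)"
    by (simp add: sum_distrib_left mult.assoc)
  also have "ideal_cong I \<dots> (\<Sum>p\<in>N. \<Sum>q\<in>N. \<Sum>u\<in>N. \<Sum>v\<in>N. C k q * ((D q v * A i p) * B p u) * \<rho> u j v l)"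
    by (intro ideal_cong_sum ideal_cong_mult_left ideal_cong_mult_right H4 idx) auto
  also have "\<dots> = (\<Sum>u\<in>N. \<Sum>v\<in>N. \<Sum>p\<in>N. \<Sum>q\<in>N. C k q * ((D q v * A i p) * B p u) * \<rho> u j v l)"
    by (rule sum4_swap)
  also have "\<dots> = (\<Sum>u\<in>N. \<Sum>v\<in>N. ((\<Sum>q\<in>N. C k q * D q v) * (\<Sum>p\<in>N. A i p * B p u)) * \<rho> u j v l)"
  proof -
    have "(\<Sum>p\<in>N. \<Sum>q\<in>N. C k q * ((D q v * A i p) * B p u) * \<rho> u j v l)
        = (\<Sum>q\<in>N. \<Sum>p\<in>N. C k q * ((D q v * A i p) * B p u) * \<rho> u j v l)" for u v
      by (rule sum.swap)
    then show ?thesis by (simp add: sum_distrib_left sum_distrib_right mult.assoc)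
  qed
  finally show ?thesis .
qed

end

text \<open>Series in \<open>z\<close> and \<open>w\<close> are represented as \<open>'a fls fls\<close> with outer variable \<open>w\<close>; \<open>in_z\<close> and
  \<open>in_w\<close> embed one-variable series, and \<open>var_shift s\<close> is \<open>z\<close> (or \<open>w\<close>) in the stored variable of sign
  \<open>s\<close>. The RTT relation of sign \<open>(s, s')\<close> is then an identity between the two-variable series
  \<open>rtt_lhs_series\<close> and \<open>rtt_rhs_series\<close>.\<close>

definition in_z :: "'a::ring_1 fls \<Rightarrow> 'a fls fls" where "in_z f = fls_const f"
definition in_w :: "'a::ring_1 fls \<Rightarrow> 'a fls fls" where "in_w g = Abs_fls (\<lambda>m. fls_const (g $$ m))"

lemma in_w_nth: "in_w g $$ m = fls_const (g $$ m)"
proof -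
  obtain N where N: "\<forall>n<N. g $$ n = 0" by (rule fls_nth_vanishes_belowE)
  show ?thesis unfolding in_w_def by (rule nth_Abs_fls_lower_bound[of N]) (use N in auto)
qed

lemma fls_const_sum: "fls_const (sum h A) = (\<Sum>x\<in>A. fls_const (h x) :: 'a::comm_monoid_add fls)"
  by (induction A rule: infinite_finite_induct) (auto simp: fls_plus_const[symmetric])

lemma vanishes_below_subdegree: "vanishes_below f (fls_subdegree f)" by (simp add: vanishes_below_def)
lemma vanishes_below_in_w: "vanishes_below (in_w g) (fls_subdegree g)" by (simp add: vanishes_below_def in_w_nth)

lemma in_z_mult: "in_z (f * g) = in_z f * in_z g" by (simp add: in_z_def)
lemma in_z_sum: "in_z (sum h A) = (\<Sum>x\<in>A. in_z (h x))" by (simp add: in_z_def fls_const_sum)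
lemma in_w_sum: "in_w (sum h A) = (\<Sum>x\<in>A. in_w (h x))"
  by (simp add: fls_eq_iff in_w_nth fls_nth_sum fls_const_sum)
lemma in_w_mult: "in_w (f * g) = in_w f * in_w g"
proof (rule fls_eqI)
  fix m
  let ?W = "{fls_subdegree f..m - fls_subdegree g}"
  have "(in_w f * in_w g) $$ m = (\<Sum>i\<in>?W. in_w f $$ i * in_w g $$ (m - i))"
    by (rule fls_mult_nth_window[OF vanishes_below_in_w vanishes_below_in_w]) auto
  also have "\<dots> = fls_const (\<Sum>i\<in>?W. f $$ i * g $$ (m - i))"
    by (simp add: in_w_nth fls_const_sum)
  also have "(\<Sum>i\<in>?W. f $$ i * g $$ (m - i)) = (f * g) $$ m"
    by (rule fls_mult_nth_window[OF vanishes_below_subdegree vanishes_below_subdegree, symmetric]) auto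
  finally show "in_w (f * g) $$ m = (in_w f * in_w g) $$ m" by (simp add: in_w_nth)
qed

lemma in_z_in_w_nth: "((in_z h * in_w g) $$ b) $$ a = h $$ a * g $$ b"
  by (simp add: in_z_def in_w_nth)
lemma in_w_in_z_nth: "((in_w g * in_z h) $$ b) $$ a = g $$ b * h $$ a"
  by (simp add: in_z_def in_w_nth)

definition var_shift :: "bool \<Rightarrow> 'a::ring_1 fls" where "var_shift s = (if s then fls_X_inv else fls_X)"

lemma var_shift_nth: "(var_shift s * f) $$ m = f $$ (m + orient s 1)" "(f * var_shift s) $$ m = f $$ (m + orient s 1)"
  by (simp_all add: var_shift_def fls_X_inv_times_conv_shift fls_X_times_conv_shift)

definition R_entry :: "(K \<Rightarrow> 'a::ring_1) \<Rightarrow> bool \<Rightarrow> bool \<Rightarrow> K \<times> K \<Rightarrow> 'a fls fls" where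
  "R_entry sc s s' ab = in_z (fls_const (sc (fst ab)) * var_shift s) + in_z (fls_const (sc (snd ab))) * var_shift s'"

definition rtt_lhs_val :: "(K \<Rightarrow> 'a::ring_1) \<Rightarrow> nat \<Rightarrow> (bool \<Rightarrow> nat \<Rightarrow> nat \<Rightarrow> int \<Rightarrow> 'a)
    \<Rightarrow> bool \<Rightarrow> bool \<Rightarrow> nat \<Rightarrow> nat \<Rightarrow> nat \<Rightarrow> nat \<Rightarrow> int \<Rightarrow> int \<Rightarrow> 'a" where
  "rtt_lhs_val sc n X s s' i k j l a b = (\<Sum>p\<in>{1..n}. \<Sum>q\<in>{1..n}.
      sc (fst (rcoef i p k q)) * (X s p j (a + 1) * X s' q l b)
    + sc (snd (rcoef i p k q)) * (X s p j a * X s' q l (b + 1)))"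

definition rtt_rhs_val :: "(K \<Rightarrow> 'a::ring_1) \<Rightarrow> nat \<Rightarrow> (bool \<Rightarrow> nat \<Rightarrow> nat \<Rightarrow> int \<Rightarrow> 'a)
    \<Rightarrow> bool \<Rightarrow> bool \<Rightarrow> nat \<Rightarrow> nat \<Rightarrow> nat \<Rightarrow> nat \<Rightarrow> int \<Rightarrow> int \<Rightarrow> 'a" where
  "rtt_rhs_val sc n X s s' i k j l a b = (\<Sum>p\<in>{1..n}. \<Sum>q\<in>{1..n}.
      sc (fst (rcoef p j q l)) * (X s' k q b * X s i p (a + 1))
    + sc (snd (rcoef p j q l)) * (X s' k q (b + 1) * X s i p a))"

lemma fexpr_eval_rtt_lhs:
  assumes "central_hom sc"
  shows "fexpr_eval sc w (rtt_lhs n s s' i k j l a b) = rtt_lhs_val sc n (\<lambda>s i j m. w (TG s i j m)) s s' i k j l a b"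
proof -
  have z: "sc 0 = 0" using assms by (simp add: central_hom_def)
  show ?thesis unfolding rtt_lhs_def rtt_lhs_val_def fexpr_eval_esum[of sc, OF z]
    by (simp add: sum_list_concat' map_concat comp_def sum_list_map_upt tco_def
        atLeastLessThanSuc_atLeastAtMost del: upt_Suc)
qed

lemma fexpr_eval_rtt_rhs:
  assumes "central_hom sc"
  shows "fexpr_eval sc w (rtt_rhs n s s' i k j l a b) = rtt_rhs_val sc n (\<lambda>s i j m. w (TG s i j m)) s s' i k j l a b"
proof -
  have z: "sc 0 = 0" using assms by (simp add: central_hom_def)
  show ?thesis unfolding rtt_rhs_def rtt_rhs_val_def fexpr_eval_esum[of sc, OF z]
    by (simp add: sum_list_concat' map_concat comp_def sum_list_map_upt tco_def
        atLeastLessThanSuc_atLeastAtMost del: upt_Suc)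
qed

definition rtt_lhs_series :: "(K \<Rightarrow> 'a::ring_1) \<Rightarrow> nat \<Rightarrow> (bool \<Rightarrow> nat \<Rightarrow> nat \<Rightarrow> 'a fls)
    \<Rightarrow> bool \<Rightarrow> bool \<Rightarrow> nat \<Rightarrow> nat \<Rightarrow> nat \<Rightarrow> nat \<Rightarrow> 'a fls fls" where
  "rtt_lhs_series sc n T s s' i k j l = (\<Sum>p\<in>{1..n}. \<Sum>q\<in>{1..n}.
      R_entry sc s s' (rcoef i p k q) * (in_z (T s p j) * in_w (T s' q l)))"

definition rtt_rhs_series :: "(K \<Rightarrow> 'a::ring_1) \<Rightarrow> nat \<Rightarrow> (bool \<Rightarrow> nat \<Rightarrow> nat \<Rightarrow> 'a fls)
    \<Rightarrow> bool \<Rightarrow> bool \<Rightarrow> nat \<Rightarrow> nat \<Rightarrow> nat \<Rightarrow> nat \<Rightarrow> 'a fls fls" where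
  "rtt_rhs_series sc n T s s' i k j l = (\<Sum>p\<in>{1..n}. \<Sum>q\<in>{1..n}.
      (in_w (T s' k q) * in_z (T s i p)) * R_entry sc s s' (rcoef p j q l))"

definition coeff_fun :: "(bool \<Rightarrow> nat \<Rightarrow> nat \<Rightarrow> 'a::ring_1 fls) \<Rightarrow> bool \<Rightarrow> nat \<Rightarrow> nat \<Rightarrow> int \<Rightarrow> 'a" where
  "coeff_fun T s i j m = T s i j $$ orient s m"

lemma R_entry_mult_left_nth:
  "((R_entry sc s s' ab * (in_z f * in_w g)) $$ b) $$ a =
     sc (fst ab) * (f $$ (a + orient s 1) * g $$ b) + sc (snd ab) * (f $$ a * g $$ (b + orient s' 1))"
proof -
  have "R_entry sc s s' ab * (in_z f * in_w g) = in_z (fls_const (sc (fst ab)) * (var_shift s * f)) * in_w g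
      + in_z (fls_const (sc (snd ab))) * (var_shift s' * (in_z f * in_w g))"
    by (simp add: R_entry_def distrib_right in_z_mult mult.assoc)
  then show ?thesis
    by (simp add: in_z_in_w_nth var_shift_nth in_z_def mult.assoc in_w_nth)
qed

lemma R_entry_mult_right_nth:
  assumes "central_hom sc"
  shows "(((in_w g * in_z f) * R_entry sc s s' ab) $$ b) $$ a =
     sc (fst ab) * (g $$ b * f $$ (a + orient s 1)) + sc (snd ab) * (g $$ (b + orient s' 1) * f $$ a)"
proof -
  have "(in_w g * in_z f) * R_entry sc s s' ab = in_w g * in_z ((f * fls_const (sc (fst ab))) * var_shift s)
      + (in_w g * in_z (f * fls_const (sc (snd ab)))) * var_shift s'"
    by (simp add: R_entry_def distrib_left in_z_mult mult.assoc)
  then have "(((in_w g * in_z f) * R_entry sc s s' ab) $$ b) $$ a =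
      g $$ b * (f $$ (a + orient s 1) * sc (fst ab)) + g $$ (b + orient s' 1) * (f $$ a * sc (snd ab))"
    by (simp add: in_w_in_z_nth var_shift_nth)
  also have "\<dots> = sc (fst ab) * (g $$ b * f $$ (a + orient s 1)) + sc (snd ab) * (g $$ (b + orient s' 1) * f $$ a)"
    using central_homD(5)[OF assms] by (simp add: mult.assoc)
  finally show ?thesis .
qed

lemma rtt_lhs_series_nth: "((rtt_lhs_series sc n T s s' i k j l) $$ b) $$ a = rtt_lhs_val sc n (coeff_fun T) s s' i k j l (orient s a) (orient s' b)"
  unfolding rtt_lhs_series_def rtt_lhs_val_def coeff_fun_def
  by (simp add: fls_nth_sum R_entry_mult_left_nth orient_add)

lemma rtt_rhs_series_nth: "central_hom sc \<Longrightarrow> ((rtt_rhs_series sc n T s s' i k j l) $$ b) $$ a = rtt_rhs_val sc n (coeff_fun T) s s' i k j l (orient s a) (orient s' b)"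
  unfolding rtt_rhs_series_def rtt_rhs_val_def coeff_fun_def
  by (simp add: fls_nth_sum R_entry_mult_right_nth orient_add)

lemma (in two_sided_ideal) rtt_series_cong_iff:
  assumes "central_hom sc"
  shows "ideal_cong (coeff_ideal (coeff_ideal I)) (rtt_lhs_series sc n T s s' i k j l) (rtt_rhs_series sc n T s s' i k j l)
    \<longleftrightarrow> (\<forall>a b. ideal_cong I (rtt_lhs_val sc n (coeff_fun T) s s' i k j l a b) (rtt_rhs_val sc n (coeff_fun T) s s' i k j l a b))"
  unfolding ideal_cong_coeff_ideal_iff rtt_lhs_series_nth rtt_rhs_series_nth[OF assms] by (metis orient_orient)

lemma rtt_product:
  fixes T1 T2 :: "bool \<Rightarrow> nat \<Rightarrow> nat \<Rightarrow> 'a::ring_1 fls"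
  assumes Z: "two_sided_ideal Z" and sc: "central_hom sc"
    and R1: "\<And>s s' i k j l a b. i \<in> {1..n} \<Longrightarrow> k \<in> {1..n} \<Longrightarrow> j \<in> {1..n} \<Longrightarrow> l \<in> {1..n} \<Longrightarrow>
       ideal_cong Z (rtt_lhs_val sc n (coeff_fun T1) s s' i k j l a b) (rtt_rhs_val sc n (coeff_fun T1) s s' i k j l a b)"
    and R2: "\<And>s s' i k j l a b. i \<in> {1..n} \<Longrightarrow> k \<in> {1..n} \<Longrightarrow> j \<in> {1..n} \<Longrightarrow> l \<in> {1..n} \<Longrightarrow>
       ideal_cong Z (rtt_lhs_val sc n (coeff_fun T2) s s' i k j l a b) (rtt_rhs_val sc n (coeff_fun T2) s s' i k j l a b)"
    and C: "\<And>s s' i j k l m m'. i \<in> {1..n} \<Longrightarrow> j \<in> {1..n} \<Longrightarrow> k \<in> {1..n} \<Longrightarrow> l \<in> {1..n} \<Longrightarrow>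
       ideal_cong Z (T1 s i j $$ m * T2 s' k l $$ m') (T2 s' k l $$ m' * T1 s i j $$ m)"
    and idx: "i \<in> {1..n}" "k \<in> {1..n}" "j \<in> {1..n}" "l \<in> {1..n}"
  shows "ideal_cong Z (rtt_lhs_val sc n (coeff_fun (\<lambda>s i j. \<Sum>u\<in>{1..n}. T1 s i u * T2 s u j)) s s' i k j l a b)
              (rtt_rhs_val sc n (coeff_fun (\<lambda>s i j. \<Sum>u\<in>{1..n}. T1 s i u * T2 s u j)) s s' i k j l a b)"
proof -
  interpret Z: two_sided_ideal Z by (rule Z)
  interpret JJ: two_sided_ideal "coeff_ideal (coeff_ideal Z)" by (rule two_sided_ideal.two_sided_ideal_coeff_ideal[OF Z.two_sided_ideal_coeff_ideal])
  let ?N = "{1..n}"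
  define T12 where "T12 = (\<lambda>s i j. \<Sum>u\<in>{1..n}. T1 s i u * T2 s u j)"
  note LR = Z.rtt_series_cong_iff[OF sc]
  let ?A = "\<lambda>p u. in_z (T1 s p u)" and ?B = "\<lambda>u j. in_z (T2 s u j)"
  let ?C = "\<lambda>q v. in_w (T1 s' q v)" and ?D = "\<lambda>v l. in_w (T2 s' v l)"
  let ?\<rho> = "\<lambda>i p k q. R_entry sc s s' (rcoef i p k q)"
  have product_cong: "ideal_cong (coeff_ideal (coeff_ideal Z))
      (\<Sum>p\<in>?N. \<Sum>q\<in>?N. ?\<rho> i p k q * ((\<Sum>u\<in>?N. ?A p u * ?B u j) * (\<Sum>v\<in>?N. ?C q v * ?D v l)))
      (\<Sum>p\<in>?N. \<Sum>q\<in>?N. ((\<Sum>v\<in>?N. ?C k v * ?D v q) * (\<Sum>u\<in>?N. ?A i u * ?B u p)) * ?\<rho> p j q l)"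
  proof (rule JJ.rtt_product_abstract[OF _ _ _ _ idx(1) idx(2) idx(3) idx(4)])
    fix i k u v assume "i \<in> ?N" "k \<in> ?N" "u \<in> ?N" "v \<in> ?N"
    then show "ideal_cong (coeff_ideal (coeff_ideal Z)) (\<Sum>p\<in>?N. \<Sum>q\<in>?N. ?\<rho> i p k q * (?A p u * ?C q v))
        (\<Sum>p\<in>?N. \<Sum>q\<in>?N. (?C k q * ?A i p) * ?\<rho> p u q v)"
      using LR[of n T1 s s' i k u v] R1 unfolding rtt_lhs_series_def rtt_rhs_series_def by blast
  next
    fix p q j l assume "p \<in> ?N" "q \<in> ?N" "j \<in> ?N" "l \<in> ?N"
    then show "ideal_cong (coeff_ideal (coeff_ideal Z)) (\<Sum>u\<in>?N. \<Sum>v\<in>?N. ?\<rho> p u q v * (?B u j * ?D v l))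
        (\<Sum>u\<in>?N. \<Sum>v\<in>?N. (?D q v * ?B p u) * ?\<rho> u j v l)"
      using LR[of n T2 s s' p q j l] R2 unfolding rtt_lhs_series_def rtt_rhs_series_def by blast
  next
    fix u j q v assume "u \<in> ?N" "j \<in> ?N" "q \<in> ?N" "v \<in> ?N"
    then show "ideal_cong (coeff_ideal (coeff_ideal Z)) (?B u j * ?C q v) (?C q v * ?B u j)"
      unfolding ideal_cong_coeff_ideal_iff in_z_in_w_nth in_w_in_z_nth using C by (blast intro: Z.ideal_cong_sym)
  next
    fix i p q v assume "i \<in> ?N" "p \<in> ?N" "q \<in> ?N" "v \<in> ?N"
    then show "ideal_cong (coeff_ideal (coeff_ideal Z)) (?A i p * ?D q v) (?D q v * ?A i p)"
      unfolding ideal_cong_coeff_ideal_iff in_z_in_w_nth in_w_in_z_nth using C by blast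
  qed
  have eA: "(\<Sum>u\<in>?N. ?A p u * ?B u j) = in_z (T12 s p j)" for p j
    by (simp add: T12_def in_z_sum in_z_mult)
  have eC: "(\<Sum>v\<in>?N. ?C q v * ?D v l) = in_w (T12 s' q l)" for q l
    by (simp add: T12_def in_w_sum in_w_mult)
  have "ideal_cong (coeff_ideal (coeff_ideal Z)) (rtt_lhs_series sc n T12 s s' i k j l) (rtt_rhs_series sc n T12 s s' i k j l)"
    using product_cong unfolding eA eC rtt_lhs_series_def rtt_rhs_series_def .
  then show ?thesis unfolding LR T12_def by blast
qed

inductive_set subalg :: "'a::ring_1 set \<Rightarrow> (K \<Rightarrow> 'a) \<Rightarrow> 'a set" for S sc where
  sub_gen: "x \<in> S \<Longrightarrow> x \<in> subalg S sc"
| sub_sc: "sc k \<in> subalg S sc"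
| sub_add: "x \<in> subalg S sc \<Longrightarrow> y \<in> subalg S sc \<Longrightarrow> x + y \<in> subalg S sc"
| sub_mult: "x \<in> subalg S sc \<Longrightarrow> y \<in> subalg S sc \<Longrightarrow> x * y \<in> subalg S sc"
| sub_neg: "x \<in> subalg S sc \<Longrightarrow> - x \<in> subalg S sc"

lemma sub_zero: "central_hom sc \<Longrightarrow> 0 \<in> subalg S sc"
  using sub_sc[of sc 0 S] by (simp add: central_hom_def)
lemma sub_one: "central_hom sc \<Longrightarrow> 1 \<in> subalg S sc"
  using sub_sc[of sc 1 S] by (simp add: central_hom_def)
lemma sub_sum: "central_hom sc \<Longrightarrow> (\<And>i. i \<in> A \<Longrightarrow> f i \<in> subalg S sc) \<Longrightarrow> sum f A \<in> subalg S sc"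
  by (induction A rule: infinite_finite_induct) (auto intro: sub_zero sub_add)

definition coeffs_in :: "'a::ring_1 set \<Rightarrow> 'a fls \<Rightarrow> bool" where "coeffs_in S f \<longleftrightarrow> (\<forall>m. f $$ m \<in> S)"

lemma coeffs_in_mult: "central_hom sc \<Longrightarrow> coeffs_in (subalg S sc) f \<Longrightarrow> coeffs_in (subalg S sc) g \<Longrightarrow> coeffs_in (subalg S sc) (f * g)"
  unfolding coeffs_in_def fls_times_nth(2) by (auto intro!: sub_sum sub_mult)
lemma coeffs_in_sum: "central_hom sc \<Longrightarrow> (\<And>i. i \<in> A \<Longrightarrow> coeffs_in (subalg S sc) (f i)) \<Longrightarrow> coeffs_in (subalg S sc) (sum f A)"
  unfolding coeffs_in_def fls_nth_sum by (auto intro!: sub_sum)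

context two_sided_ideal
begin

lemma subalg_commute_elem:
  assumes sc: "central_hom sc" and a: "\<And>b. b \<in> S2 \<Longrightarrow> ideal_cong I (a * b) (b * a)"
  shows "y \<in> subalg S2 sc \<Longrightarrow> ideal_cong I (a * y) (y * a)"
proof (induction rule: subalg.induct)
  case (sub_gen x) then show ?case by (rule a)
next
  case (sub_sc k) then show ?case using central_homD(5)[OF sc] by simp
next
  case (sub_add x y)
  then show ?case by (simp add: distrib_left distrib_right ideal_cong_add)
next
  case (sub_mult x y)
  have "ideal_cong I (a * (x * y)) ((x * a) * y)"
    using ideal_cong_mult_right[OF sub_mult.IH(1), of y] by (simp add: mult.assoc)
  also have "(x * a) * y = x * (a * y)" by (simp add: mult.assoc)
  also have "ideal_cong I \<dots> (x * (y * a))" by (rule ideal_cong_mult_left[OF sub_mult.IH(2)])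
  finally show ?case by (simp add: mult.assoc)
next
  case (sub_neg x) then show ?case using ideal_cong_uminus by simp
qed

lemma subalg_commute:
  assumes sc: "central_hom sc" and ab: "\<And>a b. a \<in> S1 \<Longrightarrow> b \<in> S2 \<Longrightarrow> ideal_cong I (a * b) (b * a)"
    and y: "y \<in> subalg S2 sc"
  shows "x \<in> subalg S1 sc \<Longrightarrow> ideal_cong I (x * y) (y * x)"
proof (induction rule: subalg.induct)
  case (sub_gen x) then show ?case using subalg_commute_elem[OF sc _ y] ab by blast
next
  case (sub_sc k) then show ?case using central_homD(5)[OF sc] by simp
next
  case (sub_add x1 x2)
  then show ?case by (simp add: distrib_left distrib_right ideal_cong_add)
next
  case (sub_mult x1 x2)
  have "ideal_cong I ((x1 * x2) * y) (x1 * (y * x2))"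
    using ideal_cong_mult_left[OF sub_mult.IH(2), of x1] by (simp add: mult.assoc)
  also have "x1 * (y * x2) = (x1 * y) * x2" by (simp add: mult.assoc)
  also have "ideal_cong I \<dots> ((y * x1) * x2)" by (rule ideal_cong_mult_right[OF sub_mult.IH(1)])
  finally show ?case by (simp add: mult.assoc)
next
  case (sub_neg x) then show ?case using ideal_cong_uminus by simp
qed

end

context two_sided_ideal
begin

lemma rtt_lhs_val_cong:
  assumes "\<And>s p j m. p \<in> {1..n} \<Longrightarrow> j \<in> {1..n} \<Longrightarrow> ideal_cong I (X s p j m) (Y s p j m)"
    and "j \<in> {1..n}" "l \<in> {1..n}"
  shows "ideal_cong I (rtt_lhs_val sc n X s s' i k j l a b) (rtt_lhs_val sc n Y s s' i k j l a b)"
  unfolding rtt_lhs_val_def using assms by (intro ideal_cong_sum ideal_cong_add ideal_cong_mult_left ideal_cong_mult) auto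

lemma rtt_rhs_val_cong:
  assumes "\<And>s p j m. p \<in> {1..n} \<Longrightarrow> j \<in> {1..n} \<Longrightarrow> ideal_cong I (X s p j m) (Y s p j m)"
    and "i \<in> {1..n}" "k \<in> {1..n}"
  shows "ideal_cong I (rtt_rhs_val sc n X s s' i k j l a b) (rtt_rhs_val sc n Y s s' i k j l a b)"
  unfolding rtt_rhs_val_def using assms by (intro ideal_cong_sum ideal_cong_add ideal_cong_mult_left ideal_cong_mult) auto

end

locale rtt_model =
  fixes n :: nat and cp cm :: "nat \<Rightarrow> int" and Z :: "'a::ring_1 set" and sc :: "K \<Rightarrow> 'a"
    and w :: "gen \<Rightarrow> 'a"
  assumes Z: "two_sided_ideal Z" and sc: "central_hom sc"
    and W: "\<And>a b. (a, b) \<in> rtt_rels n cp cm \<Longrightarrow> ideal_cong Z (fexpr_eval sc w a) (fexpr_eval sc w b)"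
begin

interpretation Z: two_sided_ideal Z by (rule Z)

definition T_series :: "bool \<Rightarrow> nat \<Rightarrow> nat \<Rightarrow> 'a fls" where
  "T_series s i j = ldu_entry (F_series w s) (G_series cp cm w s) (E_series w s) i j"

lemma TG_cong: "i \<in> {1..n} \<Longrightarrow> j \<in> {1..n} \<Longrightarrow> ideal_cong Z (w (TG s i j m)) (T_series s i j $$ orient s m)"
proof -
  assume ij: "i \<in> {1..n}" "j \<in> {1..n}"
  have "(Gen (TG s i j m), gauss_coeff cp cm s i j m) \<in> rtt_rels n cp cm"
    using ij by (rule rel_gauss)
  from W[OF this] show ?thesis by (simp add: fexpr_eval_gauss_coeff[OF sc] T_series_def)
qed

lemma rtt_T_series: "i \<in> {1..n} \<Longrightarrow> k \<in> {1..n} \<Longrightarrow> j \<in> {1..n} \<Longrightarrow> l \<in> {1..n} \<Longrightarrow>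
    ideal_cong Z (rtt_lhs_val sc n (coeff_fun T_series) s s' i k j l a b) (rtt_rhs_val sc n (coeff_fun T_series) s s' i k j l a b)"
proof -
  assume idx: "i \<in> {1..n}" "k \<in> {1..n}" "j \<in> {1..n}" "l \<in> {1..n}"
  have "(rtt_lhs n s s' i k j l a b, rtt_rhs n s s' i k j l a b) \<in> rtt_rels n cp cm"
    using idx by (rule rel_rtt)
  from W[OF this] have h: "ideal_cong Z (rtt_lhs_val sc n (\<lambda>s i j m. w (TG s i j m)) s s' i k j l a b)
      (rtt_rhs_val sc n (\<lambda>s i j m. w (TG s i j m)) s s' i k j l a b)"
    by (simp add: fexpr_eval_rtt_lhs[OF sc] fexpr_eval_rtt_rhs[OF sc])
  have X: "ideal_cong Z (w (TG s p j m)) (coeff_fun T_series s p j m)" if "p \<in> {1..n}" "j \<in> {1..n}" for s p j m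
    using TG_cong[OF that] by (simp add: coeff_fun_def)
  have "ideal_cong Z (rtt_lhs_val sc n (coeff_fun T_series) s s' i k j l a b) (rtt_lhs_val sc n (\<lambda>s i j m. w (TG s i j m)) s s' i k j l a b)"
    by (rule Z.rtt_lhs_val_cong[OF Z.ideal_cong_sym[OF X]]) (use idx in auto)
  also note h
  also have "ideal_cong Z (rtt_rhs_val sc n (\<lambda>s i j m. w (TG s i j m)) s s' i k j l a b) (rtt_rhs_val sc n (coeff_fun T_series) s s' i k j l a b)"
    by (rule Z.rtt_rhs_val_cong[OF X]) (use idx in auto)
  finally show ?thesis .
qed

definition G_lead :: "bool \<Rightarrow> nat \<Rightarrow> 'a" where
  "G_lead s l = w (GG s l (orient s (- c_of cp cm s l)))"

lemma G_series_lead: "G_series cp cm w s l $$ (- c_of cp cm s l) = G_lead s l"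
  by (simp add: G_series_nth G_lead_def)

lemma G_lead_inverse: "l \<in> {1..n} \<Longrightarrow> ideal_cong Z (G_lead s l * w (GI s l)) 1 \<and> ideal_cong Z (w (GI s l) * G_lead s l) 1"
proof -
  assume l: "l \<in> {1..n}"
  have sc1: "sc 1 = 1" using sc by (simp add: central_hom_def)
  show ?thesis
  proof (cases s)
    case True
    have "(Mul (Gen (GG True l (- cp l))) (Gen (GI True l)), Sc 1) \<in> rtt_rels n cp cm"
         "(Mul (Gen (GI True l)) (Gen (GG True l (- cp l))), Sc 1) \<in> rtt_rels n cp cm"
      using l by (rule rel_inv1, rule rel_inv2)
    from W[OF this(1)] W[OF this(2)] show ?thesis using True sc1 by (simp add: G_lead_def c_of_def)
  next
    case False
    have "(Mul (Gen (GG False l (cm l))) (Gen (GI False l)), Sc 1) \<in> rtt_rels n cp cm"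
         "(Mul (Gen (GI False l)) (Gen (GG False l (cm l))), Sc 1) \<in> rtt_rels n cp cm"
      using l by (rule rel_inv3, rule rel_inv4)
    from W[OF this(1)] W[OF this(2)] show ?thesis using False sc1 by (simp add: G_lead_def c_of_def)
  qed
qed

definition G_inv :: "bool \<Rightarrow> nat \<Rightarrow> 'a fls" where
  "G_inv s l = fls_rinv (G_series cp cm w s l) (- c_of cp cm s l) (w (GI s l))"

lemma G_inv_inverse: "l \<in> {1..n} \<Longrightarrow> ideal_cong (coeff_ideal Z) (G_series cp cm w s l * G_inv s l) 1 \<and> ideal_cong (coeff_ideal Z) (G_inv s l * G_series cp cm w s l) 1"
proof -
  assume l: "l \<in> {1..n}"
  from G_lead_inverse[OF l, of s] have "ideal_cong Z (w (GI s l) * G_series cp cm w s l $$ (- c_of cp cm s l)) 1"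
    "ideal_cong Z (G_series cp cm w s l $$ (- c_of cp cm s l) * w (GI s l)) 1" by (simp_all add: G_series_lead)
  from Z.fls_rinv_inverse[OF vanishes_below_G_series this] show ?thesis by (simp add: G_inv_def)
qed

lemma vanishes_below_G_inv: "vanishes_below (G_inv s l) (c_of cp cm s l)"
  using vanishes_below_fls_rinv[of "G_series cp cm w s l" "- c_of cp cm s l" "w (GI s l)"] by (simp add: G_inv_def)

lemma vanishes_below_T_series: "i \<in> {1..n} \<Longrightarrow> j \<in> {1..n} \<Longrightarrow> vanishes_below (T_series s i j) (- c_bound n cp cm)"
  unfolding T_series_def ldu_entry_def
proof (intro vanishes_below_sum)
  fix l assume "i \<in> {1..n}" "j \<in> {1..n}" "l \<in> {1..min i j}"
  then have l: "l \<in> {1..n}" by auto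
  have "vanishes_below (F_series w s i l * G_series cp cm w s l * E_series w s l j) (0 + - c_of cp cm s l + 0)"
    by (intro vanishes_below_mult vanishes_below_F_series vanishes_below_G_series vanishes_below_E_series)
  then show "vanishes_below (F_series w s i l * G_series cp cm w s l * E_series w s l j) (- c_bound n cp cm)"
    by (rule vanishes_below_mono) (use c_of_le_c_bound[OF l, of cp cm s] in auto)
qed

lemma T_series_coeffs_in: "coeffs_in (subalg (w ` rtt_gens n cp cm) sc) (T_series s i j)" if "i \<in> {1..n}" "j \<in> {1..n}"
proof -
  let ?S = "subalg (w ` rtt_gens n cp cm) sc"
  have g: "w x \<in> ?S" if "x \<in> rtt_gens n cp cm" for x using that by (auto intro: sub_gen)
  have z: "0 \<in> ?S" "1 \<in> ?S" using sub_zero[OF sc] sub_one[OF sc] by auto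
  show ?thesis unfolding T_series_def ldu_entry_def
  proof (intro coeffs_in_sum[OF sc] coeffs_in_mult[OF sc])
    fix l assume l: "l \<in> {1..min i j}"
    show "coeffs_in ?S (F_series w s i l)" unfolding coeffs_in_def
    proof
      fix m show "F_series w s i l $$ m \<in> ?S"
        unfolding F_series_nth using l that z by (auto intro!: g FG_in)
    qed
    show "coeffs_in ?S (G_series cp cm w s l)" unfolding coeffs_in_def
    proof
      fix m show "G_series cp cm w s l $$ m \<in> ?S"
        unfolding G_series_nth using l that z by (auto intro!: g GG_in)
    qed
    show "coeffs_in ?S (E_series w s l j)" unfolding coeffs_in_def
    proof
      fix m show "E_series w s l j $$ m \<in> ?S"
        unfolding E_series_nth using l that z by (auto intro!: g EG_in)
    qed
  qed
qed

end

section \<open>The coproduct\<close>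

locale coproduct_model =
  fixes n :: nat and cp1 cm1 cp2 cm2 :: "nat \<Rightarrow> int" and Z :: "'a::ring_1 set" and sc :: "K \<Rightarrow> 'a"
    and w1 w2 :: "gen \<Rightarrow> 'a"
  assumes Z: "two_sided_ideal Z" and sc: "central_hom sc"
    and dom: "dominant n cp1" "dominant n cm1" "dominant n cp2" "dominant n cm2"
    and W1: "\<And>a b. (a, b) \<in> rtt_rels n cp1 cm1 \<Longrightarrow> ideal_cong Z (fexpr_eval sc w1 a) (fexpr_eval sc w1 b)"
    and W2: "\<And>a b. (a, b) \<in> rtt_rels n cp2 cm2 \<Longrightarrow> ideal_cong Z (fexpr_eval sc w2 a) (fexpr_eval sc w2 b)"
    and CM: "\<And>x y. x \<in> rtt_gens n cp1 cm1 \<Longrightarrow> y \<in> rtt_gens n cp2 cm2 \<Longrightarrow> ideal_cong Z (w1 x * w2 y) (w2 y * w1 x)"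
begin

sublocale A1: rtt_model n cp1 cm1 Z sc w1 by (rule rtt_model.intro[OF Z sc]) (rule W1)
sublocale A2: rtt_model n cp2 cm2 Z sc w2 by (rule rtt_model.intro[OF Z sc]) (rule W2)

interpretation Z: two_sided_ideal Z by (rule Z)
interpretation ZF: two_sided_ideal "coeff_ideal Z" by (rule Z.two_sided_ideal_coeff_ideal)

definition T_prod :: "bool \<Rightarrow> nat \<Rightarrow> nat \<Rightarrow> 'a fls" where
  "T_prod s i j = (\<Sum>u\<in>{1..n}. A1.T_series s i u * A2.T_series s u j)"

lemma T_series_commute: "i \<in> {1..n} \<Longrightarrow> j \<in> {1..n} \<Longrightarrow> k \<in> {1..n} \<Longrightarrow> l \<in> {1..n} \<Longrightarrow>
   ideal_cong Z (A1.T_series s i j $$ m * A2.T_series s' k l $$ m') (A2.T_series s' k l $$ m' * A1.T_series s i j $$ m)"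
proof -
  assume idx: "i \<in> {1..n}" "j \<in> {1..n}" "k \<in> {1..n}" "l \<in> {1..n}"
  have x: "A1.T_series s i j $$ m \<in> subalg (w1 ` rtt_gens n cp1 cm1) sc"
    using A1.T_series_coeffs_in[OF idx(1,2)] unfolding coeffs_in_def by blast
  have y: "A2.T_series s' k l $$ m' \<in> subalg (w2 ` rtt_gens n cp2 cm2) sc"
    using A2.T_series_coeffs_in[OF idx(3,4)] unfolding coeffs_in_def by blast
  show ?thesis by (rule Z.subalg_commute[OF sc _ y x]) (auto intro: CM)
qed

lemma rtt_T_prod: "i \<in> {1..n} \<Longrightarrow> k \<in> {1..n} \<Longrightarrow> j \<in> {1..n} \<Longrightarrow> l \<in> {1..n} \<Longrightarrow>
    ideal_cong Z (rtt_lhs_val sc n (coeff_fun T_prod) s s' i k j l a b) (rtt_rhs_val sc n (coeff_fun T_prod) s s' i k j l a b)"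
  unfolding T_prod_def[abs_def]
  by (rule rtt_product[OF Z sc A1.rtt_T_series A2.rtt_T_series T_series_commute]) auto

definition N_bound :: int where "N_bound = c_bound n cp1 cm1 + c_bound n cp2 cm2"

lemma T_prod_window:
  assumes ij: "i \<in> {1..n}" "j \<in> {1..n}" and N: "\<bar>m\<bar> + N_bound \<le> N"
  shows "ideal_cong Z (\<Sum>k\<in>{1..n}. \<Sum>r\<in>{-N..N}. w1 (TG s i k r) * w2 (TG s k j (m - r))) (T_prod s i j $$ orient s m)"
proof -
  have "ideal_cong Z (\<Sum>k\<in>{1..n}. \<Sum>r\<in>{-N..N}. w1 (TG s i k r) * w2 (TG s k j (m - r)))
     (\<Sum>k\<in>{1..n}. \<Sum>r\<in>{-N..N}. A1.T_series s i k $$ orient s r * A2.T_series s k j $$ orient s (m - r))"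
    by (intro Z.ideal_cong_sum Z.ideal_cong_mult A1.TG_cong A2.TG_cong) (use ij in auto)
  also have "(\<Sum>k\<in>{1..n}. \<Sum>r\<in>{-N..N}. A1.T_series s i k $$ orient s r * A2.T_series s k j $$ orient s (m - r))
     = (\<Sum>k\<in>{1..n}. \<Sum>x\<in>{-N..N}. A1.T_series s i k $$ x * A2.T_series s k j $$ (orient s m - x))"
  proof (rule sum.cong[OF HOL.refl])
    fix k
    show "(\<Sum>r\<in>{-N..N}. A1.T_series s i k $$ orient s r * A2.T_series s k j $$ orient s (m - r))
      = (\<Sum>x\<in>{-N..N}. A1.T_series s i k $$ x * A2.T_series s k j $$ (orient s m - x))"
      using sum_orient_symmetric[where f = "\<lambda>x. A1.T_series s i k $$ x * A2.T_series s k j $$ (orient s m - x)" and K = N and s = s]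
      by (simp add: orient_diff)
  qed
  also have "\<dots> = (\<Sum>k\<in>{1..n}. (A1.T_series s i k * A2.T_series s k j) $$ orient s m)"
  proof (intro sum.cong HOL.refl)
    fix k assume k: "k \<in> {1..n}"
    have incl: "{- c_bound n cp1 cm1..orient s m - - c_bound n cp2 cm2} \<subseteq> {-N..N}"
      using N c_bound_nonneg[of n cp1 cm1] c_bound_nonneg[of n cp2 cm2] unfolding N_bound_def by (auto simp: orient_def)
    then show "(\<Sum>x\<in>{-N..N}. A1.T_series s i k $$ x * A2.T_series s k j $$ (orient s m - x)) = (A1.T_series s i k * A2.T_series s k j) $$ orient s m"
      using fls_mult_nth_window[OF A1.vanishes_below_T_series[OF ij(1) k] A2.vanishes_below_T_series[OF k ij(2)] incl] by simp
  qed
  also have "\<dots> = T_prod s i j $$ orient s m" by (simp add: T_prod_def fls_nth_sum)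
  finally show ?thesis .
qed

text \<open>Writing \<open>T\<^sub>1 T\<^sub>2 = F\<^sub>1 G\<^sub>1 (E\<^sub>1 F\<^sub>2) G\<^sub>2 E\<^sub>2\<close>, the middle matrix has a Gauss decomposition
  \<open>F_mid G_mid E_mid\<close>; conjugating \<open>F_mid\<close> by \<open>G\<^sub>1\<close> and \<open>E_mid\<close> by \<open>G\<^sub>2\<close> gives the factors
  \<open>F_delta = F\<^sub>1 C_mat\<close>, \<open>G_delta = G\<^sub>1 G_mid G\<^sub>2\<close>, \<open>E_delta = D_mat E\<^sub>2\<close> of the product.
  Dominance of the coweights keeps the conjugated factors within the required supports.\<close>

definition EF_mat :: "bool \<Rightarrow> 'a fls mat" where "EF_mat s = mat_mult n (E_series w1 s) (F_series w2 s)"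

lemma valuation_bounds_EF_mat: "valuation_bounds (ord_F s) (ord_E s) n (EF_mat s) 0"
  unfolding valuation_bounds_def
proof (intro ballI conjI impI)
  fix i j assume i: "i \<in> {0<..n}" and "j \<in> {0<..n}"
  let ?t = "\<lambda>k. E_series w1 s i k * F_series w2 s k j"
  have EF: "EF_mat s i j = (\<Sum>k\<in>{1..n}. ?t k)" by (simp add: EF_mat_def mat_mult_def)
  have t_zero: "?t k = 0" if "k < i \<or> k < j" for k
    using that upper_unitri_E_series[of w1 s] lower_unitri_F_series[of w2 s]
    by (auto simp: upper_unitri_def lower_unitri_def)
  have t_bound: "vanishes_below (?t k) ((if i = k then 0 else ord_E s) + (if j = k then 0 else ord_F s))" for k
    by (rule vanishes_below_mult[OF vanishes_below_E_series_entry vanishes_below_F_series_entry])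
  show "vanishes_below (EF_mat s i j) (ord_F s)" if "j < i"
    unfolding EF
  proof (rule vanishes_below_sum)
    fix k show "vanishes_below (?t k) (ord_F s)"
      by (cases "k < i") (simp add: t_zero, rule vanishes_below_mono[OF t_bound], use that ord_F_E[of s] in auto)
  qed
  show "vanishes_below (EF_mat s i j) (ord_E s)" if "i < j"
    unfolding EF
  proof (rule vanishes_below_sum)
    fix k show "vanishes_below (?t k) (ord_E s)"
      by (cases "k < j") (simp add: t_zero, rule vanishes_below_mono[OF t_bound], use that ord_F_E[of s] in auto)
  qed
  show "vanishes_below (EF_mat s i i - 1) 1" if "i = j"
  proof -
    have "?t i = 1"
      using that upper_unitri_E_series[of w1 s] lower_unitri_F_series[of w2 s]
      by (simp add: upper_unitri_def lower_unitri_def)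
    moreover have "EF_mat s i j = ?t i + (\<Sum>k\<in>{1..n} - {i}. ?t k)"
      unfolding EF by (rule sum.remove) (use i in auto)
    ultimately have "EF_mat s i i - 1 = (\<Sum>k\<in>{1..n} - {i}. ?t k)" using that by simp
    also have "vanishes_below \<dots> 1"
    proof (rule vanishes_below_sum)
      fix k assume "k \<in> {1..n} - {i}"
      then show "vanishes_below (?t k) 1"
        by (cases "k < i") (simp add: t_zero, rule vanishes_below_mono[OF t_bound], use that ord_F_E[of s] in auto)
    qed
    finally show ?thesis .
  qed
qed

abbreviation "F_mid s \<equiv> ldu_F (EF_mat s)"
abbreviation "G_mid s \<equiv> ldu_G (EF_mat s)"
abbreviation "E_mid s \<equiv> ldu_E (EF_mat s)"

lemma G_mid_unit: "l \<in> {1..n} \<Longrightarrow> vanishes_below (G_mid s l - 1) 1"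
  using ldu_factor_bounds(1)[OF ord_F_E(1) ord_F_E(2) _ valuation_bounds_EF_mat] ord_F_E(3) by simp
lemma vanishes_below_F_mid: "1 \<le> k \<Longrightarrow> k < i \<Longrightarrow> i \<le> n \<Longrightarrow> vanishes_below (F_mid s i k) (ord_F s)"
  using ldu_factor_bounds(2)[OF ord_F_E(1) ord_F_E(2) _ valuation_bounds_EF_mat] ord_F_E(3) by simp
lemma vanishes_below_E_mid: "1 \<le> k \<Longrightarrow> k < j \<Longrightarrow> j \<le> n \<Longrightarrow> vanishes_below (E_mid s k j) (ord_E s)"
  using ldu_factor_bounds(3)[OF ord_F_E(1) ord_F_E(2) _ valuation_bounds_EF_mat] ord_F_E(3) by simp
lemma EF_mat_ldu: "i \<in> {1..n} \<Longrightarrow> j \<in> {1..n} \<Longrightarrow> ideal_cong (coeff_ideal Z) (ldu_entry (F_mid s) (G_mid s) (E_mid s) i j) (EF_mat s i j)"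
  using ldu_entry_cong[OF Z ord_F_E(1) ord_F_E(2) _ valuation_bounds_EF_mat] ord_F_E(3) by simp

definition C_mat :: "bool \<Rightarrow> 'a fls mat" where
  "C_mat s i j = (if i = j then 1 else if j < i then G_series cp1 cm1 w1 s i * F_mid s i j * A1.G_inv s j else 0)"
definition D_mat :: "bool \<Rightarrow> 'a fls mat" where
  "D_mat s i j = (if i = j then 1 else if i < j then A2.G_inv s i * E_mid s i j * G_series cp2 cm2 w2 s j else 0)"
definition F_delta :: "bool \<Rightarrow> 'a fls mat" where
  "F_delta s i j = (if i = j then 1 else if j < i then mat_mult n (F_series w1 s) (C_mat s) i j else 0)"
definition G_delta :: "bool \<Rightarrow> nat \<Rightarrow> 'a fls" where
  "G_delta s l = G_series cp1 cm1 w1 s l * G_mid s l * G_series cp2 cm2 w2 s l"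
definition E_delta :: "bool \<Rightarrow> 'a fls mat" where
  "E_delta s i j = (if i = j then 1 else if i < j then mat_mult n (D_mat s) (E_series w2 s) i j else 0)"

lemma lower_unitri_F_delta: "lower_unitri (F_delta s)" by (simp add: lower_unitri_def F_delta_def)
lemma upper_unitri_E_delta: "upper_unitri (E_delta s)" by (simp add: upper_unitri_def E_delta_def)

lemma c_of_mono1: "1 \<le> j \<Longrightarrow> j \<le> k \<Longrightarrow> k \<le> n \<Longrightarrow> c_of cp1 cm1 s k \<le> c_of cp1 cm1 s j"
  using dominant_mono[OF dom(1)] dominant_mono[OF dom(2)] by (auto simp: c_of_def)
lemma c_of_mono2: "1 \<le> j \<Longrightarrow> j \<le> k \<Longrightarrow> k \<le> n \<Longrightarrow> c_of cp2 cm2 s k \<le> c_of cp2 cm2 s j"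
  using dominant_mono[OF dom(3)] dominant_mono[OF dom(4)] by (auto simp: c_of_def)

lemma vanishes_below_C_mat: "1 \<le> j \<Longrightarrow> j \<le> k \<Longrightarrow> k \<le> n \<Longrightarrow> vanishes_below (C_mat s k j) (if k = j then 0 else ord_F s)"
proof -
  assume jk: "1 \<le> j" "j \<le> k" "k \<le> n"
  show ?thesis
  proof (cases "k = j")
    case True then show ?thesis by (simp add: C_mat_def vanishes_below_one)
  next
    case False
    then have jk': "j < k" using jk by simp
    have e: "C_mat s k j = G_series cp1 cm1 w1 s k * F_mid s k j * A1.G_inv s j" using jk' by (simp add: C_mat_def)
    have "vanishes_below (C_mat s k j) (- c_of cp1 cm1 s k + ord_F s + c_of cp1 cm1 s j)"
      unfolding e by (rule vanishes_below_mult[OF vanishes_below_mult[OF vanishes_below_G_series vanishes_below_F_mid] A1.vanishes_below_G_inv]) (use jk jk' in auto)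
    then show ?thesis using False c_of_mono1[OF jk] by (auto elim: vanishes_below_mono)
  qed
qed

lemma vanishes_below_D_mat: "1 \<le> i \<Longrightarrow> i \<le> k \<Longrightarrow> k \<le> n \<Longrightarrow> vanishes_below (D_mat s i k) (if i = k then 0 else ord_E s)"
proof -
  assume ik: "1 \<le> i" "i \<le> k" "k \<le> n"
  show ?thesis
  proof (cases "i = k")
    case True then show ?thesis by (simp add: D_mat_def vanishes_below_one)
  next
    case False
    then have ik': "i < k" using ik by simp
    have e: "D_mat s i k = A2.G_inv s i * E_mid s i k * G_series cp2 cm2 w2 s k" using ik' by (simp add: D_mat_def)
    have "vanishes_below (D_mat s i k) (c_of cp2 cm2 s i + ord_E s + - c_of cp2 cm2 s k)"
      unfolding e by (rule vanishes_below_mult[OF vanishes_below_mult[OF A2.vanishes_below_G_inv vanishes_below_E_mid] vanishes_below_G_series]) (use ik ik' in auto)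
    then show ?thesis using False c_of_mono2[OF ik] by (auto elim: vanishes_below_mono)
  qed
qed

lemma vanishes_below_F_delta: "1 \<le> j \<Longrightarrow> j < i \<Longrightarrow> i \<le> n \<Longrightarrow> vanishes_below (F_delta s i j) (ord_F s)"
proof -
  assume ji: "1 \<le> j" "j < i" "i \<le> n"
  have e: "F_delta s i j = (\<Sum>k\<in>{1..n}. F_series w1 s i k * C_mat s k j)" using ji by (simp add: F_delta_def mat_mult_def)
  show ?thesis unfolding e
  proof (rule vanishes_below_sum)
    fix k assume k: "k \<in> {1..n}"
    show "vanishes_below (F_series w1 s i k * C_mat s k j) (ord_F s)"
    proof (cases "i < k \<or> k < j")
      case True
      moreover have "F_series w1 s i k = 0" if "i < k" using lower_unitri_F_series[of w1 s] that by (auto simp: lower_unitri_def)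
      moreover have "C_mat s k j = 0" if "k < j" using that by (simp add: C_mat_def)
      ultimately show ?thesis by auto
    next
      case False
      then have kk: "j \<le> k" "k \<le> i" by auto
      have l1: "vanishes_below (F_series w1 s i k) (if k = i then 0 else ord_F s)"
        by (rule vanishes_below_F_series_entry)
      have l2: "vanishes_below (C_mat s k j) (if k = j then 0 else ord_F s)" by (rule vanishes_below_C_mat) (use kk ji in auto)
      have "vanishes_below (F_series w1 s i k * C_mat s k j) ((if k = i then 0 else ord_F s) + (if k = j then 0 else ord_F s))"
        by (rule vanishes_below_mult[OF l1 l2])
      then show ?thesis using ji ord_F_E(1)[of s] by (auto elim: vanishes_below_mono)
    qed
  qed
qed

lemma vanishes_below_E_delta: "1 \<le> i \<Longrightarrow> i < j \<Longrightarrow> j \<le> n \<Longrightarrow> vanishes_below (E_delta s i j) (ord_E s)"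
proof -
  assume ij: "1 \<le> i" "i < j" "j \<le> n"
  have e: "E_delta s i j = (\<Sum>k\<in>{1..n}. D_mat s i k * E_series w2 s k j)" using ij by (simp add: E_delta_def mat_mult_def)
  show ?thesis unfolding e
  proof (rule vanishes_below_sum)
    fix k assume k: "k \<in> {1..n}"
    show "vanishes_below (D_mat s i k * E_series w2 s k j) (ord_E s)"
    proof (cases "k < i \<or> j < k")
      case True
      moreover have "E_series w2 s k j = 0" if "j < k" using upper_unitri_E_series[of w2 s] that by (auto simp: upper_unitri_def)
      moreover have "D_mat s i k = 0" if "k < i" using that by (simp add: D_mat_def)
      ultimately show ?thesis by auto
    next
      case False
      then have kk: "i \<le> k" "k \<le> j" by auto
      have l1: "vanishes_below (D_mat s i k) (if i = k then 0 else ord_E s)" by (rule vanishes_below_D_mat) (use kk ij in auto)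
      have l2: "vanishes_below (E_series w2 s k j) (if k = j then 0 else ord_E s)"
        by (rule vanishes_below_E_series_entry)
      have "vanishes_below (D_mat s i k * E_series w2 s k j) ((if i = k then 0 else ord_E s) + (if k = j then 0 else ord_E s))"
        by (rule vanishes_below_mult[OF l1 l2])
      then show ?thesis using ij ord_F_E(2)[of s] by (auto elim: vanishes_below_mono)
    qed
  qed
qed

definition c_sum :: "bool \<Rightarrow> nat \<Rightarrow> int" where "c_sum s l = c_of cp1 cm1 s l + c_of cp2 cm2 s l"

lemma vanishes_below_G_delta: "l \<in> {1..n} \<Longrightarrow> vanishes_below (G_delta s l) (- c_sum s l)"
proof -
  assume l: "l \<in> {1..n}"
  have "vanishes_below (G_delta s l) (- c_of cp1 cm1 s l + 0 + - c_of cp2 cm2 s l)"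
    unfolding G_delta_def by (intro vanishes_below_mult vanishes_below_G_series pivot_props(1) G_mid_unit l)
  then show ?thesis by (simp add: c_sum_def)
qed

lemma G_delta_lead: "l \<in> {1..n} \<Longrightarrow> G_delta s l $$ (- c_sum s l) = A1.G_lead s l * A2.G_lead s l"
proof -
  assume l: "l \<in> {1..n}"
  have g: "vanishes_below (G_mid s l) 0" "G_mid s l $$ 0 = 1" using pivot_props[OF G_mid_unit[OF l]] by auto
  have "G_delta s l $$ (- c_of cp1 cm1 s l + 0 + - c_of cp2 cm2 s l)
      = (G_series cp1 cm1 w1 s l * G_mid s l) $$ (- c_of cp1 cm1 s l + 0) * G_series cp2 cm2 w2 s l $$ (- c_of cp2 cm2 s l)"
    unfolding G_delta_def by (rule fls_mult_nth_lowest[OF vanishes_below_mult[OF vanishes_below_G_series g(1)] vanishes_below_G_series])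
  also have "(G_series cp1 cm1 w1 s l * G_mid s l) $$ (- c_of cp1 cm1 s l + 0) = G_series cp1 cm1 w1 s l $$ (- c_of cp1 cm1 s l) * G_mid s l $$ 0"
    by (rule fls_mult_nth_lowest[OF vanishes_below_G_series g(1)])
  finally show ?thesis using g(2) by (simp add: c_sum_def A1.G_series_lead A2.G_series_lead)
qed

lemma diag_G_F_mid_conj: "mat_cong n (coeff_ideal Z) (mat_mult n (diag_mat (G_series cp1 cm1 w1 s)) (F_mid s)) (mat_mult n (C_mat s) (diag_mat (G_series cp1 cm1 w1 s)))"
  unfolding mat_cong_def
proof (intro ballI)
  fix i j assume i: "i \<in> {1..n}" and j: "j \<in> {1..n}"
  let ?G = "G_series cp1 cm1 w1 s"
  have l: "mat_mult n (diag_mat ?G) (F_mid s) i j = ?G i * F_mid s i j" by (rule mat_mult_diag_left[OF i])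
  have r: "mat_mult n (C_mat s) (diag_mat ?G) i j = C_mat s i j * ?G j" by (rule mat_mult_diag_right[OF j])
  show "ideal_cong (coeff_ideal Z) (mat_mult n (diag_mat ?G) (F_mid s) i j) (mat_mult n (C_mat s) (diag_mat ?G) i j)"
    unfolding l r
  proof (cases "i = j")
    case True then show "ideal_cong (coeff_ideal Z) (?G i * F_mid s i j) (C_mat s i j * ?G j)"
      using lower_unitri_ldu_F[of "EF_mat s"] by (simp add: lower_unitri_def C_mat_def)
  next
    case False
    show "ideal_cong (coeff_ideal Z) (?G i * F_mid s i j) (C_mat s i j * ?G j)"
    proof (cases "j < i")
      case True
      have "ideal_cong (coeff_ideal Z) (?G i * F_mid s i j * (A1.G_inv s j * ?G j)) (?G i * F_mid s i j * 1)"
        by (rule ZF.ideal_cong_mult_left) (use A1.G_inv_inverse[OF j] in blast)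
      then show ?thesis using True False by (simp add: C_mat_def mult.assoc ZF.ideal_cong_sym)
    next
      case False2: False
      then have "i < j" using False by simp
      then show ?thesis using lower_unitri_ldu_F[of "EF_mat s"] by (simp add: lower_unitri_def C_mat_def)
    qed
  qed
qed

lemma E_mid_diag_G_conj: "mat_cong n (coeff_ideal Z) (mat_mult n (E_mid s) (diag_mat (G_series cp2 cm2 w2 s))) (mat_mult n (diag_mat (G_series cp2 cm2 w2 s)) (D_mat s))"
  unfolding mat_cong_def
proof (intro ballI)
  fix i j assume i: "i \<in> {1..n}" and j: "j \<in> {1..n}"
  let ?G = "G_series cp2 cm2 w2 s"
  have l: "mat_mult n (E_mid s) (diag_mat ?G) i j = E_mid s i j * ?G j" by (rule mat_mult_diag_right[OF j])
  have r: "mat_mult n (diag_mat ?G) (D_mat s) i j = ?G i * D_mat s i j" by (rule mat_mult_diag_left[OF i])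
  show "ideal_cong (coeff_ideal Z) (mat_mult n (E_mid s) (diag_mat ?G) i j) (mat_mult n (diag_mat ?G) (D_mat s) i j)"
    unfolding l r
  proof (cases "i = j")
    case True then show "ideal_cong (coeff_ideal Z) (E_mid s i j * ?G j) (?G i * D_mat s i j)"
      using upper_unitri_ldu_E[of "EF_mat s"] by (simp add: upper_unitri_def D_mat_def)
  next
    case False
    show "ideal_cong (coeff_ideal Z) (E_mid s i j * ?G j) (?G i * D_mat s i j)"
    proof (cases "i < j")
      case True
      have "ideal_cong (coeff_ideal Z) ((?G i * A2.G_inv s i) * (E_mid s i j * ?G j)) (1 * (E_mid s i j * ?G j))"
        by (rule ZF.ideal_cong_mult_right) (use A2.G_inv_inverse[OF i] in blast)
      then show ?thesis using True False by (simp add: D_mat_def mult.assoc ZF.ideal_cong_sym)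
    next
      case False2: False
      then have "j < i" using False by simp
      then show ?thesis using upper_unitri_ldu_E[of "EF_mat s"] by (simp add: upper_unitri_def D_mat_def)
    qed
  qed
qed

lemma F_series_mult_C_mat: "i \<in> {1..n} \<Longrightarrow> j \<in> {1..n} \<Longrightarrow> mat_mult n (F_series w1 s) (C_mat s) i j = F_delta s i j"
proof -
  assume i: "i \<in> {1..n}" and j: "j \<in> {1..n}"
  have F0: "F_series w1 s i k = 0" if "i < k" for k using lower_unitri_F_series[of w1 s] that by (auto simp: lower_unitri_def)
  have C0: "C_mat s k j = 0" if "k < j" for k using that by (simp add: C_mat_def)
  show ?thesis
  proof (cases "j < i")
    case True then show ?thesis by (simp add: F_delta_def)
  next
    case False
    have "mat_mult n (F_series w1 s) (C_mat s) i j = (\<Sum>k\<in>{1..n}. if k = i \<and> i = j then 1 else 0)"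
      unfolding mat_mult_def
    proof (rule sum.cong[OF HOL.refl])
      fix k assume k: "k \<in> {1..n}"
      show "F_series w1 s i k * C_mat s k j = (if k = i \<and> i = j then 1 else 0)"
      proof (cases "i < k")
        case True then show ?thesis by (simp add: F0)
      next
        case False2: False
        show ?thesis
        proof (cases "k < j")
          case True then show ?thesis by (auto simp: C0)
        next
          case False3: False
          then have "k = i" "i = j" using False False2 by auto
          then show ?thesis using lower_unitri_F_series[of w1 s] by (simp add: lower_unitri_def C_mat_def)
        qed
      qed
    qed
    also have "\<dots> = (if i = j then 1 else 0)" using i by (cases "i = j") auto
    finally show ?thesis using False by (simp add: F_delta_def)
  qed
qed

lemma D_mat_mult_E_series: "i \<in> {1..n} \<Longrightarrow> j \<in> {1..n} \<Longrightarrow> mat_mult n (D_mat s) (E_series w2 s) i j = E_delta s i j"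
proof -
  assume i: "i \<in> {1..n}" and j: "j \<in> {1..n}"
  have E0: "E_series w2 s k j = 0" if "j < k" for k using upper_unitri_E_series[of w2 s] that by (auto simp: upper_unitri_def)
  have D0: "D_mat s i k = 0" if "k < i" for k using that by (simp add: D_mat_def)
  show ?thesis
  proof (cases "i < j")
    case True then show ?thesis by (simp add: E_delta_def)
  next
    case False
    have "mat_mult n (D_mat s) (E_series w2 s) i j = (\<Sum>k\<in>{1..n}. if k = i \<and> i = j then 1 else 0)"
      unfolding mat_mult_def
    proof (rule sum.cong[OF HOL.refl])
      fix k assume k: "k \<in> {1..n}"
      show "D_mat s i k * E_series w2 s k j = (if k = i \<and> i = j then 1 else 0)"
      proof (cases "j < k")
        case True then show ?thesis by (simp add: E0)
      next
        case False2: False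
        show ?thesis
        proof (cases "k < i")
          case True then show ?thesis by (auto simp: D0)
        next
          case False3: False
          then have "k = i" "i = j" using False False2 by auto
          then show ?thesis using upper_unitri_E_series[of w2 s] by (simp add: upper_unitri_def D_mat_def)
        qed
      qed
    qed
    also have "\<dots> = (if i = j then 1 else 0)" using i by (cases "i = j") auto
    finally show ?thesis using False by (simp add: E_delta_def)
  qed
qed

lemma diag_G_product: "i \<in> {1..n} \<Longrightarrow> mat_mult n (diag_mat (G_series cp1 cm1 w1 s)) (mat_mult n (diag_mat (G_mid s)) (diag_mat (G_series cp2 cm2 w2 s))) i j = diag_mat (G_delta s) i j"
proof -
  assume i: "i \<in> {1..n}"
  have "mat_mult n (diag_mat (G_series cp1 cm1 w1 s)) (mat_mult n (diag_mat (G_mid s)) (diag_mat (G_series cp2 cm2 w2 s))) i j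
    = G_series cp1 cm1 w1 s i * mat_mult n (diag_mat (G_mid s)) (diag_mat (G_series cp2 cm2 w2 s)) i j" by (rule mat_mult_diag_left[OF i])
  also have "mat_mult n (diag_mat (G_mid s)) (diag_mat (G_series cp2 cm2 w2 s)) i j = diag_mat (\<lambda>l. G_mid s l * G_series cp2 cm2 w2 s l) i j"
    by (rule diag_mat_mult_diag[OF i])
  finally show ?thesis by (simp add: diag_mat_def G_delta_def mult.assoc)
qed

lemma mat_congI: "two_sided_ideal I \<Longrightarrow> (\<And>i j. i \<in> {1..n} \<Longrightarrow> j \<in> {1..n} \<Longrightarrow> A i j = B i j) \<Longrightarrow> mat_cong n I A B"
  by (simp add: mat_cong_def two_sided_ideal.ideal_cong_refl)

lemma T_prod_gauss:
  assumes ij: "i \<in> {1..n}" "j \<in> {1..n}"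
  shows "ideal_cong (coeff_ideal Z) (T_prod s i j) (ldu_entry (F_delta s) (G_delta s) (E_delta s) i j)"
proof -
  let ?F1 = "F_series w1 s" and ?D1 = "diag_mat (G_series cp1 cm1 w1 s)" and ?E1 = "E_series w1 s"
  let ?F2 = "F_series w2 s" and ?D2 = "diag_mat (G_series cp2 cm2 w2 s)" and ?E2 = "E_series w2 s"
  let ?P = "mat_mult n (mat_mult n ?F1 ?D1) ?E1" and ?Q = "mat_mult n (mat_mult n ?F2 ?D2) ?E2"
  let ?L = "mat_mult n (mat_mult n (F_mid s) (diag_mat (G_mid s))) (E_mid s)"
  let ?J = "coeff_ideal Z"
  have PT: "?P i u = A1.T_series s i u" if "u \<in> {1..n}" for u
    using mat_mult_ldu_entry[OF lower_unitri_F_series upper_unitri_E_series ij(1) that] by (simp add: A1.T_series_def)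
  have QT: "?Q u j = A2.T_series s u j" if "u \<in> {1..n}" for u
    using mat_mult_ldu_entry[OF lower_unitri_F_series upper_unitri_E_series that ij(2)] by (simp add: A2.T_series_def)
  have "T_prod s i j = mat_mult n ?P ?Q i j" unfolding T_prod_def mat_mult_def[of n ?P ?Q]
    by (rule sum.cong[OF HOL.refl]) (simp add: PT QT)
  also have "mat_mult n ?P ?Q = mat_mult n ?F1 (mat_mult n ?D1 (mat_mult n (EF_mat s) (mat_mult n ?D2 ?E2)))"
    by (simp only: mat_mult_assoc EF_mat_def)
  finally have e1: "T_prod s i j = mat_mult n ?F1 (mat_mult n ?D1 (mat_mult n (EF_mat s) (mat_mult n ?D2 ?E2))) i j" .
  have MLd: "mat_cong n ?J (EF_mat s) ?L"
    unfolding mat_cong_def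
  proof (intro ballI)
    fix a b assume "a \<in> {1..n}" "b \<in> {1..n}"
    then show "ideal_cong ?J (EF_mat s a b) (?L a b)"
      using EF_mat_ldu[of a b s] mat_mult_ldu_entry[OF lower_unitri_ldu_F upper_unitri_ldu_E, of a n b "EF_mat s" "G_mid s"]
      by (simp add: ZF.ideal_cong_sym)
  qed
  have "mat_cong n ?J (mat_mult n ?F1 (mat_mult n ?D1 (mat_mult n (EF_mat s) (mat_mult n ?D2 ?E2))))
                  (mat_mult n ?F1 (mat_mult n ?D1 (mat_mult n ?L (mat_mult n ?D2 ?E2))))"
    by (intro ZF.mat_cong_mult ZF.mat_cong_refl MLd)
  also have "mat_mult n ?F1 (mat_mult n ?D1 (mat_mult n ?L (mat_mult n ?D2 ?E2)))
      = mat_mult n ?F1 (mat_mult n (mat_mult n ?D1 (F_mid s)) (mat_mult n (diag_mat (G_mid s)) (mat_mult n (mat_mult n (E_mid s) ?D2) ?E2)))"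
    by (simp only: mat_mult_assoc)
  also have "mat_cong n ?J \<dots> (mat_mult n ?F1 (mat_mult n (mat_mult n (C_mat s) ?D1) (mat_mult n (diag_mat (G_mid s)) (mat_mult n (mat_mult n ?D2 (D_mat s)) ?E2))))"
    by (intro ZF.mat_cong_mult ZF.mat_cong_refl diag_G_F_mid_conj E_mid_diag_G_conj)
  also have "mat_mult n ?F1 (mat_mult n (mat_mult n (C_mat s) ?D1) (mat_mult n (diag_mat (G_mid s)) (mat_mult n (mat_mult n ?D2 (D_mat s)) ?E2)))
      = mat_mult n (mat_mult n ?F1 (C_mat s)) (mat_mult n (mat_mult n ?D1 (mat_mult n (diag_mat (G_mid s)) ?D2)) (mat_mult n (D_mat s) ?E2))"
    by (simp only: mat_mult_assoc)
  also have "mat_cong n ?J \<dots> (mat_mult n (F_delta s) (mat_mult n (diag_mat (G_delta s)) (E_delta s)))"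
    by (intro ZF.mat_cong_mult mat_congI[OF Z.two_sided_ideal_coeff_ideal]) (simp_all add: F_series_mult_C_mat D_mat_mult_E_series diag_G_product)
  also have "mat_mult n (F_delta s) (mat_mult n (diag_mat (G_delta s)) (E_delta s)) = mat_mult n (mat_mult n (F_delta s) (diag_mat (G_delta s))) (E_delta s)"
    by (simp only: mat_mult_assoc)
  finally have "mat_cong n ?J (mat_mult n ?F1 (mat_mult n ?D1 (mat_mult n (EF_mat s) (mat_mult n ?D2 ?E2)))) (mat_mult n (mat_mult n (F_delta s) (diag_mat (G_delta s))) (E_delta s))" .
  then have "ideal_cong ?J (T_prod s i j) (mat_mult n (mat_mult n (F_delta s) (diag_mat (G_delta s))) (E_delta s) i j)"
    using ij unfolding e1 mat_cong_def by blast
  then show ?thesis using mat_mult_ldu_entry[OF lower_unitri_F_delta upper_unitri_E_delta ij] by simp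
qed

abbreviation "cpB \<equiv> (\<lambda>i. cp1 i + cp2 i)"
abbreviation "cmB \<equiv> (\<lambda>i. cm1 i + cm2 i)"

lemma c_of_sum: "c_of cpB cmB s l = c_sum s l" by (simp add: c_of_def c_sum_def)

text \<open>On \<open>t\<close>-generators \<open>delta_gen\<close> is the truncated sum of \<open>delta_cond\<close>; the truncation at
  \<open>window_size m\<close> already contains all nonzero terms.\<close>

definition window_size :: "int \<Rightarrow> int" where "window_size m = \<bar>m\<bar> + N_bound"

definition delta_gen :: "gen \<Rightarrow> 'a" where
  "delta_gen x = (case x of
     TG s i j m \<Rightarrow> (\<Sum>k\<in>{1..n}. \<Sum>r\<in>{- window_size m..window_size m}. w1 (TG s i k r) * w2 (TG s k j (m - r)))
   | FG i l m \<Rightarrow> F_delta (0 < m) i l $$ orient (0 < m) m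
   | EG l j m \<Rightarrow> E_delta (0 \<le> m) l j $$ orient (0 \<le> m) m
   | GG s l m \<Rightarrow> G_delta s l $$ orient s m
   | GI s l \<Rightarrow> w2 (GI s l) * w1 (GI s l))"

lemma delta_gen_TG: "i \<in> {1..n} \<Longrightarrow> j \<in> {1..n} \<Longrightarrow> ideal_cong Z (delta_gen (TG s i j m)) (T_prod s i j $$ orient s m)"
  using T_prod_window[where N = "window_size m" and m = m and s = s] unfolding delta_gen_def by (simp add: window_size_def)

lemma F_series_delta_gen: "1 \<le> l \<Longrightarrow> i \<le> n \<Longrightarrow> F_series delta_gen s i l = F_delta s i l"
proof (rule fls_eqI)
  fix m assume l: "1 \<le> l" and i: "i \<le> n"
  show "F_series delta_gen s i l $$ m = F_delta s i l $$ m"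
  proof (cases "l < i")
    case True
    show ?thesis
    proof (cases "0 \<le> m \<and> (s \<longrightarrow> 0 < m)")
      case True2: True
      have "(0 < orient s m) = s" using True2 by (cases s) auto
      then show ?thesis using True True2 by (simp add: F_series_nth delta_gen_def)
    next
      case False
      have "vanishes_below (F_delta s i l) (ord_F s)" by (rule vanishes_below_F_delta) (use l i True in auto)
      moreover have "m < ord_F s" using False by (cases s) (auto simp: ord_F_def)
      ultimately have "F_delta s i l $$ m = 0" by (simp add: vanishes_below_def)
      moreover have "F_series delta_gen s i l $$ m = 0" unfolding F_series_nth using False True by auto
      ultimately show ?thesis by simp
    qed
  next
    case False
    then show ?thesis by (cases "l = i") (auto simp: F_series_nth F_delta_def)
  qed
qed

lemma E_series_delta_gen: "1 \<le> l \<Longrightarrow> j \<le> n \<Longrightarrow> E_series delta_gen s l j = E_delta s l j"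
proof (rule fls_eqI)
  fix m assume l: "1 \<le> l" and j: "j \<le> n"
  show "E_series delta_gen s l j $$ m = E_delta s l j $$ m"
  proof (cases "l < j")
    case True
    show ?thesis
    proof (cases "0 \<le> m \<and> (\<not> s \<longrightarrow> 0 < m)")
      case True2: True
      have "(0 \<le> orient s m) = s" using True2 by (cases s) auto
      then show ?thesis using True True2 by (simp add: E_series_nth delta_gen_def)
    next
      case False
      have "vanishes_below (E_delta s l j) (ord_E s)" by (rule vanishes_below_E_delta) (use l j True in auto)
      moreover have "m < ord_E s" using False by (cases s) (auto simp: ord_E_def)
      ultimately have "E_delta s l j $$ m = 0" by (simp add: vanishes_below_def)
      moreover have "E_series delta_gen s l j $$ m = 0" unfolding E_series_nth using False True by auto
      ultimately show ?thesis by simp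
    qed
  next
    case False
    then show ?thesis by (cases "l = j") (auto simp: E_series_nth E_delta_def)
  qed
qed

lemma G_series_delta_gen: "l \<in> {1..n} \<Longrightarrow> G_series cpB cmB delta_gen s l = G_delta s l"
proof (rule fls_eqI)
  fix m assume l: "l \<in> {1..n}"
  show "G_series cpB cmB delta_gen s l $$ m = G_delta s l $$ m"
    using vanishes_below_G_delta[OF l, of s] by (auto simp: G_series_nth c_of_sum delta_gen_def vanishes_below_def)
qed

lemma ldu_entry_delta_gen: "i \<in> {1..n} \<Longrightarrow> j \<in> {1..n} \<Longrightarrow>
   ldu_entry (F_series delta_gen s) (G_series cpB cmB delta_gen s) (E_series delta_gen s) i j = ldu_entry (F_delta s) (G_delta s) (E_delta s) i j"
  unfolding ldu_entry_def by (intro sum.cong HOL.refl) (simp add: F_series_delta_gen E_series_delta_gen G_series_delta_gen)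

lemma delta_gen_GI_inverse: "l \<in> {1..n} \<Longrightarrow>
   ideal_cong Z (G_delta s l $$ (- c_sum s l) * delta_gen (GI s l)) 1 \<and> ideal_cong Z (delta_gen (GI s l) * G_delta s l $$ (- c_sum s l)) 1"
  using Z.ideal_cong_inverse_mult[of "A1.G_lead s l" "w1 (GI s l)" "A2.G_lead s l" "w2 (GI s l)"] A1.G_lead_inverse A2.G_lead_inverse
  by (simp add: G_delta_lead delta_gen_def)

lemma delta_gen_respects_rels:
  assumes "(a, b) \<in> rtt_rels n cpB cmB"
  shows "ideal_cong Z (fexpr_eval sc delta_gen a) (fexpr_eval sc delta_gen b)"
  using assms unfolding rtt_rels_def
proof (elim UnE CollectE exE conjE)
  fix s s' i k j l a' b'
  assume e: "(a, b) = (rtt_lhs n s s' i k j l a' b', rtt_rhs n s s' i k j l a' b')"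
    and idx: "i \<in> {1..n}" "k \<in> {1..n}" "j \<in> {1..n}" "l \<in> {1..n}"
  have X: "ideal_cong Z (delta_gen (TG s p j m)) (coeff_fun T_prod s p j m)" if "p \<in> {1..n}" "j \<in> {1..n}" for s p j m
    using delta_gen_TG[OF that] by (simp add: coeff_fun_def)
  have "ideal_cong Z (rtt_lhs_val sc n (\<lambda>s i j m. delta_gen (TG s i j m)) s s' i k j l a' b') (rtt_lhs_val sc n (coeff_fun T_prod) s s' i k j l a' b')"
    by (rule Z.rtt_lhs_val_cong[OF X]) (use idx in auto)
  also have "ideal_cong Z \<dots> (rtt_rhs_val sc n (coeff_fun T_prod) s s' i k j l a' b')" by (rule rtt_T_prod[OF idx])
  also have "ideal_cong Z \<dots> (rtt_rhs_val sc n (\<lambda>s i j m. delta_gen (TG s i j m)) s s' i k j l a' b')"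
    by (rule Z.rtt_rhs_val_cong[OF Z.ideal_cong_sym[OF X]]) (use idx in auto)
  finally show ?thesis using e by (simp add: fexpr_eval_rtt_lhs[OF sc] fexpr_eval_rtt_rhs[OF sc])
next
  fix s i j m
  assume e: "(a, b) = (Gen (TG s i j m), gauss_coeff cpB cmB s i j m)" and ij: "i \<in> {1..n}" "j \<in> {1..n}"
  have "ideal_cong Z (delta_gen (TG s i j m)) (T_prod s i j $$ orient s m)" by (rule delta_gen_TG[OF ij])
  also have "ideal_cong Z \<dots> (ldu_entry (F_delta s) (G_delta s) (E_delta s) i j $$ orient s m)"
    using T_prod_gauss[OF ij, of s] by (simp add: ideal_cong_coeff_ideal_iff)
  finally show ?thesis using e ij by (simp add: fexpr_eval_gauss_coeff[OF sc] ldu_entry_delta_gen)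
next
  fix i assume e: "(a, b) = (Mul (Gen (GG True i (- cpB i))) (Gen (GI True i)), Sc 1)" and i: "i \<in> {1..n}"
  show ?thesis using e delta_gen_GI_inverse[OF i, of True] central_homD(4)[OF sc]
    by (simp add: delta_gen_def c_sum_def c_of_def)
next
  fix i assume e: "(a, b) = (Mul (Gen (GI True i)) (Gen (GG True i (- cpB i))), Sc 1)" and i: "i \<in> {1..n}"
  show ?thesis using e delta_gen_GI_inverse[OF i, of True] central_homD(4)[OF sc]
    by (simp add: delta_gen_def c_sum_def c_of_def)
next
  fix i assume e: "(a, b) = (Mul (Gen (GG False i (cmB i))) (Gen (GI False i)), Sc 1)" and i: "i \<in> {1..n}"
  show ?thesis using e delta_gen_GI_inverse[OF i, of False] central_homD(4)[OF sc]
    by (simp add: delta_gen_def c_sum_def c_of_def)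
next
  fix i assume e: "(a, b) = (Mul (Gen (GI False i)) (Gen (GG False i (cmB i))), Sc 1)" and i: "i \<in> {1..n}"
  show ?thesis using e delta_gen_GI_inverse[OF i, of False] central_homD(4)[OF sc]
    by (simp add: delta_gen_def c_sum_def c_of_def)
qed

context
  fixes v :: "gen \<Rightarrow> 'a"
  assumes V: "\<And>a b. (a, b) \<in> rtt_rels n cpB cmB \<Longrightarrow> ideal_cong Z (fexpr_eval sc v a) (fexpr_eval sc v b)"
    and VT: "\<And>s i j m. i \<in> {1..n} \<Longrightarrow> j \<in> {1..n} \<Longrightarrow> ideal_cong Z (v (TG s i j m)) (delta_gen (TG s i j m))"
begin

interpretation AV: rtt_model n cpB cmB Z sc v by (rule rtt_model.intro[OF Z sc]) (rule V)

lemma ldu_factors_unique: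
  assumes k: "k \<in> {1..n}"
  shows "ideal_cong (coeff_ideal Z) (G_series cpB cmB v s k) (G_delta s k)"
    and "i \<in> {k<..n} \<Longrightarrow> ideal_cong (coeff_ideal Z) (F_series v s i k) (F_delta s i k)"
    and "i \<in> {k<..n} \<Longrightarrow> ideal_cong (coeff_ideal Z) (E_series v s k i) (E_delta s k i)"
proof -
  have "ideal_cong (coeff_ideal Z) (G_series cpB cmB v s k) (G_delta s k) \<and>
      (\<forall>i\<in>{k<..n}. ideal_cong (coeff_ideal Z) (F_series v s i k) (F_delta s i k)
         \<and> ideal_cong (coeff_ideal Z) (E_series v s k i) (E_delta s k i))"
  proof (rule ldu_unique[OF Z.two_sided_ideal_coeff_ideal lower_unitri_F_series lower_unitri_F_delta
        upper_unitri_E_series upper_unitri_E_delta _ _ k])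
    fix l assume l: "l \<in> {1..n}"
    have "ideal_cong Z (delta_gen (GI s l) * G_delta s l $$ (- c_sum s l)) 1"
      "ideal_cong Z (G_delta s l $$ (- c_sum s l) * delta_gen (GI s l)) 1"
      using delta_gen_GI_inverse[OF l] by auto
    from Z.fls_rinv_inverse[OF vanishes_below_G_delta[OF l] this]
    show "\<exists>h. ideal_cong (coeff_ideal Z) (G_delta s l * h) 1 \<and> ideal_cong (coeff_ideal Z) (h * G_delta s l) 1"
      by blast
  next
    fix i j assume ij: "i \<in> {1..n}" "j \<in> {1..n}"
    show "ideal_cong (coeff_ideal Z) (ldu_entry (F_series v s) (G_series cpB cmB v s) (E_series v s) i j)
        (ldu_entry (F_delta s) (G_delta s) (E_delta s) i j)"
      unfolding ideal_cong_coeff_ideal_iff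
    proof
      fix m
      have "ideal_cong Z (ldu_entry (F_series v s) (G_series cpB cmB v s) (E_series v s) i j $$ m)
          (v (TG s i j (orient s m)))"
        using AV.TG_cong[OF ij, of s "orient s m"] by (simp add: AV.T_series_def Z.ideal_cong_sym)
      also have "ideal_cong Z \<dots> (delta_gen (TG s i j (orient s m)))" by (rule VT[OF ij])
      also have "ideal_cong Z \<dots> (T_prod s i j $$ m)" using delta_gen_TG[OF ij, of s "orient s m"] by simp
      also have "ideal_cong Z \<dots> (ldu_entry (F_delta s) (G_delta s) (E_delta s) i j $$ m)"
        using T_prod_gauss[OF ij, of s] by (simp add: ideal_cong_coeff_ideal_iff)
      finally show "ideal_cong Z (ldu_entry (F_series v s) (G_series cpB cmB v s) (E_series v s) i j $$ m)
          (ldu_entry (F_delta s) (G_delta s) (E_delta s) i j $$ m)" .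
    qed
  qed
  then show "ideal_cong (coeff_ideal Z) (G_series cpB cmB v s k) (G_delta s k)"
    and "i \<in> {k<..n} \<Longrightarrow> ideal_cong (coeff_ideal Z) (F_series v s i k) (F_delta s i k)"
    and "i \<in> {k<..n} \<Longrightarrow> ideal_cong (coeff_ideal Z) (E_series v s k i) (E_delta s k i)"
    by blast+
qed

lemma delta_gen_unique:
  assumes x: "x \<in> rtt_gens n cpB cmB"
  shows "ideal_cong Z (v x) (delta_gen x)"
proof -
  note LDU = ldu_factors_unique
  have GG: "ideal_cong Z (v (GG s i (orient s m))) (G_delta s i $$ m)"
    if i: "i \<in> {1..n}" and m: "- c_sum s i \<le> m" for s i m
  proof -
    have "ideal_cong Z (G_series cpB cmB v s i $$ m) (G_delta s i $$ m)"
      using LDU(1)[OF i, of s] by (simp add: ideal_cong_coeff_ideal_iff)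
    then show ?thesis using m by (simp add: G_series_nth c_of_sum)
  qed
  show ?thesis
    using x unfolding rtt_gens_def
  proof (elim UnE CollectE exE conjE)
    fix s i j m assume "x = TG s i j m" "i \<in> {1..n}" "j \<in> {1..n}"
    then show ?thesis using VT by simp
  next
    fix i j r assume e: "x = EG i j r" and ij: "1 \<le> i" "i < j" "j \<le> n"
    let ?s = "0 \<le> r"
    have "ideal_cong Z (E_series v ?s i j $$ orient ?s r) (E_delta ?s i j $$ orient ?s r)"
      using LDU(3)[of i j ?s] ij by (simp add: ideal_cong_coeff_ideal_iff)
    moreover have "E_series v ?s i j $$ orient ?s r = v (EG i j r)" using ij by (auto simp: E_series_nth orient_def)
    ultimately show ?thesis using e by (simp add: delta_gen_def)
  next
    fix j i r assume e: "x = FG j i r" and ij: "1 \<le> i" "i < j" "j \<le> n"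
    let ?s = "0 < r"
    have "ideal_cong Z (F_series v ?s j i $$ orient ?s r) (F_delta ?s j i $$ orient ?s r)"
      using LDU(2)[of i j ?s] ij by (simp add: ideal_cong_coeff_ideal_iff)
    moreover have "F_series v ?s j i $$ orient ?s r = v (FG j i r)" using ij by (auto simp: F_series_nth orient_def)
    ultimately show ?thesis using e by (simp add: delta_gen_def)
  next
    fix i m assume "x = GG True i m" "i \<in> {1..n}" "- cpB i \<le> m"
    then show ?thesis using GG[where s=True and i=i and m=m] by (simp add: delta_gen_def c_sum_def c_of_def)
  next
    fix i m assume "x = GG False i m" "i \<in> {1..n}" "m \<le> cmB i"
    then show ?thesis using GG[where s=False and i=i and m="- m"] by (simp add: delta_gen_def c_sum_def c_of_def)
  next
    fix s i assume e: "x = GI s i" and i: "i \<in> {1..n}"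
    have "ideal_cong Z (AV.G_lead s i) (G_delta s i $$ (- c_sum s i))"
      unfolding AV.G_lead_def using GG[OF i, where s=s and m="- c_sum s i"] by (simp add: c_of_sum)
    with delta_gen_GI_inverse[OF i] AV.G_lead_inverse[OF i]
    show ?thesis using e by (blast intro: Z.ideal_cong_inverse_unique)
  qed
qed

end

end

lemma tens_rels_gens:
  assumes "(a, b) \<in> tens_rels X1 RR1 X2 RR2"
    and h1: "\<And>a b. (a, b) \<in> RR1 \<Longrightarrow> gens a \<subseteq> X1 \<and> gens b \<subseteq> X1"
    and h2: "\<And>a b. (a, b) \<in> RR2 \<Longrightarrow> gens a \<subseteq> X2 \<and> gens b \<subseteq> X2"
  shows "gens a \<subseteq> tens_gens X1 X2 \<and> gens b \<subseteq> tens_gens X1 X2"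
  using assms(1) unfolding tens_rels_def tens_gens_def
proof (elim UnE imageE CollectE exE conjE)
  fix p assume p: "p \<in> RR1" "(a, b) = (case p of (a, b) \<Rightarrow> (map_fexpr Inl a, map_fexpr Inl b))"
  obtain a' b' where pp: "p = (a', b')" by (cases p)
  have "gens a' \<subseteq> X1" "gens b' \<subseteq> X1" using h1[of a' b'] p(1) pp by auto
  then show "gens a \<subseteq> Inl ` X1 \<union> Inr ` X2 \<and> gens b \<subseteq> Inl ` X1 \<union> Inr ` X2"
    using p(2) pp by (auto simp: gens_map)
next
  fix p assume p: "p \<in> RR2" "(a, b) = (case p of (a, b) \<Rightarrow> (map_fexpr Inr a, map_fexpr Inr b))"
  obtain a' b' where pp: "p = (a', b')" by (cases p)
  have "gens a' \<subseteq> X2" "gens b' \<subseteq> X2" using h2[of a' b'] p(1) pp by auto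
  then show "gens a \<subseteq> Inl ` X1 \<union> Inr ` X2 \<and> gens b \<subseteq> Inl ` X1 \<union> Inr ` X2"
    using p(2) pp by (auto simp: gens_map)
qed auto

lemma fexpr_eval_delta_esum:
  "fexpr_eval free_scalar free_gen (esum [Mul (Gen (Inl (TG s i k r))) (Gen (Inr (TG s k j (m - r)))).
                    k \<leftarrow> [1..<Suc n], r \<leftarrow> [-N..N]])
   = (\<Sum>k\<in>{1..n}. \<Sum>r\<in>{-N..N}. free_gen (Inl (TG s i k r)) * free_gen (Inr (TG s k j (m - r))))"
proof -
  have z: "free_scalar 0 = 0" by (rule central_homD(3)[OF central_hom_free_scalar])
  show ?thesis unfolding fexpr_eval_esum[of free_scalar, OF z]
    by (simp add: sum_list_concat' map_concat comp_def sum_list_map_upt sum_list_map_upto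
        atLeastLessThanSuc_atLeastAtMost del: upt_Suc)
qed

lemma tens_rels_Inl: "(a, b) \<in> R1 \<Longrightarrow> (map_fexpr Inl a, map_fexpr Inl b) \<in> tens_rels X1 R1 X2 R2"
  unfolding tens_rels_def by (intro UnI1) (auto intro: rev_image_eqI)

lemma tens_rels_Inr: "(a, b) \<in> R2 \<Longrightarrow> (map_fexpr Inr a, map_fexpr Inr b) \<in> tens_rels X1 R1 X2 R2"
  unfolding tens_rels_def by (intro UnI1 UnI2) (auto intro: rev_image_eqI)

lemma tens_rels_commute:
  "x \<in> X1 \<Longrightarrow> y \<in> X2 \<Longrightarrow> (Mul (Gen (Inl x)) (Gen (Inr y)), Mul (Gen (Inr y)) (Gen (Inl x))) \<in> tens_rels X1 R1 X2 R2"
  unfolding tens_rels_def by (intro UnI2) blast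

locale rtt_tensor =
  fixes n :: nat and cp1 cm1 cp2 cm2 :: "nat \<Rightarrow> int"
  assumes dominant: "dominant n cp1" "dominant n cm1" "dominant n cp2" "dominant n cm2"
begin

abbreviation "src_gens \<equiv> rtt_gens n (\<lambda>i. cp1 i + cp2 i) (\<lambda>i. cm1 i + cm2 i)"
abbreviation "src_rels \<equiv> rtt_rels n (\<lambda>i. cp1 i + cp2 i) (\<lambda>i. cm1 i + cm2 i)"
abbreviation "tgt_gens \<equiv> tens_gens (rtt_gens n cp1 cm1) (rtt_gens n cp2 cm2)"
abbreviation "tgt_rels \<equiv> tens_rels (rtt_gens n cp1 cm1) (rtt_rels n cp1 cm1) (rtt_gens n cp2 cm2) (rtt_rels n cp2 cm2)"

lemma tgt_rels_gens: "(a, b) \<in> tgt_rels \<Longrightarrow> gens a \<subseteq> tgt_gens \<and> gens b \<subseteq> tgt_gens"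
  by (rule tens_rels_gens) (auto dest: rtt_rels_gens)

sublocale M: coproduct_model n cp1 cm1 cp2 cm2 "rel_ideal tgt_rels" free_scalar
  "\<lambda>x. free_gen (Inl x)" "\<lambda>x. free_gen (Inr x)"
proof (rule coproduct_model.intro[OF two_sided_ideal_rel_ideal central_hom_free_scalar dominant])
  fix a b assume "(a, b) \<in> rtt_rels n cp1 cm1"
  then have "eqv tgt_rels (map_fexpr Inl a) (map_fexpr Inl b)" by (intro eqv.rel tens_rels_Inl)
  then show "ideal_cong (rel_ideal tgt_rels) (fexpr_eval free_scalar (\<lambda>x. free_gen (Inl x)) a)
      (fexpr_eval free_scalar (\<lambda>x. free_gen (Inl x)) b)"
    by (simp add: ideal_cong_abs_iff[symmetric] abs_free_alg_map)
next
  fix a b assume "(a, b) \<in> rtt_rels n cp2 cm2"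
  then have "eqv tgt_rels (map_fexpr Inr a) (map_fexpr Inr b)" by (intro eqv.rel tens_rels_Inr)
  then show "ideal_cong (rel_ideal tgt_rels) (fexpr_eval free_scalar (\<lambda>x. free_gen (Inr x)) a)
      (fexpr_eval free_scalar (\<lambda>x. free_gen (Inr x)) b)"
    by (simp add: ideal_cong_abs_iff[symmetric] abs_free_alg_map)
next
  fix x y assume "x \<in> rtt_gens n cp1 cm1" "y \<in> rtt_gens n cp2 cm2"
  then have "eqv tgt_rels (Mul (Gen (Inl x)) (Gen (Inr y))) (Mul (Gen (Inr y)) (Gen (Inl x)))"
    by (intro eqv.rel tens_rels_commute)
  then show "ideal_cong (rel_ideal tgt_rels) (free_gen (Inl x) * free_gen (Inr y)) (free_gen (Inr y) * free_gen (Inl x))"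
    by (simp add: ideal_cong_abs_iff[symmetric] free_gen_def times_free_alg.abs_eq)
qed

interpretation Z: two_sided_ideal "rel_ideal tgt_rels" by (rule two_sided_ideal_rel_ideal)

lemma restrict_alg_cong_tgt:
  "ideal_cong (rel_ideal tgt_rels) x y \<Longrightarrow> ideal_cong (rel_ideal tgt_rels) (restrict_alg tgt_gens x) (restrict_alg tgt_gens y)"
  by (rule restrict_alg_cong[OF tgt_rels_gens])

text \<open>\<open>M.delta_gen\<close> lives in the quotient ring; \<open>delta\<close> picks a representative and deletes
  the generators outside \<open>tgt_gens\<close>.\<close>

definition delta :: "gen \<Rightarrow> (gen + gen) fexpr" where
  "delta x = subst (restrict_gen tgt_gens) (rep_free_alg (M.delta_gen x))"

lemma abs_delta: "abs_free_alg (delta x) = restrict_alg tgt_gens (M.delta_gen x)"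
  unfolding delta_def using restrict_alg_abs[of tgt_gens "rep_free_alg (M.delta_gen x)"]
  by (simp add: abs_rep_free_alg)

lemma abs_delta_TG:
  assumes "i \<in> {1..n}" "j \<in> {1..n}"
  shows "abs_free_alg (delta (TG s i j m)) = M.delta_gen (TG s i j m)"
proof -
  have fix1: "restrict_alg tgt_gens (free_gen (Inl x)) = free_gen (Inl x)" if "x \<in> rtt_gens n cp1 cm1" for x
    by (rule restrict_alg_free_gen) (use that in \<open>simp add: tens_gens_def\<close>)
  have fix2: "restrict_alg tgt_gens (free_gen (Inr x)) = free_gen (Inr x)" if "x \<in> rtt_gens n cp2 cm2" for x
    by (rule restrict_alg_free_gen) (use that in \<open>simp add: tens_gens_def\<close>)
  show ?thesis
    unfolding abs_delta M.delta_gen_def using assms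
    by (simp add: restrict_alg_sum restrict_alg_mult fix1 fix2 TG_in)
qed

lemma delta_window:
  assumes "i \<in> {1..n}" "j \<in> {1..n}" "M.window_size m \<le> N"
  shows "ideal_cong (rel_ideal tgt_rels)
    (abs_free_alg (esum [Mul (Gen (Inl (TG s i k r))) (Gen (Inr (TG s k j (m - r)))). k \<leftarrow> [1..<Suc n], r \<leftarrow> [-N..N]]))
    (M.delta_gen (TG s i j m))"
proof -
  have "ideal_cong (rel_ideal tgt_rels)
      (abs_free_alg (esum [Mul (Gen (Inl (TG s i k r))) (Gen (Inr (TG s k j (m - r)))). k \<leftarrow> [1..<Suc n], r \<leftarrow> [-N..N]]))
      (M.T_prod s i j $$ orient s m)"
    unfolding abs_free_alg_eq_eval fexpr_eval_delta_esum
    by (rule M.T_prod_window) (use assms in \<open>simp_all add: M.window_size_def\<close>)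
  also have "ideal_cong (rel_ideal tgt_rels) \<dots> (M.delta_gen (TG s i j m))"
    by (rule Z.ideal_cong_sym[OF M.delta_gen_TG]) (use assms in auto)
  finally show ?thesis .
qed

lemma is_hom_delta: "is_hom src_gens src_rels tgt_gens tgt_rels delta"
  unfolding is_hom_def
proof (intro conjI ballI)
  fix x show "gens (delta x) \<subseteq> tgt_gens"
    unfolding delta_def by (rule gens_subst_restrict_gen)
next
  fix p assume p: "p \<in> src_rels"
  obtain a b where ab: "p = (a, b)" by (cases p)
  have "ideal_cong (rel_ideal tgt_rels) (restrict_alg tgt_gens (fexpr_eval free_scalar M.delta_gen a))
      (restrict_alg tgt_gens (fexpr_eval free_scalar M.delta_gen b))"
    by (rule restrict_alg_cong_tgt[OF M.delta_gen_respects_rels]) (use p ab in simp)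
  then have "eqv tgt_rels (subst delta a) (subst delta b)"
    by (simp add: ideal_cong_abs_iff[symmetric] abs_free_alg_subst abs_delta restrict_alg_eval)
  then show "case p of (a, b) \<Rightarrow> eqv tgt_rels (subst delta a) (subst delta b)" using ab by simp
qed

lemma delta_cond_delta: "delta_cond n tgt_rels delta"
  unfolding delta_cond_def
proof (intro allI impI)
  fix s i j m assume ij: "i \<in> {1..n} \<and> j \<in> {1..n}"
  show "\<exists>N0. \<forall>N\<ge>N0. eqv tgt_rels (delta (TG s i j m))
      (esum [Mul (Gen (Inl (TG s i k r))) (Gen (Inr (TG s k j (m - r)))). k \<leftarrow> [1..<Suc n], r \<leftarrow> [-N..N]])"
  proof (intro exI allI impI)
    fix N assume "M.window_size m \<le> N"
    then show "eqv tgt_rels (delta (TG s i j m))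
        (esum [Mul (Gen (Inl (TG s i k r))) (Gen (Inr (TG s k j (m - r)))). k \<leftarrow> [1..<Suc n], r \<leftarrow> [-N..N]])"
      using Z.ideal_cong_sym[OF delta_window] ij
      by (simp add: ideal_cong_abs_iff[symmetric] abs_delta_TG)
  qed
qed

lemma delta_unique:
  assumes hom: "is_hom src_gens src_rels tgt_gens tgt_rels \<psi>" and cond: "delta_cond n tgt_rels \<psi>"
    and x: "x \<in> src_gens"
  shows "eqv tgt_rels (\<psi> x) (delta x)"
proof -
  let ?v = "\<lambda>x. abs_free_alg (\<psi> x)"
  have rels: "ideal_cong (rel_ideal tgt_rels) (fexpr_eval free_scalar ?v a) (fexpr_eval free_scalar ?v b)"
    if "(a, b) \<in> src_rels" for a b
  proof -
    have "eqv tgt_rels (subst \<psi> a) (subst \<psi> b)" using hom that unfolding is_hom_def by fast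
    then show ?thesis by (simp add: ideal_cong_abs_iff[symmetric] abs_free_alg_subst)
  qed
  have TG: "ideal_cong (rel_ideal tgt_rels) (?v (TG s i j m)) (M.delta_gen (TG s i j m))"
    if ij: "i \<in> {1..n}" "j \<in> {1..n}" for s i j m
  proof -
    obtain N0 where N0: "\<forall>N\<ge>N0. eqv tgt_rels (\<psi> (TG s i j m))
        (esum [Mul (Gen (Inl (TG s i k r))) (Gen (Inr (TG s k j (m - r)))). k \<leftarrow> [1..<Suc n], r \<leftarrow> [-N..N]])"
      using cond ij unfolding delta_cond_def by blast
    let ?N = "max N0 (M.window_size m)"
    have "ideal_cong (rel_ideal tgt_rels) (?v (TG s i j m))
        (abs_free_alg (esum [Mul (Gen (Inl (TG s i k r))) (Gen (Inr (TG s k j (m - r)))). k \<leftarrow> [1..<Suc n], r \<leftarrow> [-?N..?N]]))"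
      using N0 by (simp add: ideal_cong_abs_iff)
    also have "ideal_cong (rel_ideal tgt_rels) \<dots> (M.delta_gen (TG s i j m))"
      by (rule delta_window[OF ij]) simp
    finally show ?thesis .
  qed
  have "restrict_alg tgt_gens (?v x) = ?v x"
    by (rule restrict_alg_abs_id) (use hom x in \<open>auto simp: is_hom_def\<close>)
  then have "ideal_cong (rel_ideal tgt_rels) (?v x) (restrict_alg tgt_gens (M.delta_gen x))"
    using restrict_alg_cong_tgt[OF M.delta_gen_unique[OF rels TG x]] by simp
  then show ?thesis by (simp add: ideal_cong_abs_iff[symmetric] abs_delta)
qed

end

theorem proposition3p34:
  fixes n :: nat and cp1 cm1 cp2 cm2 :: "nat \<Rightarrow> int"
  assumes "2 \<le> n"
    and "dominant n cp1" and "dominant n cm1" and "dominant n cp2" and "dominant n cm2"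
  shows "\<exists>\<phi>. is_hom (rtt_gens n (\<lambda>i. cp1 i + cp2 i) (\<lambda>i. cm1 i + cm2 i))
                    (rtt_rels n (\<lambda>i. cp1 i + cp2 i) (\<lambda>i. cm1 i + cm2 i))
                    (tens_gens (rtt_gens n cp1 cm1) (rtt_gens n cp2 cm2))
                    (tens_rels (rtt_gens n cp1 cm1) (rtt_rels n cp1 cm1)
                               (rtt_gens n cp2 cm2) (rtt_rels n cp2 cm2)) \<phi>
           \<and> delta_cond n (tens_rels (rtt_gens n cp1 cm1) (rtt_rels n cp1 cm1)
                               (rtt_gens n cp2 cm2) (rtt_rels n cp2 cm2)) \<phi>
           \<and> (\<forall>\<psi>. is_hom (rtt_gens n (\<lambda>i. cp1 i + cp2 i) (\<lambda>i. cm1 i + cm2 i))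
                    (rtt_rels n (\<lambda>i. cp1 i + cp2 i) (\<lambda>i. cm1 i + cm2 i))
                    (tens_gens (rtt_gens n cp1 cm1) (rtt_gens n cp2 cm2))
                    (tens_rels (rtt_gens n cp1 cm1) (rtt_rels n cp1 cm1)
                               (rtt_gens n cp2 cm2) (rtt_rels n cp2 cm2)) \<psi>
                 \<and> delta_cond n (tens_rels (rtt_gens n cp1 cm1) (rtt_rels n cp1 cm1)
                               (rtt_gens n cp2 cm2) (rtt_rels n cp2 cm2)) \<psi>
                 \<longrightarrow> (\<forall>x\<in>rtt_gens n (\<lambda>i. cp1 i + cp2 i) (\<lambda>i. cm1 i + cm2 i).
                        eqv (tens_rels (rtt_gens n cp1 cm1) (rtt_rels n cp1 cm1)
                               (rtt_gens n cp2 cm2) (rtt_rels n cp2 cm2)) (\<psi> x) (\<phi> x)))"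
proof -
  interpret rtt_tensor n cp1 cm1 cp2 cm2
    by unfold_locales (use assms in auto)
  show ?thesis using is_hom_delta delta_cond_delta delta_unique by blast
qed

end
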